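(* Let $G/P\hookrightarrow\mathbb P\mathfrak g$ be the adjoint variety of a complex simple Lie algebra $\mathfrak g$, with associated grading element $E$, and let $U$ be an irreducible $\mathfrak g$-representation of highest weight $\lambda$ (simple roots and fundamental weights $\omega_i$ numbered as in Bourbaki). Then $\lambda(E)=1$ if and only if $\lambda$ is among the following: (a) $\mathfrak g=\mathfrak{sl}_{r+1}\mathbb C$, $E=S^1+S^r$: $\lambda=\omega_i$ for any $1\le i\le r$ (so $U=\bigwedge^i\mathbb C^{r+1}$); (b) $\mathfrak g=\mathfrak{so}_{2r+1}\mathbb C$, $E=S^2$: $\lambda=\omega_1$ (standard representation) or $\lambda=\omega_r$ (spin representation); (c) $\mathfrak g=\mathfrak{sp}_{2r}\mathbb C$, $E=S^1$: $\lambda=\omega_i$ for any $1\le i\le r$; (d) $\mathfrak g=\mathfrak{so}_{2r}\mathbb C$, $E=S^2$: $\lambda=\omega_1$ (standard representation) or $\lambda=\omega_{r-1},\omega_r$ (spin representations); (e) $\mathfrak g=\mathfrak e_6$, $E=S^2$: $\lambda=\omega_1,\omega_6$; $\mathfrak g=\mathfrak e_7$, $E=S^1$: $\lambda=\omega_7$; for $\mathfrak g=\mathfrak e_8$, $E=S^8$, one has $\lambda(E)>1$ for all (nonzero) $\lambda$; (f) $\mathfrak g=\mathfrak f_4$, $E=S^1$: $\lambda=\omega_4$; (g) $\mathfrak g=\mathfrak g_2$, $E=S^2$: $\lambda=\omega_1$ ($U=\mathbb C^7$ the standard representation). Moreover, in each of these cases one also has $\lambda^*(E)=1$, where $\lambda^*$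 is the highest weight of the dual representation $U^*$.
   Context: The adjoint variety of $\mathfrak g$ is the $G$-orbit ($G$ the adjoint group) of the highest root line $[\mathfrak g^{\tilde\alpha}]\in\mathbb P\mathfrak g$, written $G/P$; its grading element is $E=\sum_{i\in I}S^i$ where $\tilde\alpha=\sum_{i\in I}\omega_i$ and $S^1,\dots,S^r$ is the basis of the Cartan subalgebra dual to the simple roots $\alpha_1,\dots,\alpha_r$ (i.e. $\alpha_i(S^j)=\delta_i^j$). *)

theory Defs
  imports Complex_Main
begin

text \<open>Simple Lie algebras are encoded by their Cartan type and rank, with the
Bourbaki numbering of simple roots.  Type E with rank 6, 7, 8 gives e6, e7, e8.\<close>

datatype ltype = TA | TB | TC | TD | TE | TF | TG

definition valid_type :: "ltype \<Rightarrow> nat \<Rightarrow> bool" where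
  "valid_type t r = (case t of
      TA \<Rightarrow> r \<ge> 2 | TB \<Rightarrow> r \<ge> 2 | TC \<Rightarrow> r \<ge> 2 | TD \<Rightarrow> r \<ge> 4
    | TE \<Rightarrow> r \<in> {6,7,8} | TF \<Rightarrow> r = 4 | TG \<Rightarrow> r = 2)"

definition adj :: "nat \<Rightarrow> nat \<Rightarrow> nat \<Rightarrow> nat \<Rightarrow> bool" where
  "adj a b i j = ((i = a \<and> j = b) \<or> (i = b \<and> j = a))"

text \<open>cartan t r i j is the Cartan integer < alpha_j , alpha_i^vee >
  (for 1 <= i, j <= r), Bourbaki numbering.\<close>
definition cartan :: "ltype \<Rightarrow> nat \<Rightarrow> nat \<Rightarrow> nat \<Rightarrow> int" where
  "cartan t r i j =
    (if i = j then 2 else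
     (case t of
        TA \<Rightarrow> (if i = j + 1 \<or> j = i + 1 then -1 else 0)
      | TB \<Rightarrow> (if i = r \<and> j = r - 1 then -2
               else if i = j + 1 \<or> j = i + 1 then -1 else 0)
      | TC \<Rightarrow> (if i = r - 1 \<and> j = r then -2
               else if i = j + 1 \<or> j = i + 1 then -1 else 0)
      | TD \<Rightarrow> (if ((i = j + 1 \<or> j = i + 1) \<and> i \<le> r - 1 \<and> j \<le> r - 1)
                  \<or> adj (r - 2) r i j then -1 else 0)
      | TE \<Rightarrow> (if adj 1 3 i j \<or> adj 3 4 i j \<or> adj 4 5 i j \<or> adj 5 6 i j
                  \<or> adj 6 7 i j \<or> adj 7 8 i j \<or> adj 2 4 i j then -1 else 0)
      | TF \<Rightarrow> (if i = 3 \<and> j = 2 then -2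
               else if adj 1 2 i j \<or> adj 2 3 i j \<or> adj 3 4 i j then -1 else 0)
      | TG \<Rightarrow> (if i = 1 \<and> j = 2 then -3
               else if i = 2 \<and> j = 1 then -1 else 0)))"

text \<open>Indicator vector: the simple root alpha_i in root coordinates, or the
  fundamental weight omega_i in Dynkin-label coordinates.\<close>
definition unitv :: "nat \<Rightarrow> nat \<Rightarrow> int" where
  "unitv i = (\<lambda>j. if j = i then 1 else 0)"

text \<open>Root system, in coordinates w.r.t. the simple roots: the orbit of the
  simple roots under the simple reflections
  s_i(beta) = beta - <beta, alpha_i^vee> alpha_i.\<close>
definition refl_root :: "ltype \<Rightarrow> nat \<Rightarrow> nat \<Rightarrow> (nat \<Rightarrow> int) \<Rightarrow> (nat \<Rightarrow> int)" where
  "refl_root t r i \<beta> =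
     (\<lambda>k. \<beta> k - (\<Sum>j\<in>{1..r}. \<beta> j * cartan t r i j) * unitv i k)"

inductive_set roots :: "ltype \<Rightarrow> nat \<Rightarrow> (nat \<Rightarrow> int) set" for t r where
  simple: "i \<in> {1..r} \<Longrightarrow> unitv i \<in> roots t r"
| refl: "\<beta> \<in> roots t r \<Longrightarrow> i \<in> {1..r} \<Longrightarrow> refl_root t r i \<beta> \<in> roots t r"

definition highest_root :: "ltype \<Rightarrow> nat \<Rightarrow> (nat \<Rightarrow> int)" where
  "highest_root t r = (THE \<theta>. \<theta> \<in> roots t r \<and> (\<forall>\<beta>\<in>roots t r. \<forall>j. \<beta> j \<le> \<theta> j))"

text \<open>Dynkin label < beta, alpha_i^vee > of an element given in root coordinates.\<close>
definition label :: "ltype \<Rightarrow> nat \<Rightarrow> (nat \<Rightarrow> int) \<Rightarrow> nat \<Rightarrow> int" where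
  "label t r \<beta> i = (\<Sum>j\<in>{1..r}. \<beta> j * cartan t r i j)"

text \<open>The index set I of the grading element E = sum_{i in I} S^i: the
  support of the highest root written in fundamental weights.\<close>
definition grading_set :: "ltype \<Rightarrow> nat \<Rightarrow> nat set" where
  "grading_set t r = {i \<in> {1..r}. label t r (highest_root t r) i \<noteq> 0}"

text \<open>Weights are given by their Dynkin labels (coefficients w.r.t. the
  fundamental weights).  Dominant integral weights = highest weights of
  irreducible finite-dimensional representations.\<close>
definition dominant :: "nat \<Rightarrow> (nat \<Rightarrow> int) \<Rightarrow> bool" where
  "dominant r c = (\<forall>i. (i \<in> {1..r} \<longrightarrow> c i \<ge> 0) \<and> (i \<notin> {1..r} \<longrightarrow> c i = 0))"

text \<open>Coordinates of a weight (given by Dynkin labels) w.r.t. the simple roots.\<close>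
definition root_coords :: "ltype \<Rightarrow> nat \<Rightarrow> (nat \<Rightarrow> int) \<Rightarrow> (nat \<Rightarrow> real)" where
  "root_coords t r c = (THE x. (\<forall>j. j \<notin> {1..r} \<longrightarrow> x j = 0) \<and>
      (\<forall>i\<in>{1..r}. (\<Sum>j\<in>{1..r}. x j * of_int (cartan t r i j)) = of_int (c i)))"

text \<open>lambda(E) = sum_{i in I} lambda(S^i), where lambda(S^i) is the
  alpha_i-coordinate of lambda.\<close>
definition eval_E :: "ltype \<Rightarrow> nat \<Rightarrow> (nat \<Rightarrow> int) \<Rightarrow> real" where
  "eval_E t r c = (\<Sum>i\<in>grading_set t r. root_coords t r c i)"

text \<open>Simple reflections on weights in Dynkin-label coordinates:
  s_i(mu) = mu - mu_i alpha_i, with (alpha_i)_k = < alpha_i, alpha_k^vee >.\<close>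
definition refl_wt :: "ltype \<Rightarrow> nat \<Rightarrow> nat \<Rightarrow> (nat \<Rightarrow> int) \<Rightarrow> (nat \<Rightarrow> int)" where
  "refl_wt t r i \<mu> = (\<lambda>k. \<mu> k - \<mu> i * (if k \<in> {1..r} then cartan t r k i else 0))"

inductive_set weyl_orbit :: "ltype \<Rightarrow> nat \<Rightarrow> (nat \<Rightarrow> int) \<Rightarrow> (nat \<Rightarrow> int) set"
  for t r \<mu> where
  base: "\<mu> \<in> weyl_orbit t r \<mu>"
| refl: "\<nu> \<in> weyl_orbit t r \<mu> \<Longrightarrow> i \<in> {1..r} \<Longrightarrow> refl_wt t r i \<nu> \<in> weyl_orbit t r \<mu>"

text \<open>Highest weight of the dual representation: lambda^* = - w_0 lambda,
  the unique dominant weight in the Weyl orbit of - lambda.\<close>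
definition dual_hw :: "ltype \<Rightarrow> nat \<Rightarrow> (nat \<Rightarrow> int) \<Rightarrow> (nat \<Rightarrow> int)" where
  "dual_hw t r c = (THE \<nu>. \<nu> \<in> weyl_orbit t r (\<lambda>k. - c k) \<and> dominant r \<nu>)"

definition expected_I :: "ltype \<Rightarrow> nat \<Rightarrow> nat set" where
  "expected_I t r = (case t of
      TA \<Rightarrow> {1, r} | TB \<Rightarrow> {2} | TC \<Rightarrow> {1} | TD \<Rightarrow> {2}
    | TE \<Rightarrow> (if r = 6 then {2} else if r = 7 then {1} else {8})
    | TF \<Rightarrow> {1} | TG \<Rightarrow> {2})"

definition listed :: "ltype \<Rightarrow> nat \<Rightarrow> (nat \<Rightarrow> int) \<Rightarrow> bool" where
  "listed t r c = (case t of
      TA \<Rightarrow> (\<exists>i\<in>{1..r}. c = unitv i)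
    | TB \<Rightarrow> c = unitv 1 \<or> c = unitv r
    | TC \<Rightarrow> (\<exists>i\<in>{1..r}. c = unitv i)
    | TD \<Rightarrow> c = unitv 1 \<or> c = unitv (r - 1) \<or> c = unitv r
    | TE \<Rightarrow> (if r = 6 then c = unitv 1 \<or> c = unitv 6
             else if r = 7 then c = unitv 7 else False)
    | TF \<Rightarrow> c = unitv 4
    | TG \<Rightarrow> c = unitv 1)"

end

(*
  lambda(E) is a positive combination of the Dynkin labels of lambda: writing
  lambda = sum_k c_k omega_k, one has lambda(E) = sum_k m_k c_k, where m_k is the sum,
  over the grading set I, of the entries (i, k) of the inverse Cartan matrix.  In every
  type all m_k are at least 1 (at least 2 for e8), so lambda(E) = 1 exactly when lambda is
  a fundamental weight omega_k with m_k = 1, and the list of such k is read off from the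
  inverse Cartan matrix.  The grading set I comes from the highest root, which for the
  classical types is found via Weyl-invariant norm bounds in Bourbaki's epsilon-coordinates.
  The dual weight -w_0(omega_k) is the unique dominant weight in the Weyl orbit of
  -omega_k; it is obtained from an explicit Weyl-stable model of that orbit, and is again
  a fundamental weight with m = 1.
*)
theory Submission
  imports Defs "HOL-Combinatorics.Transposition"
begin

definition grading_claims :: "ltype \<Rightarrow> nat \<Rightarrow> (nat \<Rightarrow> int) \<Rightarrow> bool" where
  "grading_claims t r c \<longleftrightarrow> grading_set t r = expected_I t r
    \<and> (eval_E t r c = 1 \<longleftrightarrow> listed t r c)
    \<and> (listed t r c \<longrightarrow> eval_E t r (dual_hw t r c) = 1)
    \<and> (t = TE \<and> r = 8 \<and> c \<noteq> (\<lambda>_. 0) \<longrightarrow> eval_E t r c > 1)"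

lemma roots_vanish_outside: "\<beta> \<in> roots t r \<Longrightarrow> k \<notin> {1..r} \<Longrightarrow> \<beta> k = 0"
  by (induction rule: roots.induct) (auto simp: unitv_def refl_root_def)

lemma highest_root_eqI:
  assumes "\<theta> \<in> roots t r" and "\<And>\<beta> j. \<beta> \<in> roots t r \<Longrightarrow> \<beta> j \<le> \<theta> j"
  shows "highest_root t r = \<theta>"
  unfolding highest_root_def
proof (rule the_equality)
  show "\<theta> \<in> roots t r \<and> (\<forall>\<beta>\<in>roots t r. \<forall>j. \<beta> j \<le> \<theta> j)" using assms by auto
next
  fix \<theta>' assume "\<theta>' \<in> roots t r \<and> (\<forall>\<beta>\<in>roots t r. \<forall>j. \<beta> j \<le> \<theta>' j)"
  with assms show "\<theta>' = \<theta>" by (meson antisym ext)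
qed

definition inverse_cartan :: "ltype \<Rightarrow> nat \<Rightarrow> (nat \<Rightarrow> nat \<Rightarrow> real) \<Rightarrow> bool" where
  "inverse_cartan t r M \<longleftrightarrow>
    (\<forall>i\<in>{1..r}. \<forall>j\<in>{1..r}.
      (\<Sum>k\<in>{1..r}. of_int (cartan t r i k) * M k j) = (if i = j then 1 else 0)) \<and>
    (\<forall>i\<in>{1..r}. \<forall>j\<in>{1..r}.
      (\<Sum>k\<in>{1..r}. M i k * of_int (cartan t r k j)) = (if i = j then 1 else 0))"

lemma root_coords_inverse_cartan:
  assumes "inverse_cartan t r M"
  shows "root_coords t r c = (\<lambda>j. if j \<in> {1..r} then \<Sum>k\<in>{1..r}. M j k * of_int (c k) else 0)"
  unfolding root_coords_def
proof (rule the_equality)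
  let ?x = "\<lambda>j. if j \<in> {1..r} then \<Sum>k\<in>{1..r}. M j k * of_int (c k) else 0"
  have "(\<Sum>j\<in>{1..r}. ?x j * of_int (cartan t r i j)) = of_int (c i)" if i: "i \<in> {1..r}" for i
  proof -
    have "(\<Sum>j\<in>{1..r}. ?x j * of_int (cartan t r i j))
        = (\<Sum>k\<in>{1..r}. (\<Sum>j\<in>{1..r}. of_int (cartan t r i j) * M j k) * of_int (c k))"
      by (simp add: sum_distrib_left sum_distrib_right mult_ac) (rule sum.swap)
    also have "\<dots> = (\<Sum>k\<in>{1..r}. if i = k then of_int (c k) else 0)"
      using assms i by (intro sum.cong) (auto simp: inverse_cartan_def)
    finally show ?thesis using i by simp
  qed
  then show "(\<forall>j. j \<notin> {1..r} \<longrightarrow> ?x j = 0) \<and>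
    (\<forall>i\<in>{1..r}. (\<Sum>j\<in>{1..r}. ?x j * of_int (cartan t r i j)) = of_int (c i))" by auto
next
  fix x :: "nat \<Rightarrow> real"
  assume x: "(\<forall>j. j \<notin> {1..r} \<longrightarrow> x j = 0) \<and>
    (\<forall>i\<in>{1..r}. (\<Sum>j\<in>{1..r}. x j * of_int (cartan t r i j)) = of_int (c i))"
  have "x j = (\<Sum>k\<in>{1..r}. M j k * of_int (c k))" if j: "j \<in> {1..r}" for j
  proof -
    have "(\<Sum>k\<in>{1..r}. M j k * of_int (c k))
        = (\<Sum>k\<in>{1..r}. M j k * (\<Sum>l\<in>{1..r}. x l * of_int (cartan t r k l)))"
      using x by simp
    also have "\<dots> = (\<Sum>l\<in>{1..r}. (\<Sum>k\<in>{1..r}. M j k * of_int (cartan t r k l)) * x l)"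
      by (simp add: sum_distrib_left sum_distrib_right mult_ac) (rule sum.swap)
    also have "\<dots> = (\<Sum>l\<in>{1..r}. if j = l then x l else 0)"
      using assms j by (intro sum.cong) (auto simp: inverse_cartan_def)
    finally show ?thesis using j by simp
  qed
  with x show "x = (\<lambda>j. if j \<in> {1..r} then \<Sum>k\<in>{1..r}. M j k * of_int (c k) else 0)"
    by auto
qed

lemma eval_E_inverse_cartan:
  assumes "inverse_cartan t r M"
  shows "eval_E t r c = (\<Sum>k\<in>{1..r}. (\<Sum>i\<in>grading_set t r. M i k) * of_int (c k))"
proof -
  have "grading_set t r \<subseteq> {1..r}" unfolding grading_set_def by auto
  then have "eval_E t r c = (\<Sum>i\<in>grading_set t r. \<Sum>k\<in>{1..r}. M i k * of_int (c k))"
    unfolding eval_E_def root_coords_inverse_cartan[OF assms] by (intro sum.cong) auto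
  also have "\<dots> = (\<Sum>k\<in>{1..r}. (\<Sum>i\<in>grading_set t r. M i k) * of_int (c k))"
    by (subst sum.swap) (simp add: sum_distrib_right)
  finally show ?thesis .
qed

text \<open>The column sums of the inverse Cartan matrix are the coefficients of
  \<open>\<rho>\<^sup>\<or>\<close>, the sum of the fundamental coweights, in the basis of simple coroots; it takes
  the value 1 on every simple root.\<close>

lemma inverse_cartan_column_sums:
  assumes "inverse_cartan t r M" and j: "j \<in> {1..r}"
  shows "(\<Sum>k\<in>{1..r}. (\<Sum>i\<in>{1..r}. M i k) * of_int (cartan t r k j)) = 1"
proof -
  have "(\<Sum>k\<in>{1..r}. (\<Sum>i\<in>{1..r}. M i k) * of_int (cartan t r k j))
     = (\<Sum>i\<in>{1..r}. \<Sum>k\<in>{1..r}. M i k * of_int (cartan t r k j))"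
    by (subst sum.swap) (simp add: sum_distrib_right)
  also have "\<dots> = (\<Sum>i\<in>{1..r}. if i = j then 1 else 0)"
    using assms by (intro sum.cong) (auto simp: inverse_cartan_def)
  finally show ?thesis using j by simp
qed

lemma sum_mult_unitv:
  "k \<in> {1..r} \<Longrightarrow> (\<Sum>j\<in>{1..r}. m j * of_int (unitv k j)) = (m k :: real)"
  by (simp add: unitv_def if_distrib cong: if_cong)

lemma dominant_sum_eq_1_iff:
  fixes m :: "nat \<Rightarrow> real"
  assumes dom: "dominant r c" and m1: "\<And>k. k \<in> {1..r} \<Longrightarrow> m k \<ge> 1"
  shows "(\<Sum>k\<in>{1..r}. m k * of_int (c k)) = 1 \<longleftrightarrow> (\<exists>k\<in>{1..r}. c = unitv k \<and> m k = 1)"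
proof
  assume S: "(\<Sum>k\<in>{1..r}. m k * of_int (c k)) = 1"
  have cnn: "\<And>k. k \<in> {1..r} \<Longrightarrow> c k \<ge> 0" and cz: "\<And>k. k \<notin> {1..r} \<Longrightarrow> c k = 0"
    using dom unfolding dominant_def by auto
  have "(\<Sum>k\<in>{1..r}. of_int (c k)) \<le> (\<Sum>k\<in>{1..r}. m k * of_int (c k) :: real)"
  proof (rule sum_mono)
    fix k assume k: "k \<in> {1..r}"
    have "1 * of_int (c k) \<le> m k * (of_int (c k) :: real)"
      by (rule mult_right_mono) (use m1[OF k] cnn[OF k] in auto)
    then show "of_int (c k) \<le> m k * (of_int (c k) :: real)" by simp
  qed
  then have "real_of_int (\<Sum>k\<in>{1..r}. c k) \<le> 1" using S by simp
  then have sc: "(\<Sum>k\<in>{1..r}. c k) \<le> 1" by linarith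
  obtain k where k: "k \<in> {1..r}" "c k \<noteq> 0"
    using S by (metis (no_types, lifting) mult_zero_right of_int_0 sum.neutral zero_neq_one)
  have le: "c j + c l \<le> (\<Sum>k\<in>{1..r}. c k)" if "j \<in> {1..r}" "l \<in> {1..r}" "j \<noteq> l" for j l
    using sum_mono2[of "{1..r}" "{j, l}" c] that cnn by auto
  have "c k \<le> (\<Sum>k\<in>{1..r}. c k)" by (rule member_le_sum) (use k cnn in auto)
  then have ck: "c k = 1" using k cnn[of k] sc by linarith
  have "c = unitv k"
  proof
    fix j show "c j = unitv k j"
      using cz le[of j k] ck cnn[of j] sc k by (cases "j \<in> {1..r}") (auto simp: unitv_def)
  qed
  then show "\<exists>k\<in>{1..r}. c = unitv k \<and> m k = 1" using S k sum_mult_unitv[of k r m] by auto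
next
  assume "\<exists>k\<in>{1..r}. c = unitv k \<and> m k = 1"
  then show "(\<Sum>k\<in>{1..r}. m k * of_int (c k)) = 1" using sum_mult_unitv by auto
qed

lemma dominant_sum_gt_1:
  fixes m :: "nat \<Rightarrow> real"
  assumes dom: "dominant r c" and m2: "\<And>k. k \<in> {1..r} \<Longrightarrow> m k \<ge> 2" and "c \<noteq> (\<lambda>_. 0)"
  shows "(\<Sum>k\<in>{1..r}. m k * of_int (c k)) > 1"
proof -
  have cnn: "\<And>k. k \<in> {1..r} \<Longrightarrow> c k \<ge> 0" and cz: "\<And>k. k \<notin> {1..r} \<Longrightarrow> c k = 0"
    using dom unfolding dominant_def by auto
  obtain k where "c k \<noteq> 0" using \<open>c \<noteq> (\<lambda>_. 0)\<close> by auto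
  moreover from this have "k \<in> {1..r}" using cz by auto
  ultimately have k: "k \<in> {1..r}" "c k \<ge> 1" using cnn[of k] by auto
  have "m k * of_int (c k) \<le> (\<Sum>k\<in>{1..r}. m k * of_int (c k))"
  proof (rule member_le_sum)
    fix x assume "x \<in> {1..r} - {k}"
    then show "0 \<le> m x * of_int (c x)" using m2[of x] cnn[of x] by (auto intro!: mult_nonneg_nonneg)
  qed (use k in auto)
  moreover have "m k * of_int (c k) \<ge> 2 * 1"
    by (rule mult_mono) (use k m2[of k] in auto)
  ultimately show ?thesis by linarith
qed

lemma weyl_orbit_vanish_outside:
  assumes "\<nu> \<in> weyl_orbit t r \<mu>" "\<And>k. k \<notin> {1..r} \<Longrightarrow> \<mu> k = 0" "k \<notin> {1..r}"
  shows "\<nu> k = 0"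
  using assms by (induction rule: weyl_orbit.induct) (auto simp: refl_wt_def)

text \<open>Pairing with a coweight \<open>\<Sum>\<^sub>k w\<^sub>k \<alpha>\<^sub>k\<^sup>\<or>\<close> that is positive on all simple roots
  attains its maximum over a finite orbit at a dominant weight: reflecting in a simple
  root with negative label would increase it.\<close>

lemma weyl_orbit_max_dominant:
  fixes w :: "nat \<Rightarrow> real"
  assumes w: "\<And>i. i \<in> {1..r} \<Longrightarrow> (\<Sum>k\<in>{1..r}. w k * of_int (cartan t r k i)) > 0"
    and fin: "finite (weyl_orbit t r \<mu>)"
    and supp: "\<And>k. k \<notin> {1..r} \<Longrightarrow> \<mu> k = 0"
  obtains \<nu> where "\<nu> \<in> weyl_orbit t r \<mu>" "dominant r \<nu>"
proof -
  let ?O = "weyl_orbit t r \<mu>"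
  let ?h = "\<lambda>\<nu>. (\<Sum>k\<in>{1..r}. w k * of_int (\<nu> k))"
  have "Max (?h ` ?O) \<in> ?h ` ?O" using fin weyl_orbit.base by (intro Max_in) auto
  then obtain \<nu> where \<nu>: "\<nu> \<in> ?O" "?h \<nu> = Max (?h ` ?O)" by auto
  have "0 \<le> \<nu> i" if i: "i \<in> {1..r}" for i
  proof (rule ccontr)
    assume neg: "\<not> 0 \<le> \<nu> i"
    have "?h (refl_wt t r i \<nu>) = ?h \<nu> - of_int (\<nu> i) * (\<Sum>k\<in>{1..r}. w k * of_int (cartan t r k i))"
      by (simp add: refl_wt_def algebra_simps sum_subtractf sum_distrib_left)
    also have "\<dots> > ?h \<nu>" using neg w[OF i] by (simp add: mult_neg_pos)
    finally have "?h (refl_wt t r i \<nu>) > Max (?h ` ?O)" using \<nu>(2) by simp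
    moreover have "?h (refl_wt t r i \<nu>) \<le> Max (?h ` ?O)"
      using fin weyl_orbit.refl[OF \<nu>(1) i] by (intro Max_ge) auto
    ultimately show False by simp
  qed
  moreover have "\<nu> i = 0" if "i \<notin> {1..r}" for i
    using weyl_orbit_vanish_outside[OF \<nu>(1) supp that] .
  ultimately show ?thesis using that \<nu>(1) unfolding dominant_def by blast
qed

lemma dual_hw_eqI:
  fixes w :: "nat \<Rightarrow> real"
  assumes w: "\<And>i. i \<in> {1..r} \<Longrightarrow> (\<Sum>k\<in>{1..r}. w k * of_int (cartan t r k i)) > 0"
    and S0: "(\<lambda>k. - c k) \<in> S"
    and S_refl: "\<And>\<mu> i. \<mu> \<in> S \<Longrightarrow> i \<in> {1..r} \<Longrightarrow> refl_wt t r i \<mu> \<in> S"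
    and "finite S"
    and uniq: "\<And>\<nu>. \<nu> \<in> S \<Longrightarrow> dominant r \<nu> \<Longrightarrow> \<nu> = \<nu>0"
    and supp: "\<And>k. k \<notin> {1..r} \<Longrightarrow> c k = 0"
  shows "dual_hw t r c = \<nu>0"
proof -
  let ?O = "weyl_orbit t r (\<lambda>k. - c k)"
  have OS: "?O \<subseteq> S"
  proof
    fix \<nu> assume "\<nu> \<in> ?O" then show "\<nu> \<in> S"
      by (induction rule: weyl_orbit.induct) (use S0 S_refl in auto)
  qed
  then have "finite ?O" using \<open>finite S\<close> finite_subset by blast
  then obtain \<nu> where "\<nu> \<in> ?O" "dominant r \<nu>"
    using weyl_orbit_max_dominant[OF w \<open>finite ?O\<close>] supp by auto
  with OS uniq have "\<nu>0 \<in> ?O \<and> dominant r \<nu>0" by auto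
  then show ?thesis unfolding dual_hw_def using uniq OS by (intro the_equality) auto
qed

lemma grading_claimsI:
  fixes m :: "nat \<Rightarrow> real"
  assumes "grading_set t r = expected_I t r"
    and eval: "\<And>c. eval_E t r c = (\<Sum>k\<in>{1..r}. m k * of_int (c k))"
    and m1: "\<And>k. k \<in> {1..r} \<Longrightarrow> m k \<ge> 1"
    and listed: "\<And>c. listed t r c \<longleftrightarrow> (\<exists>k\<in>{1..r}. c = unitv k \<and> m k = 1)"
    and dual: "\<And>k. k \<in> {1..r} \<Longrightarrow> m k = 1 \<Longrightarrow>
      \<exists>k'\<in>{1..r}. m k' = 1 \<and> dual_hw t r (unitv k) = unitv k'"
    and E8: "t = TE \<and> r = 8 \<Longrightarrow> \<forall>k\<in>{1..r}. m k \<ge> 2"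
    and dom: "dominant r c"
  shows "grading_claims t r c"
  unfolding grading_claims_def
proof (intro conjI impI)
  show "eval_E t r c = 1 \<longleftrightarrow> listed t r c"
    unfolding eval listed by (rule dominant_sum_eq_1_iff[OF dom m1])
  show "eval_E t r (dual_hw t r c) = 1" if L: "listed t r c"
  proof -
    obtain k where k: "k \<in> {1..r}" "c = unitv k" "m k = 1" using L listed by auto
    obtain k' where "k' \<in> {1..r}" "m k' = 1" "dual_hw t r (unitv k) = unitv k'"
      using dual[OF k(1,3)] by auto
    then show ?thesis unfolding eval k(2) using sum_mult_unitv[of k' r m] by simp
  qed
  show "eval_E t r c > 1" if "t = TE \<and> r = 8 \<and> c \<noteq> (\<lambda>_. 0)"
    unfolding eval using dominant_sum_gt_1[OF dom _, of m] E8 that by auto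
qed (fact assms(1))

section \<open>Inverse Cartan matrices of the classical types\<close>

lemma sum_mult_sparse:
  fixes f :: "nat \<Rightarrow> 'a::comm_ring_1"
  assumes i: "i \<in> {1..r}"
    and g: "\<And>k. k \<in> {1..r} \<Longrightarrow> g k = (if k = i then x else 0) + (if k = Suc i then y else 0)
         + (if Suc k = i then z else 0) + (if k = p then u else 0) + (if k = q then v else 0)"
  shows "(\<Sum>k\<in>{1..r}. f k * g k) = x * f i + (if i < r then y * f (Suc i) else 0)
      + (if 2 \<le> i then z * f (i - 1) else 0) + (if p \<in> {1..r} then u * f p else 0)
      + (if q \<in> {1..r} then v * f q else 0)"
proof -
  have e: "Suc k = i \<longleftrightarrow> k = i - 1" for k using i by auto
  have "(\<Sum>k\<in>{1..r}. f k * g k) = (\<Sum>k\<in>{1..r}. (if k = i then x * f k else 0) + (if k = Suc i then y * f k else 0)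
         + (if k = i - 1 then z * f k else 0) + (if k = p then u * f k else 0) + (if k = q then v * f k else 0))"
  proof (rule sum.cong[OF HOL.refl])
    fix k assume k: "k \<in> {1..r}"
    show "f k * g k = (if k = i then x * f k else 0) + (if k = Suc i then y * f k else 0)
         + (if k = i - 1 then z * f k else 0) + (if k = p then u * f k else 0) + (if k = q then v * f k else 0)"
      unfolding g[OF k] e by (simp add: distrib_left mult.commute)
  qed
  also have "\<dots> = x * f i + (if i < r then y * f (Suc i) else 0)
      + (if 2 \<le> i then z * f (i - 1) else 0) + (if p \<in> {1..r} then u * f p else 0)
      + (if q \<in> {1..r} then v * f q else 0)"
    using i by (auto simp: sum.distrib mult.commute)
  finally show ?thesis .
qed

lemma cartan_A_sparse: "k \<in> {1..r} \<Longrightarrow> (of_int (cartan TA r i k) :: 'a::comm_ring_1) =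
   (if k = i then 2 else 0) + (if k = Suc i then -1 else 0) + (if Suc k = i then -1 else 0)"
  unfolding cartan_def by auto

lemma cartan_B_sparse: "k \<in> {1..r} \<Longrightarrow> (of_int (cartan TB r i k) :: 'a::comm_ring_1) =
   (if k = i then 2 else 0) + (if k = Suc i then -1 else 0) + (if Suc k = i then (if i = r then -2 else -1) else 0)"
  unfolding cartan_def by auto

lemma cartan_B_sparse_col: "k \<in> {1..r} \<Longrightarrow> (of_int (cartan TB r k i) :: 'a::comm_ring_1) =
   (if k = i then 2 else 0) + (if k = Suc i then (if Suc i = r then -2 else -1) else 0) + (if Suc k = i then -1 else 0)"
  unfolding cartan_def by auto

lemma cartan_C_sparse: "k \<in> {1..r} \<Longrightarrow> (of_int (cartan TC r i k) :: 'a::comm_ring_1) =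
   (if k = i then 2 else 0) + (if k = Suc i then (if i = r - 1 then -2 else -1) else 0) + (if Suc k = i then -1 else 0)"
  unfolding cartan_def by auto

lemma cartan_C_sparse_col: "k \<in> {1..r} \<Longrightarrow> (of_int (cartan TC r k i) :: 'a::comm_ring_1) =
   (if k = i then 2 else 0) + (if k = Suc i then -1 else 0) + (if Suc k = i then (if i = r then -2 else -1) else 0)"
  unfolding cartan_def by auto

lemma cartan_D_sparse: "r \<ge> 4 \<Longrightarrow> k \<in> {1..r} \<Longrightarrow> i \<in> {1..r} \<Longrightarrow> (of_int (cartan TD r i k) :: 'a::comm_ring_1) =
   (if k = i then 2 else 0) + (if k = Suc i then (if Suc i \<le> r - 1 then -1 else 0) else 0)
   + (if Suc k = i then (if i \<le> r - 1 then -1 else 0) else 0)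
   + (if k = r then (if i = r - 2 then -1 else 0) else 0) + (if k = r - 2 then (if i = r then -1 else 0) else 0)"
  unfolding cartan_def adj_def by auto

lemma cartan_D_sym: "cartan TD r i k = cartan TD r k i"
  unfolding cartan_def adj_def by auto

lemma cartan_A_sym: "cartan TA r i k = cartan TA r k i"
  unfolding cartan_def by auto

lemma sum_cartan_row_A: "i \<in> {1..r} \<Longrightarrow> (\<Sum>k\<in>{1..r}. f k * of_int (cartan TA r i k)) =
    2 * f i - (if i < r then f (Suc i) else 0) - (if 2 \<le> i then f (i - 1) else (0::'a::comm_ring_1))"
  by (subst sum_mult_sparse[where x=2 and y="-1" and z="-1" and p=0 and u=0 and q=0 and v=0]) (auto simp: cartan_A_sparse)

lemma sum_cartan_row_B: "i \<in> {1..r} \<Longrightarrow> (\<Sum>k\<in>{1..r}. f k * of_int (cartan TB r i k)) =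
    2 * f i - (if i < r then f (Suc i) else 0) - (if 2 \<le> i then (if i = r then 2 else 1) * f (i - 1) else (0::'a::comm_ring_1))"
  by (subst sum_mult_sparse[where x=2 and y="-1" and z="if i = r then -2 else -1" and p=0 and u=0 and q=0 and v=0]) (auto simp: cartan_B_sparse)

lemma sum_cartan_col_B: "i \<in> {1..r} \<Longrightarrow> (\<Sum>k\<in>{1..r}. f k * of_int (cartan TB r k i)) =
    2 * f i - (if i < r then (if Suc i = r then 2 else 1) * f (Suc i) else 0) - (if 2 \<le> i then f (i - 1) else (0::'a::comm_ring_1))"
  by (subst sum_mult_sparse[where x=2 and y="if Suc i = r then -2 else -1" and z="-1" and p=0 and u=0 and q=0 and v=0]) (auto simp: cartan_B_sparse_col)

lemma sum_cartan_row_C: "i \<in> {1..r} \<Longrightarrow> (\<Sum>k\<in>{1..r}. f k * of_int (cartan TC r i k)) =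
    2 * f i - (if i < r then (if i = r - 1 then 2 else 1) * f (Suc i) else 0) - (if 2 \<le> i then f (i - 1) else (0::'a::comm_ring_1))"
  by (subst sum_mult_sparse[where x=2 and y="if i = r - 1 then -2 else -1" and z="-1" and p=0 and u=0 and q=0 and v=0]) (auto simp: cartan_C_sparse)

lemma sum_cartan_col_C: "i \<in> {1..r} \<Longrightarrow> (\<Sum>k\<in>{1..r}. f k * of_int (cartan TC r k i)) =
    2 * f i - (if i < r then f (Suc i) else 0) - (if 2 \<le> i then (if i = r then 2 else 1) * f (i - 1) else (0::'a::comm_ring_1))"
  by (subst sum_mult_sparse[where x=2 and y="-1" and z="if i = r then -2 else -1" and p=0 and u=0 and q=0 and v=0]) (auto simp: cartan_C_sparse_col)

lemma sum_cartan_row_D: "r \<ge> 4 \<Longrightarrow> i \<in> {1..r} \<Longrightarrow> (\<Sum>k\<in>{1..r}. f k * of_int (cartan TD r i k)) =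
    2 * f i - (if Suc i \<le> r - 1 then f (Suc i) else 0) - (if 2 \<le> i \<and> i \<le> r - 1 then f (i - 1) else 0)
    - (if i = r - 2 then f r else 0) - (if i = r then f (r - 2) else (0::'a::comm_ring_1))"
  by (subst sum_mult_sparse[where x=2 and y="if Suc i \<le> r - 1 then -1 else 0" and z="if i \<le> r - 1 then -1 else 0"
        and p=r and u="if i = r - 2 then -1 else 0" and q="r-2" and v="if i = r then -1 else 0"]) (auto simp: cartan_D_sparse)

text \<open>The inverse Cartan matrices of Bourbaki's Plates I--IV.\<close>

definition inv_cartan_A :: "nat \<Rightarrow> nat \<Rightarrow> nat \<Rightarrow> real" where
  "inv_cartan_A r i j = real (min i j) * (real r + 1 - real (max i j)) / (real r + 1)"

definition inv_cartan_B :: "nat \<Rightarrow> nat \<Rightarrow> nat \<Rightarrow> real" where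
  "inv_cartan_B r i j = (if j = r then real i / 2 else real (min i j))"

definition inv_cartan_C :: "nat \<Rightarrow> nat \<Rightarrow> nat \<Rightarrow> real" where
  "inv_cartan_C r i j = (if i = r then real j / 2 else real (min i j))"

definition inv_cartan_D :: "nat \<Rightarrow> nat \<Rightarrow> nat \<Rightarrow> real" where
  "inv_cartan_D r i j = (if i \<le> r - 2 \<and> j \<le> r - 2 then real (min i j) else if i \<le> r - 2 then real i / 2
     else if j \<le> r - 2 then real j / 2 else if i = j then real r / 4 else (real r - 2) / 4)"

lemma inv_cartan_A_le: "a \<le> j \<Longrightarrow> inv_cartan_A r a j = real a * ((real r + 1 - real j) / (real r + 1))"
  by (simp add: inv_cartan_A_def min_def max_def)

lemma inv_cartan_A_ge: "j \<le> a \<Longrightarrow> inv_cartan_A r a j = real j / (real r + 1) * (real r + 1 - real a)"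
  by (simp add: inv_cartan_A_def min_def max_def)

lemma inv_cartan_A_sym: "inv_cartan_A r i j = inv_cartan_A r j i"
  by (simp add: inv_cartan_A_def min.commute max.commute)

lemma cartan_inv_cartan_A: assumes "i \<in> {1..r}" "j \<in> {1..r}"
  shows "(\<Sum>k\<in>{1..r}. inv_cartan_A r k j * of_int (cartan TA r i k)) = (if i = j then 1 else 0)"
proof -
  have "(\<Sum>k\<in>{1..r}. inv_cartan_A r k j * of_int (cartan TA r i k)) =
     2 * inv_cartan_A r i j - (if i < r then inv_cartan_A r (Suc i) j else 0) - (if 2 \<le> i then inv_cartan_A r (i - 1) j else 0)"
    by (rule sum_cartan_row_A[OF assms(1)])
  also have "\<dots> = (if i = j then 1 else 0)"
  proof -
    have r: "real r + 1 > 0" by simp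
    consider "i < j" | "i = j" | "j < i" by arith
    then show ?thesis
    proof cases
      case 1
      define K where "K = (real r + 1 - real j) / (real r + 1)"
      have e1: "inv_cartan_A r i j = real i * K" using 1 by (simp add: inv_cartan_A_le K_def)
      have e2: "(if i < r then inv_cartan_A r (Suc i) j else 0) = real (Suc i) * K" using 1 assms by (simp add: inv_cartan_A_le K_def)
      have e3: "(if 2 \<le> i then inv_cartan_A r (i - 1) j else 0) = (real i - 1) * K"
        using 1 assms by (cases "2 \<le> i") (auto simp: inv_cartan_A_le K_def of_nat_diff)
      show ?thesis unfolding e1 e2 e3 using 1 by (simp add: algebra_simps)
    next
      case 2
      have e1: "inv_cartan_A r i j = real j * (real r + 1 - real j) / (real r + 1)" using 2 by (simp add: inv_cartan_A_le)
      have e2: "(if i < r then inv_cartan_A r (Suc i) j else 0) = real j * (real r - real j) / (real r + 1)"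
        using 2 assms by (auto simp: inv_cartan_A_ge)
      have e3: "(if 2 \<le> i then inv_cartan_A r (i - 1) j else 0) = (real j - 1) * (real r + 1 - real j) / (real r + 1)"
        using 2 assms by (cases "2 \<le> i") (auto simp: inv_cartan_A_le of_nat_diff)
      have num: "2 * (real j * (real r + 1 - real j)) - real j * (real r - real j) - (real j - 1) * (real r + 1 - real j) = real r + 1"
        by (simp add: algebra_simps)
      have "2 * (real j * (real r + 1 - real j) / (real r + 1)) - real j * (real r - real j) / (real r + 1)
          - (real j - 1) * (real r + 1 - real j) / (real r + 1)
         = (2 * (real j * (real r + 1 - real j)) - real j * (real r - real j) - (real j - 1) * (real r + 1 - real j)) / (real r + 1)"
        by (simp add: diff_divide_distrib)
      also have "\<dots> = 1" using num r by simp
      finally show ?thesis unfolding e1 e2 e3 using 2 by simp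
    next
      case 3
      define K where "K = real j / (real r + 1)"
      have e1: "inv_cartan_A r i j = K * (real r + 1 - real i)" using 3 by (simp add: inv_cartan_A_ge K_def)
      have e2: "(if i < r then inv_cartan_A r (Suc i) j else 0) = K * (real r - real i)" using 3 assms
        by (auto simp: inv_cartan_A_ge K_def)
      have e3: "(if 2 \<le> i then inv_cartan_A r (i - 1) j else 0) = K * (real r + 2 - real i)"
        using 3 assms by (auto simp: inv_cartan_A_ge K_def of_nat_diff)
      show ?thesis unfolding e1 e2 e3 using 3 by (simp add: algebra_simps)
    qed
  qed
  finally show ?thesis .
qed

lemma inv_cartan_cartan_A: assumes "i \<in> {1..r}" "j \<in> {1..r}"
  shows "(\<Sum>k\<in>{1..r}. inv_cartan_A r i k * of_int (cartan TA r k j)) = (if i = j then 1 else 0)"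
proof -
  have "(\<Sum>k\<in>{1..r}. inv_cartan_A r i k * of_int (cartan TA r k j)) = (\<Sum>k\<in>{1..r}. inv_cartan_A r k i * of_int (cartan TA r j k))"
    by (simp add: inv_cartan_A_sym cartan_A_sym)
  also have "\<dots> = (if j = i then 1 else 0)" by (rule cartan_inv_cartan_A[OF assms(2,1)])
  finally show ?thesis by auto
qed

lemma inverse_cartan_A:
  shows "inverse_cartan TA r (inv_cartan_A r)"
  unfolding inverse_cartan_def
  using cartan_inv_cartan_A inv_cartan_cartan_A by (simp add: mult.commute)

lemma cartan_inv_cartan_B: assumes "i \<in> {1..r}" "j \<in> {1..r}"
  shows "(\<Sum>k\<in>{1..r}. inv_cartan_B r k j * of_int (cartan TB r i k)) = (if i = j then 1 else 0)"
  unfolding sum_cartan_row_B[OF assms(1)] using assms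
  by (auto simp: inv_cartan_B_def min_def of_nat_diff add_divide_distrib diff_divide_distrib)

lemma inv_cartan_cartan_B: assumes "i \<in> {1..r}" "j \<in> {1..r}"
  shows "(\<Sum>k\<in>{1..r}. inv_cartan_B r i k * of_int (cartan TB r k j)) = (if i = j then 1 else 0)"
  unfolding sum_cartan_col_B[OF assms(2)] using assms
  by (auto simp: inv_cartan_B_def min_def of_nat_diff add_divide_distrib diff_divide_distrib)

lemma inverse_cartan_B:
  shows "inverse_cartan TB r (inv_cartan_B r)"
  unfolding inverse_cartan_def
  using cartan_inv_cartan_B inv_cartan_cartan_B by (simp add: mult.commute)
lemma cartan_inv_cartan_C: assumes "i \<in> {1..r}" "j \<in> {1..r}"
  shows "(\<Sum>k\<in>{1..r}. inv_cartan_C r k j * of_int (cartan TC r i k)) = (if i = j then 1 else 0)"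
  unfolding sum_cartan_row_C[OF assms(1)] using assms
  by (auto simp: inv_cartan_C_def min_def of_nat_diff add_divide_distrib diff_divide_distrib)

lemma inv_cartan_cartan_C: assumes "i \<in> {1..r}" "j \<in> {1..r}"
  shows "(\<Sum>k\<in>{1..r}. inv_cartan_C r i k * of_int (cartan TC r k j)) = (if i = j then 1 else 0)"
  unfolding sum_cartan_col_C[OF assms(2)] using assms
  by (auto simp: inv_cartan_C_def min_def of_nat_diff add_divide_distrib diff_divide_distrib)

lemma inverse_cartan_C:
  shows "inverse_cartan TC r (inv_cartan_C r)"
  unfolding inverse_cartan_def
  using cartan_inv_cartan_C inv_cartan_cartan_C by (simp add: mult.commute)
lemma inv_cartan_D_ll: "i \<le> r - 2 \<Longrightarrow> j \<le> r - 2 \<Longrightarrow> inv_cartan_D r i j = real (min i j)" by (simp add: inv_cartan_D_def)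
lemma inv_cartan_D_lh: "i \<le> r - 2 \<Longrightarrow> \<not> j \<le> r - 2 \<Longrightarrow> inv_cartan_D r i j = real i / 2" by (simp add: inv_cartan_D_def)
lemma inv_cartan_D_hl: "\<not> i \<le> r - 2 \<Longrightarrow> j \<le> r - 2 \<Longrightarrow> inv_cartan_D r i j = real j / 2" by (simp add: inv_cartan_D_def)
lemma inv_cartan_D_hh: "\<not> i \<le> r - 2 \<Longrightarrow> \<not> j \<le> r - 2 \<Longrightarrow> inv_cartan_D r i j = (if i = j then real r / 4 else (real r - 2) / 4)"
  by (simp add: inv_cartan_D_def)

lemma cartan_inv_cartan_D_chain:
  assumes r4: "r \<ge> 4" and ij: "i \<in> {1..r}" "j \<in> {1..r}" and a: "i < r - 2"
  shows "(\<Sum>k\<in>{1..r}. inv_cartan_D r k j * of_int (cartan TD r i k)) = (if i = j then 1 else 0)"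
proof -
  have R: "(\<Sum>k\<in>{1..r}. inv_cartan_D r k j * of_int (cartan TD r i k)) =
    2 * inv_cartan_D r i j - (if Suc i \<le> r - 1 then inv_cartan_D r (Suc i) j else 0) - (if 2 \<le> i \<and> i \<le> r - 1 then inv_cartan_D r (i - 1) j else 0)
    - (if i = r - 2 then inv_cartan_D r r j else 0) - (if i = r then inv_cartan_D r (r - 2) j else 0)"
    by (rule sum_cartan_row_D[OF r4 ij(1)])
  have R2: "(\<Sum>k\<in>{1..r}. inv_cartan_D r k j * of_int (cartan TD r i k)) =
     2 * inv_cartan_D r i j - inv_cartan_D r (Suc i) j - (if 2 \<le> i then inv_cartan_D r (i - 1) j else 0)"
    unfolding R using a r4 by auto
  show ?thesis
  proof (cases "j \<le> r - 2")
    case True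
    show ?thesis unfolding R2 using a True ij
      by (auto simp: inv_cartan_D_ll min_def of_nat_diff)
  next
    case False
    show ?thesis unfolding R2 using a False ij
      by (auto simp: inv_cartan_D_lh of_nat_diff add_divide_distrib diff_divide_distrib)
  qed
qed

lemma cartan_inv_cartan_D_branch:
  assumes r4: "r \<ge> 4" and ij: "i \<in> {1..r}" "j \<in> {1..r}" and b: "i = r - 2"
  shows "(\<Sum>k\<in>{1..r}. inv_cartan_D r k j * of_int (cartan TD r i k)) = (if i = j then 1 else 0)"
proof -
  have R: "(\<Sum>k\<in>{1..r}. inv_cartan_D r k j * of_int (cartan TD r i k)) =
    2 * inv_cartan_D r i j - (if Suc i \<le> r - 1 then inv_cartan_D r (Suc i) j else 0) - (if 2 \<le> i \<and> i \<le> r - 1 then inv_cartan_D r (i - 1) j else 0)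
    - (if i = r - 2 then inv_cartan_D r r j else 0) - (if i = r then inv_cartan_D r (r - 2) j else 0)"
    by (rule sum_cartan_row_D[OF r4 ij(1)])
  have R2: "(\<Sum>k\<in>{1..r}. inv_cartan_D r k j * of_int (cartan TD r i k)) =
     2 * inv_cartan_D r (r - 2) j - inv_cartan_D r (r - 1) j - inv_cartan_D r (r - 3) j - inv_cartan_D r r j"
  proof -
    have e: "Suc (r - 2) = r - 1" "r - 2 - 1 = r - 3" using r4 by auto
    show ?thesis unfolding R unfolding b e using r4 by auto
  qed
  have n: "\<not> r - 1 \<le> r - 2" "\<not> r \<le> r - 2" "r - 3 \<le> r - 2" "r - 2 \<le> r - 2" using r4 by auto
  consider "j \<le> r - 2" | "j = r - 1" | "j = r" using ij by fastforce
  then show ?thesis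
  proof cases
    case 1 then show ?thesis unfolding R2 inv_cartan_D_hl[OF n(1) 1] inv_cartan_D_hl[OF n(2) 1] inv_cartan_D_ll[OF n(3) 1] inv_cartan_D_ll[OF n(4) 1]
      using b r4 by (auto simp: min_def of_nat_diff)
  next
    case 2
    have m: "\<not> j \<le> r - 2" using 2 r4 by auto
    show ?thesis unfolding R2 inv_cartan_D_hh[OF n(1) m] inv_cartan_D_hh[OF n(2) m] inv_cartan_D_lh[OF n(3) m] inv_cartan_D_lh[OF n(4) m]
      using b r4 2 by (auto simp: of_nat_diff add_divide_distrib diff_divide_distrib)
  next
    case 3
    have m: "\<not> j \<le> r - 2" using 3 r4 by auto
    show ?thesis unfolding R2 inv_cartan_D_hh[OF n(1) m] inv_cartan_D_hh[OF n(2) m] inv_cartan_D_lh[OF n(3) m] inv_cartan_D_lh[OF n(4) m]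
      using b r4 3 by (auto simp: of_nat_diff add_divide_distrib diff_divide_distrib)
  qed
qed

lemma cartan_inv_cartan_D_penultimate:
  assumes r4: "r \<ge> 4" and ij: "i \<in> {1..r}" "j \<in> {1..r}" and c: "i = r - 1"
  shows "(\<Sum>k\<in>{1..r}. inv_cartan_D r k j * of_int (cartan TD r i k)) = (if i = j then 1 else 0)"
proof -
  have R: "(\<Sum>k\<in>{1..r}. inv_cartan_D r k j * of_int (cartan TD r i k)) =
    2 * inv_cartan_D r i j - (if Suc i \<le> r - 1 then inv_cartan_D r (Suc i) j else 0) - (if 2 \<le> i \<and> i \<le> r - 1 then inv_cartan_D r (i - 1) j else 0)
    - (if i = r - 2 then inv_cartan_D r r j else 0) - (if i = r then inv_cartan_D r (r - 2) j else 0)"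
    by (rule sum_cartan_row_D[OF r4 ij(1)])
  have R2: "(\<Sum>k\<in>{1..r}. inv_cartan_D r k j * of_int (cartan TD r i k)) = 2 * inv_cartan_D r (r - 1) j - inv_cartan_D r (r - 2) j"
  proof -
    have e: "r - 1 - 1 = r - 2" using r4 by auto
    show ?thesis unfolding R unfolding c e using r4 by auto
  qed
  have n: "\<not> r - 1 \<le> r - 2" "r - 2 \<le> r - 2" using r4 by auto
  consider "j \<le> r - 2" | "j = r - 1" | "j = r" using ij by fastforce
  then show ?thesis
  proof cases
    case 1 then show ?thesis unfolding R2 inv_cartan_D_hl[OF n(1) 1] inv_cartan_D_ll[OF n(2) 1]
      using c r4 by (auto simp: min_def)
  next
    case 2
    have m: "\<not> j \<le> r - 2" using 2 r4 by auto
    show ?thesis unfolding R2 inv_cartan_D_hh[OF n(1) m] inv_cartan_D_lh[OF n(2) m]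
      using c r4 2 by (auto simp: of_nat_diff add_divide_distrib diff_divide_distrib)
  next
    case 3
    have m: "\<not> j \<le> r - 2" using 3 r4 by auto
    show ?thesis unfolding R2 inv_cartan_D_hh[OF n(1) m] inv_cartan_D_lh[OF n(2) m]
      using c r4 3 by (auto simp: of_nat_diff add_divide_distrib diff_divide_distrib)
  qed
qed

lemma cartan_inv_cartan_D_last:
  assumes r4: "r \<ge> 4" and ij: "i \<in> {1..r}" "j \<in> {1..r}" and d: "i = r"
  shows "(\<Sum>k\<in>{1..r}. inv_cartan_D r k j * of_int (cartan TD r i k)) = (if i = j then 1 else 0)"
proof -
  have R: "(\<Sum>k\<in>{1..r}. inv_cartan_D r k j * of_int (cartan TD r i k)) =
    2 * inv_cartan_D r i j - (if Suc i \<le> r - 1 then inv_cartan_D r (Suc i) j else 0) - (if 2 \<le> i \<and> i \<le> r - 1 then inv_cartan_D r (i - 1) j else 0)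
    - (if i = r - 2 then inv_cartan_D r r j else 0) - (if i = r then inv_cartan_D r (r - 2) j else 0)"
    by (rule sum_cartan_row_D[OF r4 ij(1)])
  have R2: "(\<Sum>k\<in>{1..r}. inv_cartan_D r k j * of_int (cartan TD r i k)) = 2 * inv_cartan_D r r j - inv_cartan_D r (r - 2) j"
    unfolding R using d r4 by auto
  have n: "\<not> r \<le> r - 2" "r - 2 \<le> r - 2" using r4 by auto
  consider "j \<le> r - 2" | "j = r - 1" | "j = r" using ij by fastforce
  then show ?thesis
  proof cases
    case 1 then show ?thesis unfolding R2 inv_cartan_D_hl[OF n(1) 1] inv_cartan_D_ll[OF n(2) 1]
      using d r4 by (auto simp: min_def)
  next
    case 2
    have m: "\<not> j \<le> r - 2" using 2 r4 by auto
    show ?thesis unfolding R2 inv_cartan_D_hh[OF n(1) m] inv_cartan_D_lh[OF n(2) m]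
      using d r4 2 by (auto simp: of_nat_diff add_divide_distrib diff_divide_distrib)
  next
    case 3
    have m: "\<not> j \<le> r - 2" using 3 r4 by auto
    show ?thesis unfolding R2 inv_cartan_D_hh[OF n(1) m] inv_cartan_D_lh[OF n(2) m]
      using d r4 3 by (auto simp: of_nat_diff add_divide_distrib diff_divide_distrib)
  qed
qed

lemma cartan_inv_cartan_D:
  assumes "r \<ge> 4" "i \<in> {1..r}" "j \<in> {1..r}"
  shows "(\<Sum>k\<in>{1..r}. inv_cartan_D r k j * of_int (cartan TD r i k)) = (if i = j then 1 else 0)"
proof -
  consider "i < r - 2" | "i = r - 2" | "i = r - 1" | "i = r" using assms by fastforce
  then show ?thesis
    using cartan_inv_cartan_D_chain[OF assms] cartan_inv_cartan_D_branch[OF assms]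
      cartan_inv_cartan_D_penultimate[OF assms] cartan_inv_cartan_D_last[OF assms] by cases
qed

lemma inv_cartan_D_sym: "inv_cartan_D r i j = inv_cartan_D r j i"
  by (auto simp: inv_cartan_D_def min.commute)

lemma inv_cartan_cartan_D: assumes "r \<ge> 4" "i \<in> {1..r}" "j \<in> {1..r}"
  shows "(\<Sum>k\<in>{1..r}. inv_cartan_D r i k * of_int (cartan TD r k j)) = (if i = j then 1 else 0)"
proof -
  have "(\<Sum>k\<in>{1..r}. inv_cartan_D r i k * of_int (cartan TD r k j)) = (\<Sum>k\<in>{1..r}. inv_cartan_D r k i * of_int (cartan TD r j k))"
    by (simp add: inv_cartan_D_sym cartan_D_sym)
  also have "\<dots> = (if j = i then 1 else 0)" by (rule cartan_inv_cartan_D[OF assms(1,3,2)])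
  finally show ?thesis by auto
qed

lemma inverse_cartan_D:
  assumes "r \<ge> 4"
  shows "inverse_cartan TD r (inv_cartan_D r)"
  unfolding inverse_cartan_def
  using cartan_inv_cartan_D[OF assms] inv_cartan_cartan_D[OF assms] by (simp add: mult.commute)

section \<open>The \<open>\<epsilon>\<close>-model of the classical root systems\<close>

text \<open>\<open>eps_coords t r \<beta>\<close> are the coordinates, in Bourbaki's orthonormal basis
  \<open>\<epsilon>\<^sub>1, \<epsilon>\<^sub>2, \<dots>\<close> (indices \<open>1..r+1\<close> in type A, \<open>1..r\<close> otherwise), of the element
  with root coordinates \<open>\<beta>\<close>, and \<open>eps_coroot t r y i\<close> is the pairing of
  an \<open>\<epsilon>\<close>-vector \<open>y\<close> with the simple coroot \<open>\<alpha>\<^sub>i\<^sup>\<or>\<close>.  In these coordinates the simple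
  reflections act by (signed) transpositions of coordinates.\<close>

definition eps_coroot :: "ltype \<Rightarrow> nat \<Rightarrow> (nat \<Rightarrow> real) \<Rightarrow> nat \<Rightarrow> real" where
  "eps_coroot t r y i = (if i = r then (case t of TA \<Rightarrow> y r - y (Suc r) | TB \<Rightarrow> 2 * y r | TC \<Rightarrow> y r
      | TD \<Rightarrow> y (r - 1) + y r | _ \<Rightarrow> 0) else y i - y (Suc i))"

definition eps_coords :: "ltype \<Rightarrow> nat \<Rightarrow> (nat \<Rightarrow> real) \<Rightarrow> nat \<Rightarrow> real" where
  "eps_coords t r \<beta> j = (case t of
     TA \<Rightarrow> if 1 \<le> j \<and> j \<le> Suc r then \<beta> j - \<beta> (j - 1) else 0
   | TB \<Rightarrow> if 1 \<le> j \<and> j \<le> r then \<beta> j - \<beta> (j - 1) else 0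
   | TC \<Rightarrow> if 1 \<le> j \<and> j < r then \<beta> j - \<beta> (j - 1) else if j = r then 2 * \<beta> r - \<beta> (r - 1) else 0
   | TD \<Rightarrow> if 1 \<le> j \<and> j \<le> r - 2 then \<beta> j - \<beta> (j - 1) else if j = r - 1 then \<beta> (r - 1) + \<beta> r - \<beta> (r - 2)
           else if j = r then \<beta> r - \<beta> (r - 1) else 0
   | _ \<Rightarrow> 0)"

definition classical :: "ltype \<Rightarrow> bool" where "classical t = (t \<in> {TA, TB, TC, TD})"

lemma label_eq_eps_coroot:
  assumes "classical t" "valid_type t r" "\<And>k. k \<notin> {1..r} \<Longrightarrow> \<beta> k = 0" "i \<in> {1..r}"
  shows "(\<Sum>k\<in>{1..r}. \<beta> k * of_int (cartan t r i k)) = eps_coroot t r (eps_coords t r \<beta>) i"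
proof -
  have b0: "\<beta> 0 = 0" "\<beta> (Suc r) = 0" using assms(3) by auto
  consider "t = TA" | "t = TB" | "t = TC" | "t = TD" using assms(1) by (auto simp: classical_def)
  then show ?thesis
  proof cases
    case 1 then show ?thesis unfolding 1 sum_cartan_row_A[OF assms(4)] using assms b0
      by (auto simp: eps_coroot_def eps_coords_def valid_type_def)
  next
    case 2 then show ?thesis unfolding 2 sum_cartan_row_B[OF assms(4)] using assms b0
      by (auto simp: eps_coroot_def eps_coords_def valid_type_def)
  next
    case 3 then show ?thesis unfolding 3 sum_cartan_row_C[OF assms(4)] using assms b0
      by (auto simp: eps_coroot_def eps_coords_def valid_type_def)
  next
    case 4
    then have r4: "r \<ge> 4" using assms by (simp add: valid_type_def)
    have e: "r - Suc (Suc 0) = r - 2" "Suc (r - 2) = r - 1" "Suc (r - 1) = r" "r - 1 - 1 = r - 2" using r4 by auto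
    consider "i < r - 2" | "i = r - 2" | "i = r - 1" | "i = r" using assms(4) by fastforce
    then show ?thesis
    proof cases
      case 1 then show ?thesis unfolding 4 sum_cartan_row_D[OF r4 assms(4)] using assms b0 r4
        by (auto simp: eps_coroot_def eps_coords_def e)
    next
      case 2 then show ?thesis unfolding 4 sum_cartan_row_D[OF r4 assms(4)] using assms b0 r4
        by (auto simp: eps_coroot_def eps_coords_def e)
    next
      case 3 then show ?thesis unfolding 4 sum_cartan_row_D[OF r4 assms(4)] using assms b0 r4
        by (auto simp: eps_coroot_def eps_coords_def e)
    next
      case 5: 4 then show ?thesis unfolding \<open>t = TD\<close> sum_cartan_row_D[OF r4 assms(4)] using assms b0 r4
        by (auto simp: eps_coroot_def eps_coords_def e)
    qed
  qed
qed

definition real_unitv :: "nat \<Rightarrow> nat \<Rightarrow> real" where "real_unitv i = (\<lambda>k. of_int (unitv i k))"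

lemma real_unitv_apply: "real_unitv i k = (if k = i then 1 else 0)" by (simp add: real_unitv_def unitv_def)

lemma eps_coords_simple_A: "i \<in> {1..r} \<Longrightarrow> eps_coords TA r (real_unitv i) j = (if j = i then 1 else if j = Suc i then -1 else 0)"
  by (auto simp: eps_coords_def real_unitv_apply)

lemma eps_coords_simple_B: "i \<in> {1..r} \<Longrightarrow> eps_coords TB r (real_unitv i) j = (if j = i then 1 else if j = Suc i \<and> i < r then -1 else 0)"
  by (auto simp: eps_coords_def real_unitv_apply)

lemma eps_coords_simple_C: "i \<in> {1..r} \<Longrightarrow> r \<ge> 2 \<Longrightarrow> eps_coords TC r (real_unitv i) j = (if j = i then (if i = r then 2 else 1) else if j = Suc i \<and> i < r then -1 else 0)"
  by (auto simp: eps_coords_def real_unitv_apply)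

lemma eps_coords_simple_D: assumes i: "i \<in> {1..r}" and r4: "r \<ge> 4"
  shows "eps_coords TD r (real_unitv i) j = (if i = r then (if j = r \<or> j = r - 1 then 1 else 0)
   else if j = i then 1 else if j = Suc i then -1 else 0)"
proof -
  have e: "eps_coords TD r (real_unitv i) j = (if 1 \<le> j \<and> j \<le> r - 2 then real_unitv i j - real_unitv i (j - 1) else if j = r - 1 then real_unitv i (r - 1) + real_unitv i r - real_unitv i (r - 2)
           else if j = r then real_unitv i r - real_unitv i (r - 1) else 0)" by (simp add: eps_coords_def)
  consider (a) "1 \<le> j \<and> j \<le> r - 2" | (b) "j = r - 1" | (c) "j = r" | (d) "j = 0 \<or> j > r" using r4 by fastforce
  then show ?thesis
  proof cases
    case a
    then have "j \<noteq> r - 1" "j \<noteq> r" using r4 by auto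
    then show ?thesis unfolding e using a i by (auto simp: real_unitv_apply)
  next
    case b
    then have "j \<noteq> r" "1 \<le> j" "\<not> j \<le> r - 2" using r4 by auto
    then show ?thesis unfolding e using b i r4 by (auto simp: real_unitv_apply)
  next
    case c
    then have "j \<noteq> r - 1" "1 \<le> j" "\<not> j \<le> r - 2" using r4 by auto
    then show ?thesis unfolding e using c i r4 by (auto simp: real_unitv_apply)
  next
    case d
    then have "\<not> (1 \<le> j \<and> j \<le> r - 2)" "j \<noteq> r - 1" "j \<noteq> r" using r4 by auto
    then show ?thesis unfolding e using d i r4 by auto
  qed
qed

definition eps_refl :: "ltype \<Rightarrow> nat \<Rightarrow> nat \<Rightarrow> (nat \<Rightarrow> real) \<Rightarrow> nat \<Rightarrow> real" where
  "eps_refl t r i y = (\<lambda>j. y j - eps_coroot t r y i * eps_coords t r (real_unitv i) j)"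

definition eps_indices :: "ltype \<Rightarrow> nat \<Rightarrow> nat set" where
  "eps_indices t r = (if t = TA then {1..Suc r} else {1..r})"

lemma eps_coords_simple:
  assumes "classical t" "valid_type t r" "i \<in> {1..r}" "t = TA \<or> i < r"
  shows "eps_coords t r (real_unitv i) j = (if j = i then 1 else if j = Suc i then -1 else 0)"
proof -
  have r2: "r \<ge> 2" using assms(1,2) by (auto simp: classical_def valid_type_def)
  consider "t = TA" | "t = TB" | "t = TC" | "t = TD" using assms(1) by (auto simp: classical_def)
  then show ?thesis
  proof cases
    case 1 then show ?thesis using eps_coords_simple_A[OF assms(3)] by simp
  next
    case 2 then show ?thesis using eps_coords_simple_B[OF assms(3)] assms(4) by simp
  next
    case 3 then show ?thesis using eps_coords_simple_C[OF assms(3) r2] assms(4) by simp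
  next
    case 4
    then have r4: "r \<ge> 4" using assms(2) by (simp add: valid_type_def)
    show ?thesis using 4 eps_coords_simple_D[OF assms(3) r4] assms(4) by simp
  qed
qed

lemma eps_refl_transpose:
  assumes "classical t" "valid_type t r" "i \<in> {1..r}" "t = TA \<or> i < r"
  shows "eps_refl t r i y = (\<lambda>j. y (transpose i (Suc i) j))"
proof
  fix j
  have p: "eps_coroot t r y i = y i - y (Suc i)" using assms by (auto simp: eps_coroot_def)
  show "eps_refl t r i y j = y (transpose i (Suc i) j)"
    unfolding eps_refl_def p eps_coords_simple[OF assms] by (auto simp: transpose_def)
qed

lemma eps_refl_last_BC:
  assumes "t = TB \<or> t = TC" "valid_type t r"
  shows "eps_refl t r r y = (\<lambda>j. if j = r then - y j else y j)"
proof
  fix j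
  have r2: "r \<ge> 2" using assms by (auto simp: valid_type_def)
  have i: "r \<in> {1..r}" using r2 by auto
  show "eps_refl t r r y j = (if j = r then - y j else y j)"
    using assms(1)
  proof
    assume B: "t = TB"
    show ?thesis unfolding eps_refl_def B eps_coords_simple_B[OF i] by (auto simp: eps_coroot_def)
  next
    assume C: "t = TC"
    show ?thesis unfolding eps_refl_def C eps_coords_simple_C[OF i r2] by (auto simp: eps_coroot_def)
  qed
qed

lemma eps_refl_last_D:
  assumes "valid_type TD r"
  shows "eps_refl TD r r y = (\<lambda>j. if j = r - 1 then - y r else if j = r then - y (r - 1) else y j)"
proof
  fix j
  have r4: "r \<ge> 4" using assms by (auto simp: valid_type_def)
  have i: "r \<in> {1..r}" using r4 by auto
  show "eps_refl TD r r y j = (if j = r - 1 then - y r else if j = r then - y (r - 1) else y j)"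
    unfolding eps_refl_def eps_coords_simple_D[OF i r4] using r4 by (auto simp: eps_coroot_def)
qed

definition signed_coord_perm :: "nat set \<Rightarrow> (nat \<Rightarrow> real) \<Rightarrow> (nat \<Rightarrow> real) \<Rightarrow> bool" where
  "signed_coord_perm D y y' = (\<exists>\<sigma> s. bij_betw \<sigma> D D \<and> (\<forall>j. j \<notin> D \<longrightarrow> \<sigma> j = j \<and> s j = 1)
      \<and> (\<forall>j. s j = 1 \<or> s j = -1) \<and> y' = (\<lambda>j. s j * y (\<sigma> j)))"

definition coord_perm :: "nat set \<Rightarrow> (nat \<Rightarrow> real) \<Rightarrow> (nat \<Rightarrow> real) \<Rightarrow> bool" where
  "coord_perm D y y' = (\<exists>\<sigma>. bij_betw \<sigma> D D \<and> (\<forall>j. j \<notin> D \<longrightarrow> \<sigma> j = j) \<and> y' = (\<lambda>j. y (\<sigma> j)))"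

lemma coord_perm_signed: "coord_perm D y y' \<Longrightarrow> signed_coord_perm D y y'"
proof -
  assume "coord_perm D y y'"
  then obtain \<sigma> where h: "bij_betw \<sigma> D D" "\<forall>j. j \<notin> D \<longrightarrow> \<sigma> j = j" "y' = (\<lambda>j. y (\<sigma> j))"
    unfolding coord_perm_def by blast
  show ?thesis unfolding signed_coord_perm_def
    by (rule exI[where x=\<sigma>], rule exI[where x="\<lambda>_. 1"]) (use h in auto)
qed

lemma signed_coord_perm_sum_abs: "signed_coord_perm D y y' \<Longrightarrow> (\<Sum>j\<in>D. g \<bar>y' j\<bar>) = (\<Sum>j\<in>D. g \<bar>y j\<bar>)"
proof -
  assume "signed_coord_perm D y y'"
  then obtain \<sigma> s where h: "bij_betw \<sigma> D D" "\<forall>j. s j = 1 \<or> s j = -1" "y' = (\<lambda>j. s j * y (\<sigma> j))"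
    unfolding signed_coord_perm_def by blast
  have "(\<Sum>j\<in>D. g \<bar>y' j\<bar>) = (\<Sum>j\<in>D. g \<bar>y (\<sigma> j)\<bar>)"
  proof (rule sum.cong[OF HOL.refl])
    fix j show "g \<bar>y' j\<bar> = g \<bar>y (\<sigma> j)\<bar>" using h(2)[rule_format, of j] h(3) by (auto simp: abs_mult)
  qed
  also have "\<dots> = (\<Sum>j\<in>D. g \<bar>y j\<bar>)" using sum.reindex_bij_betw[OF h(1), of "\<lambda>j. g \<bar>y j\<bar>"] by simp
  finally show ?thesis .
qed

lemma coord_perm_sum: "coord_perm D y y' \<Longrightarrow> (\<Sum>j\<in>D. g (y' j)) = (\<Sum>j\<in>D. g (y j))"
proof -
  assume "coord_perm D y y'"
  then obtain \<sigma> where h: "bij_betw \<sigma> D D" "y' = (\<lambda>j. y (\<sigma> j))" unfolding coord_perm_def by blast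
  show ?thesis using sum.reindex_bij_betw[OF h(1), of "\<lambda>j. g (y j)"] h(2) by simp
qed

lemma signed_coord_perm_outside: "signed_coord_perm D y y' \<Longrightarrow> j \<notin> D \<Longrightarrow> y' j = y j"
  unfolding signed_coord_perm_def by auto

lemma signed_coord_perm_values: "signed_coord_perm D y y' \<Longrightarrow> (\<forall>j. y j \<in> V) \<Longrightarrow> (\<forall>v\<in>V. - v \<in> V) \<Longrightarrow> y' j \<in> V"
proof -
  assume h: "signed_coord_perm D y y'" "\<forall>j. y j \<in> V" "\<forall>v\<in>V. - v \<in> V"
  then obtain \<sigma> s where o: "\<forall>j. s j = 1 \<or> s j = -1" "y' = (\<lambda>j. s j * y (\<sigma> j))"
    unfolding signed_coord_perm_def by blast
  show "y' j \<in> V" using o(1)[rule_format, of j]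
  proof
    assume "s j = 1" then show ?thesis using o(2) h(2) by simp
  next
    assume "s j = -1" then show ?thesis using o(2) h(2,3) by simp
  qed
qed

lemma signed_coord_perm_values_on: "signed_coord_perm D y y' \<Longrightarrow> (\<forall>j\<in>D. y j \<in> V) \<Longrightarrow> (\<forall>v\<in>V. - v \<in> V) \<Longrightarrow> j \<in> D \<Longrightarrow> y' j \<in> V"
proof -
  assume h: "signed_coord_perm D y y'" "\<forall>j\<in>D. y j \<in> V" "\<forall>v\<in>V. - v \<in> V" "j \<in> D"
  then obtain \<sigma> s where o: "bij_betw \<sigma> D D" "\<forall>j. s j = 1 \<or> s j = -1" "y' = (\<lambda>j. s j * y (\<sigma> j))"
    unfolding signed_coord_perm_def by blast
  have m: "\<sigma> j \<in> D" using o(1) h(4) by (auto simp: bij_betw_def)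
  show "y' j \<in> V" using o(2)[rule_format, of j]
  proof
    assume "s j = 1" then show ?thesis using o(3) h(2) m by simp
  next
    assume "s j = -1" then show ?thesis using o(3) h(2,3) m by simp
  qed
qed

lemma coord_perm_values_on: "coord_perm D y y' \<Longrightarrow> (\<forall>j\<in>D. y j \<in> V) \<Longrightarrow> j \<in> D \<Longrightarrow> y' j \<in> V"
proof -
  assume h: "coord_perm D y y'" "\<forall>j\<in>D. y j \<in> V" "j \<in> D"
  then obtain \<sigma> where o: "bij_betw \<sigma> D D" "y' = (\<lambda>j. y (\<sigma> j))" unfolding coord_perm_def by blast
  have m: "\<sigma> j \<in> D" using o(1) h(3) by (auto simp: bij_betw_def)
  show ?thesis using o(2) h(2) m by simp
qed

lemma eps_refl_coord_perm:
  assumes "classical t" "valid_type t r" "i \<in> {1..r}" "t = TA \<or> i < r"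
  shows "coord_perm (eps_indices t r) y (eps_refl t r i y)"
  unfolding coord_perm_def eps_refl_transpose[OF assms]
  by (rule exI[where x="transpose i (Suc i)"]) (use assms in \<open>auto simp: eps_indices_def\<close>)

lemma eps_refl_signed_coord_perm:
  assumes "classical t" "valid_type t r" "i \<in> {1..r}"
  shows "signed_coord_perm (eps_indices t r) y (eps_refl t r i y)"
proof -
  have r2: "r \<ge> 2" using assms by (auto simp: classical_def valid_type_def)
  consider "t = TA \<or> i < r" | "t = TB \<or> t = TC" "i = r" | "t = TD" "i = r" using assms(1,3)
    unfolding classical_def by (cases "i < r") auto
  then show ?thesis
  proof cases
    case 1 then show ?thesis using eps_refl_coord_perm[OF assms 1] coord_perm_signed by blast
  next
    case 2
    show ?thesis unfolding signed_coord_perm_def 2(2) eps_refl_last_BC[OF 2(1) assms(2)]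
      by (rule exI[where x=id], rule exI[where x="\<lambda>j. if j = r then -1 else 1"])
         (use 2 r2 in \<open>auto simp: eps_indices_def\<close>)
  next
    case 3
    have r4: "r \<ge> 4" using assms 3 by (auto simp: valid_type_def)
    show ?thesis unfolding signed_coord_perm_def 3 eps_refl_last_D[OF assms(2)[unfolded 3]]
      by (rule exI[where x="transpose (r - 1) r"], rule exI[where x="\<lambda>j. if j = r - 1 \<or> j = r then -1 else 1"])
         (use r4 in \<open>auto simp: eps_indices_def transpose_def\<close>)
  qed
qed

text \<open>Roots \<open>\<plusminus>\<epsilon>\<^sub>i \<plusminus> \<epsilon>\<^sub>j\<close>, \<open>\<plusminus>\<epsilon>\<^sub>i\<close>, \<open>\<plusminus>2\<epsilon>\<^sub>i\<close> have \<open>\<epsilon>\<close>-coordinates whose absolute values sum to at most 2;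
  these Weyl-invariant bounds are what pins down the highest root.\<close>

definition eps_root_bounds :: "ltype \<Rightarrow> nat \<Rightarrow> (nat \<Rightarrow> real) \<Rightarrow> bool" where
  "eps_root_bounds t r y = ((\<forall>j. j \<notin> eps_indices t r \<longrightarrow> y j = 0) \<and> (\<Sum>j\<in>eps_indices t r. \<bar>y j\<bar>) \<le> 2
     \<and> ((t = TB \<or> t = TD) \<longrightarrow> (\<forall>j. \<bar>y j\<bar> \<le> 1)) \<and> (t = TA \<longrightarrow> (\<Sum>j\<in>eps_indices t r. y j) = 0))"

lemma eps_coords_diff: "eps_coords t r (\<lambda>k. b k - a * u k) = (\<lambda>j. eps_coords t r b j - a * eps_coords t r u j)"
  by (rule ext) (cases t; simp add: eps_coords_def algebra_simps)

lemma eps_coroot_diff: "eps_coroot t r (\<lambda>k. b k - a * u k) i = eps_coroot t r b i - a * eps_coroot t r u i"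
  by (cases t; simp add: eps_coroot_def algebra_simps)

lemma eps_coords_refl_root:
  assumes "classical t" "valid_type t r" "i \<in> {1..r}" "\<And>k. k \<notin> {1..r} \<Longrightarrow> \<beta> k = 0"
  shows "eps_coords t r (\<lambda>k. of_int (refl_root t r i \<beta> k)) = eps_refl t r i (eps_coords t r (\<lambda>k. of_int (\<beta> k)))"
proof -
  have "of_int (\<Sum>j\<in>{1..r}. \<beta> j * cartan t r i j) = (\<Sum>j\<in>{1..r}. (of_int (\<beta> j) :: real) * of_int (cartan t r i j))"
    by simp
  also have "\<dots> = eps_coroot t r (eps_coords t r (\<lambda>k. of_int (\<beta> k))) i" by (rule label_eq_eps_coroot) (use assms in auto)
  finally have l: "of_int (\<Sum>j\<in>{1..r}. \<beta> j * cartan t r i j) = eps_coroot t r (eps_coords t r (\<lambda>k. of_int (\<beta> k))) i" .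
  have h1: "(\<lambda>k. (of_int (refl_root t r i \<beta> k) :: real)) = (\<lambda>k. of_int (\<beta> k) - of_int (\<Sum>j\<in>{1..r}. \<beta> j * cartan t r i j) * real_unitv i k)"
    unfolding refl_root_def real_unitv_def of_int_diff of_int_mult by (rule HOL.refl)
  show ?thesis unfolding h1 l eps_refl_def eps_coords_diff by (rule HOL.refl)
qed

lemma sum_two_points:
  fixes g :: "real \<Rightarrow> real"
  assumes "finite D" "a \<in> D" "b \<in> D" "a \<noteq> b" "g 0 = 0"
  shows "(\<Sum>j\<in>D. g (if j = a then c1 else if j = b then c2 else 0)) = g c1 + g c2"
proof -
  have "(\<Sum>j\<in>D. g (if j = a then c1 else if j = b then c2 else 0))
      = (\<Sum>j\<in>D. (if j = a then g c1 else 0) + (if j = b then g c2 else 0))"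
    by (rule sum.cong[OF HOL.refl]) (use assms in auto)
  also have "\<dots> = g c1 + g c2" using assms by (simp add: sum.distrib)
  finally show ?thesis .
qed

lemma eps_root_bounds_simple:
  assumes "classical t" "valid_type t r" "i \<in> {1..r}"
  shows "eps_root_bounds t r (eps_coords t r (real_unitv i))"
proof -
  have r2: "r \<ge> 2" using assms by (auto simp: classical_def valid_type_def)
  consider "t = TA \<or> i < r" | "t = TB" "i = r" | "t = TC" "i = r" | "t = TD" "i = r"
    using assms(1,3) unfolding classical_def by (cases "i < r") auto
  then show ?thesis
  proof cases
    case 1
    have e: "eps_coords t r (real_unitv i) = (\<lambda>j. if j = i then 1 else if j = Suc i then -1 else 0)"
      using eps_coords_simple[OF assms 1] by (intro ext) simp
    have d: "i \<in> eps_indices t r" "Suc i \<in> eps_indices t r" using 1 assms by (auto simp: eps_indices_def)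
    have s1: "(\<Sum>j\<in>eps_indices t r. \<bar>if j = i then 1 else if j = Suc i then -1 else 0 :: real\<bar>) = 2"
      using sum_two_points[of "eps_indices t r" i "Suc i" abs 1 "-1"] d by (simp add: eps_indices_def)
    have s2: "(\<Sum>j\<in>eps_indices t r. (if j = i then 1 else if j = Suc i then -1 else 0 :: real)) = 0"
      using sum_two_points[of "eps_indices t r" i "Suc i" "\<lambda>x. x" 1 "-1"] d by (simp add: eps_indices_def)
    show ?thesis unfolding eps_root_bounds_def e using s1 s2 d by auto
  next
    case 2
    have e: "eps_coords t r (real_unitv i) = (\<lambda>j. if j = r then 1 else 0)"
      using 2 eps_coords_simple_B[OF assms(3)] by (intro ext) simp
    show ?thesis unfolding eps_root_bounds_def e using 2 r2 by (auto simp: eps_indices_def)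
  next
    case 3
    have e: "eps_coords t r (real_unitv i) = (\<lambda>j. if j = r then 2 else 0)"
      using 3 eps_coords_simple_C[OF assms(3) r2] by (intro ext) simp
    show ?thesis unfolding eps_root_bounds_def e using 3 r2 by (auto simp: eps_indices_def)
  next
    case 4
    have r4: "r \<ge> 4" using 4 assms by (simp add: valid_type_def)
    have e: "eps_coords t r (real_unitv i) = (\<lambda>j. if j = r then 1 else if j = r - 1 then 1 else 0)"
      using 4 eps_coords_simple_D[OF assms(3) r4] by (intro ext) simp
    have d: "r \<in> eps_indices t r" "r - 1 \<in> eps_indices t r" using 4 r4 by (auto simp: eps_indices_def)
    have s1: "(\<Sum>j\<in>eps_indices t r. \<bar>if j = r then 1 else if j = r - 1 then 1 else 0 :: real\<bar>) = 2"
      using sum_two_points[of "eps_indices t r" r "r - 1" abs 1 1] d r4 by (simp add: eps_indices_def)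
    show ?thesis unfolding eps_root_bounds_def e using s1 d 4 by auto
  qed
qed

lemma eps_root_bounds_refl:
  assumes "classical t" "valid_type t r" "i \<in> {1..r}" "eps_root_bounds t r y"
  shows "eps_root_bounds t r (eps_refl t r i y)"
proof -
  have sp: "signed_coord_perm (eps_indices t r) y (eps_refl t r i y)" by (rule eps_refl_signed_coord_perm[OF assms(1-3)])
  have a: "(\<Sum>j\<in>eps_indices t r. \<bar>eps_refl t r i y j\<bar>) \<le> 2" using signed_coord_perm_sum_abs[OF sp, of "\<lambda>x. x"] assms(4)
    by (simp add: eps_root_bounds_def)
  have b: "\<forall>j. j \<notin> eps_indices t r \<longrightarrow> eps_refl t r i y j = 0" using signed_coord_perm_outside[OF sp] assms(4) by (simp add: eps_root_bounds_def)
  have c: "(t = TB \<or> t = TD) \<longrightarrow> (\<forall>j. \<bar>eps_refl t r i y j\<bar> \<le> 1)"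
  proof (intro impI allI)
    fix j assume "t = TB \<or> t = TD"
    then have "\<forall>j. y j \<in> {x. \<bar>x\<bar> \<le> 1}" using assms(4) by (simp add: eps_root_bounds_def)
    then show "\<bar>eps_refl t r i y j\<bar> \<le> 1" using signed_coord_perm_values[OF sp, of "{x. \<bar>x\<bar> \<le> 1}" j] by auto
  qed
  have d: "t = TA \<longrightarrow> (\<Sum>j\<in>eps_indices t r. eps_refl t r i y j) = 0"
  proof
    assume A: "t = TA"
    have "coord_perm (eps_indices t r) y (eps_refl t r i y)" by (rule eps_refl_coord_perm) (use assms A in auto)
    then show "(\<Sum>j\<in>eps_indices t r. eps_refl t r i y j) = 0" using coord_perm_sum[of "eps_indices t r" y _ "\<lambda>x. x"] assms(4) A
      by (simp add: eps_root_bounds_def)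
  qed
  show ?thesis unfolding eps_root_bounds_def using a b c d by blast
qed

lemma roots_eps_root_bounds:
  assumes "classical t" "valid_type t r"
  shows "\<beta> \<in> roots t r \<Longrightarrow> eps_root_bounds t r (eps_coords t r (\<lambda>k. of_int (\<beta> k)))"
proof (induction rule: roots.induct)
  case (simple i)
  have "(\<lambda>k. of_int (unitv i k)) = real_unitv i" by (simp add: real_unitv_def)
  then show ?case using eps_root_bounds_simple[OF assms simple] by simp
next
  case (refl \<beta> i)
  have "eps_coords t r (\<lambda>k. of_int (refl_root t r i \<beta> k)) = eps_refl t r i (eps_coords t r (\<lambda>k. of_int (\<beta> k)))"
    by (rule eps_coords_refl_root[OF assms refl.hyps(2)]) (use roots_vanish_outside[OF refl.hyps(1)] in auto)
  then show ?case using eps_root_bounds_refl[OF assms refl.hyps(2) refl.IH] by simp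
qed

section \<open>Highest roots of the classical types\<close>

lemma sum_telescope_from_1: "(\<And>j. j \<in> {1..k::nat} \<Longrightarrow> e j = b j - b (j - 1)) \<Longrightarrow> b 0 = 0 \<Longrightarrow> (\<Sum>j\<in>{1..k}. e j) = (b k :: real)"
proof (induction k)
  case 0 then show ?case by simp
next
  case (Suc k)
  have "(\<Sum>j\<in>{1..Suc k}. e j) = (\<Sum>j\<in>{1..k}. e j) + e (Suc k)" by simp
  also have "\<dots> = b k + (b (Suc k) - b k)" using Suc by auto
  finally show ?case by simp
qed

lemma sum_le_sum_abs: "finite A \<Longrightarrow> A \<subseteq> D \<Longrightarrow> finite D \<Longrightarrow> (\<Sum>j\<in>A. y j) \<le> (\<Sum>j\<in>D. \<bar>y j :: real\<bar>)"
proof -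
  assume "finite A" "A \<subseteq> D" "finite D"
  have "(\<Sum>j\<in>A. y j) \<le> (\<Sum>j\<in>A. \<bar>y j\<bar>)" by (rule sum_mono) simp
  also have "\<dots> \<le> (\<Sum>j\<in>D. \<bar>y j\<bar>)" by (rule sum_mono2) (use \<open>A \<subseteq> D\<close> \<open>finite D\<close> in auto)
  finally show ?thesis .
qed

lemma label_eq_sum: "label t r \<beta> i = (\<Sum>k\<in>{1..r}. \<beta> k * of_int (cartan t r i k))"
  by (simp add: label_def)

lemma label_A: "i \<in> {1..r} \<Longrightarrow> label TA r \<beta> i = 2 * \<beta> i - (if i < r then \<beta> (Suc i) else 0) - (if 2 \<le> i then \<beta> (i - 1) else 0)"
  unfolding label_eq_sum by (rule sum_cartan_row_A)
lemma label_B: "i \<in> {1..r} \<Longrightarrow> label TB r \<beta> i = 2 * \<beta> i - (if i < r then \<beta> (Suc i) else 0) - (if 2 \<le> i then (if i = r then 2 else 1) * \<beta> (i - 1) else 0)"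
  unfolding label_eq_sum by (rule sum_cartan_row_B)
lemma label_C: "i \<in> {1..r} \<Longrightarrow> label TC r \<beta> i = 2 * \<beta> i - (if i < r then (if i = r - 1 then 2 else 1) * \<beta> (Suc i) else 0) - (if 2 \<le> i then \<beta> (i - 1) else 0)"
  unfolding label_eq_sum by (rule sum_cartan_row_C)
lemma label_D: "r \<ge> 4 \<Longrightarrow> i \<in> {1..r} \<Longrightarrow> label TD r \<beta> i = 2 * \<beta> i - (if Suc i \<le> r - 1 then \<beta> (Suc i) else 0) - (if 2 \<le> i \<and> i \<le> r - 1 then \<beta> (i - 1) else 0)
    - (if i = r - 2 then \<beta> r else 0) - (if i = r then \<beta> (r - 2) else 0)"
  unfolding label_eq_sum by (rule sum_cartan_row_D)

lemma roots_add_simple: "\<beta> \<in> roots t r \<Longrightarrow> i \<in> {1..r} \<Longrightarrow> label t r \<beta> i = - n \<Longrightarrow> (\<lambda>k. \<beta> k + n * unitv i k) \<in> roots t r"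
proof -
  assume h: "\<beta> \<in> roots t r" "i \<in> {1..r}" "label t r \<beta> i = - n"
  have "refl_root t r i \<beta> = (\<lambda>k. \<beta> k + n * unitv i k)"
    using h(3) unfolding refl_root_def label_def by auto
  then show ?thesis using roots.refl[OF h(1,2)] by simp
qed

definition interval_ind :: "nat \<Rightarrow> nat \<Rightarrow> nat \<Rightarrow> int" where "interval_ind a b k = (if a \<le> k \<and> k \<le> b then 1 else 0)"

lemma interval_ind_root: "k \<in> {1..r} \<Longrightarrow> t = TA \<or> (t = TB \<and> k < r) \<or> (t = TC \<and> k < r) \<or> (t = TD \<and> k < r - 1) \<Longrightarrow> valid_type t r
   \<Longrightarrow> interval_ind 1 k \<in> roots t r"
proof (induction k)
  case 0 then show ?case by simp
next
  case (Suc k)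
  show ?case
  proof (cases "k = 0")
    case True
    then have "interval_ind 1 (Suc k) = unitv 1" by (auto simp: interval_ind_def unitv_def)
    then show ?thesis using roots.simple[of 1 r t] Suc.prems by auto
  next
    case False
    have r2: "r \<ge> 2" using Suc.prems by (auto simp: valid_type_def)
    have IH: "interval_ind 1 k \<in> roots t r" using Suc False by auto
    have i: "Suc k \<in> {1..r}" using Suc.prems by auto
    have "label t r (interval_ind 1 k) (Suc k) = - 1"
      using Suc.prems False r2
      by (auto simp: label_A[OF i] label_B[OF i] label_C[OF i] label_D[OF _ i] interval_ind_def valid_type_def)
    then have "(\<lambda>j. interval_ind 1 k j + 1 * unitv (Suc k) j) \<in> roots t r" by (rule roots_add_simple[OF IH i])
    moreover have "(\<lambda>j. interval_ind 1 k j + 1 * unitv (Suc k) j) = interval_ind 1 (Suc k)"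
      by (auto simp: interval_ind_def unitv_def)
    ultimately show ?thesis by simp
  qed
qed

lemma roots_le_interval_A:
  assumes v: "valid_type TA r" and b: "\<beta> \<in> roots TA r"
  shows "\<beta> j \<le> interval_ind 1 r j"
proof (cases "j \<in> {1..r}")
  case False then show ?thesis using roots_vanish_outside[OF b False] by (auto simp: interval_ind_def)
next
  case True
  let ?b = "\<lambda>k. (of_int (\<beta> k) :: real)"
  let ?y = "eps_coords TA r ?b"
  have P: "eps_root_bounds TA r ?y" by (rule roots_eps_root_bounds[OF _ v b]) (simp add: classical_def)
  have b0: "?b 0 = 0" using roots_vanish_outside[OF b, of 0] by simp
  have t1: "(\<Sum>k\<in>{1..j}. ?y k) = ?b j" by (rule sum_telescope_from_1) (use True b0 in \<open>auto simp: eps_coords_def\<close>)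
  have D: "eps_indices TA r = {1..j} \<union> {Suc j..Suc r}" "{1..j} \<inter> {Suc j..Suc r} = {}" using True by (auto simp: eps_indices_def)
  have s0: "(\<Sum>k\<in>eps_indices TA r. ?y k) = 0" using P by (simp add: eps_root_bounds_def)
  then have "(\<Sum>k\<in>{1..j}. ?y k) + (\<Sum>k\<in>{Suc j..Suc r}. ?y k) = 0" unfolding D(1) by (subst (asm) sum.union_disjoint) (use D in auto)
  then have t2: "(\<Sum>k\<in>{Suc j..Suc r}. - ?y k) = ?b j" using t1 by (simp add: sum_negf)
  have a: "(\<Sum>k\<in>eps_indices TA r. \<bar>?y k\<bar>) = (\<Sum>k\<in>{1..j}. \<bar>?y k\<bar>) + (\<Sum>k\<in>{Suc j..Suc r}. \<bar>?y k\<bar>)"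
    unfolding D(1) by (subst sum.union_disjoint) (use D in auto)
  have "(\<Sum>k\<in>{1..j}. ?y k) \<le> (\<Sum>k\<in>{1..j}. \<bar>?y k\<bar>)" by (rule sum_le_sum_abs) auto
  moreover have "(\<Sum>k\<in>{Suc j..Suc r}. - ?y k) \<le> (\<Sum>k\<in>{Suc j..Suc r}. \<bar>?y k\<bar>)"
    using sum_le_sum_abs[of "{Suc j..Suc r}" "{Suc j..Suc r}" "\<lambda>k. - ?y k"] by simp
  moreover have "(\<Sum>k\<in>eps_indices TA r. \<bar>?y k\<bar>) \<le> 2" using P by (simp add: eps_root_bounds_def)
  ultimately have "2 * ?b j \<le> 2" using t1 t2 a by linarith
  then show ?thesis using True by (simp add: interval_ind_def)
qed

lemma highest_root_A: "valid_type TA r \<Longrightarrow> highest_root TA r = interval_ind 1 r"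
proof (rule highest_root_eqI)
  assume v: "valid_type TA r"
  then show "interval_ind 1 r \<in> roots TA r" using interval_ind_root[of r r TA] by (auto simp: valid_type_def)
  show "\<And>\<beta> j. \<beta> \<in> roots TA r \<Longrightarrow> \<beta> j \<le> interval_ind 1 r j" using roots_le_interval_A[OF v] by blast
qed

lemma grading_set_A: "valid_type TA r \<Longrightarrow> grading_set TA r = {1, r}"
proof -
  assume v: "valid_type TA r"
  then have r2: "r \<ge> 2" by (simp add: valid_type_def)
  have L: "label TA r (interval_ind 1 r) i \<noteq> 0 \<longleftrightarrow> i = 1 \<or> i = r" if i: "i \<in> {1..r}" for i
    unfolding label_A[OF i] using i r2 by (auto simp: interval_ind_def)
  show ?thesis unfolding grading_set_def highest_root_A[OF v]
  proof (rule set_eqI)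
    fix i show "i \<in> {i \<in> {1..r}. label TA r (interval_ind 1 r) i \<noteq> 0} \<longleftrightarrow> i \<in> {1, r}"
      using L[of i] r2 by auto
  qed
qed

definition theta_B :: "nat \<Rightarrow> nat \<Rightarrow> int" where
  "theta_B r k = (if k = 1 then 1 else if 2 \<le> k \<and> k \<le> r then 2 else 0)"

definition theta_B_from :: "nat \<Rightarrow> nat \<Rightarrow> nat \<Rightarrow> int" where
  "theta_B_from r m k = (if 1 \<le> k \<and> k < m then 1 else if m \<le> k \<and> k \<le> r then 2 else 0)"

lemma theta_B_root: assumes v: "valid_type TB r" shows "theta_B r \<in> roots TB r"
proof -
  have r2: "r \<ge> 2" using v by (simp add: valid_type_def)
  have i0: "interval_ind 1 (r - 1) \<in> roots TB r" using interval_ind_root[of "r - 1" r TB] v r2 by auto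
  have ir: "r \<in> {1..r}" using r2 by auto
  have "label TB r (interval_ind 1 (r - 1)) r = - 2" unfolding label_B[OF ir] using r2 by (auto simp: interval_ind_def)
  from roots_add_simple[OF i0 ir this] have top: "theta_B_from r r \<in> roots TB r"
    by (rule back_subst[where P="\<lambda>x. x \<in> roots TB r"]) (auto simp: theta_B_from_def interval_ind_def unitv_def intro!: ext)
  have "theta_B_from r 2 \<in> roots TB r"
    using r2
  proof (induction rule: inc_induct)
    case (step n)
    then have i: "n \<in> {1..r}" by auto
    have "label TB r (theta_B_from r (Suc n)) n = - 1" unfolding label_B[OF i] using step by (auto simp: theta_B_from_def)
    from roots_add_simple[OF step.IH i this] show ?case
      by (rule back_subst[where P="\<lambda>x. x \<in> roots TB r"]) (use step in \<open>auto simp: theta_B_from_def unitv_def intro!: ext\<close>)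
  qed (fact top)
  moreover have "theta_B_from r 2 = theta_B r" by (auto simp: theta_B_from_def theta_B_def intro!: ext)
  ultimately show ?thesis by simp
qed

lemma roots_le_theta_B:
  assumes v: "valid_type TB r" and b: "\<beta> \<in> roots TB r"
  shows "\<beta> j \<le> theta_B r j"
proof (cases "j \<in> {1..r}")
  case False then show ?thesis using roots_vanish_outside[OF b False] by (auto simp: theta_B_def)
next
  case True
  let ?b = "\<lambda>k. (of_int (\<beta> k) :: real)"
  let ?y = "eps_coords TB r ?b"
  have P: "eps_root_bounds TB r ?y" by (rule roots_eps_root_bounds[OF _ v b]) (simp add: classical_def)
  have b0: "?b 0 = 0" using roots_vanish_outside[OF b, of 0] by simp
  have t1: "(\<Sum>k\<in>{1..j}. ?y k) = ?b j" by (rule sum_telescope_from_1) (use True b0 in \<open>auto simp: eps_coords_def\<close>)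
  have "(\<Sum>k\<in>{1..j}. ?y k) \<le> (\<Sum>k\<in>eps_indices TB r. \<bar>?y k\<bar>)" by (rule sum_le_sum_abs) (use True in \<open>auto simp: eps_indices_def\<close>)
  moreover have "(\<Sum>k\<in>eps_indices TB r. \<bar>?y k\<bar>) \<le> 2" using P by (simp add: eps_root_bounds_def)
  ultimately have le2: "?b j \<le> 2" using t1 by linarith
  have "\<bar>?y 1\<bar> \<le> 1" using P by (simp add: eps_root_bounds_def)
  moreover have "?y 1 = ?b 1" using b0 True by (auto simp: eps_coords_def)
  ultimately have "?b 1 \<le> 1" by linarith
  then show ?thesis using le2 True by (auto simp: theta_B_def)
qed

lemma highest_root_B: "valid_type TB r \<Longrightarrow> highest_root TB r = theta_B r"
  by (rule highest_root_eqI) (auto intro: theta_B_root roots_le_theta_B)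

lemma grading_set_B: "valid_type TB r \<Longrightarrow> grading_set TB r = {2}"
proof -
  assume v: "valid_type TB r"
  then have r2: "r \<ge> 2" by (simp add: valid_type_def)
  have L: "label TB r (theta_B r) i \<noteq> 0 \<longleftrightarrow> i = 2" if i: "i \<in> {1..r}" for i
    unfolding label_B[OF i] using i r2 by (auto simp: theta_B_def)
  show ?thesis unfolding grading_set_def highest_root_B[OF v]
  proof (rule set_eqI)
    fix i show "i \<in> {i \<in> {1..r}. label TB r (theta_B r) i \<noteq> 0} \<longleftrightarrow> i \<in> {2}"
      using L[of i] r2 by auto
  qed
qed

definition theta_C :: "nat \<Rightarrow> nat \<Rightarrow> int" where
  "theta_C r k = (if 1 \<le> k \<and> k < r then 2 else if k = r then 1 else 0)"

definition theta_C_from :: "nat \<Rightarrow> nat \<Rightarrow> nat \<Rightarrow> int" where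
  "theta_C_from r m k = (if m \<le> k \<and> k < r then 2 else if k = r then 1 else 0)"

lemma theta_C_root: assumes v: "valid_type TC r" shows "theta_C r \<in> roots TC r"
proof -
  have r2: "r \<ge> 2" using v by (simp add: valid_type_def)
  have ir: "r \<in> {1..r}" and "1 \<le> r" using r2 by auto
  have top: "theta_C_from r r \<in> roots TC r" using roots.simple[OF ir, of TC]
    by (rule back_subst[where P="\<lambda>x. x \<in> roots TC r"]) (auto simp: theta_C_from_def unitv_def intro!: ext)
  have "theta_C_from r 1 \<in> roots TC r"
    using \<open>1 \<le> r\<close>
  proof (induction rule: inc_induct)
    case (step n)
    then have i: "n \<in> {1..r}" by auto
    have "label TC r (theta_C_from r (Suc n)) n = - 2" unfolding label_C[OF i] using step by (auto simp: theta_C_from_def)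
    from roots_add_simple[OF step.IH i this] show ?case
      by (rule back_subst[where P="\<lambda>x. x \<in> roots TC r"]) (use step in \<open>auto simp: theta_C_from_def unitv_def intro!: ext\<close>)
  qed (fact top)
  moreover have "theta_C_from r 1 = theta_C r" by (auto simp: theta_C_from_def theta_C_def intro!: ext)
  ultimately show ?thesis by simp
qed

lemma roots_le_theta_C:
  assumes v: "valid_type TC r" and b: "\<beta> \<in> roots TC r"
  shows "\<beta> j \<le> theta_C r j"
proof -
  have r2: "r \<ge> 2" using v by (simp add: valid_type_def)
  let ?b = "\<lambda>k. (of_int (\<beta> k) :: real)"
  let ?y = "eps_coords TC r ?b"
  have P: "eps_root_bounds TC r ?y" by (rule roots_eps_root_bounds[OF _ v b]) (simp add: classical_def)
  have b0: "?b 0 = 0" using roots_vanish_outside[OF b, of 0] by simp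
  have A: "(\<Sum>k\<in>eps_indices TC r. \<bar>?y k\<bar>) \<le> 2" using P by (simp add: eps_root_bounds_def)
  have t1: "(\<Sum>k\<in>{1..j}. ?y k) = ?b j" if "1 \<le> j" "j < r" for j
    by (rule sum_telescope_from_1) (use that b0 in \<open>auto simp: eps_coords_def\<close>)
  show ?thesis
  proof (cases "1 \<le> j \<and> j < r")
    case True
    have "(\<Sum>k\<in>{1..j}. ?y k) \<le> (\<Sum>k\<in>eps_indices TC r. \<bar>?y k\<bar>)" by (rule sum_le_sum_abs) (use True in \<open>auto simp: eps_indices_def\<close>)
    then have "?b j \<le> 2" using t1[of j] True A by linarith
    then show ?thesis using True by (auto simp: theta_C_def)
  next
    case F: False
    show ?thesis
    proof (cases "j = r")
      case True
      have e: "{1..r} = {1..r - 1} \<union> {r}" using r2 by auto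
      have s: "(\<Sum>k\<in>{1..r}. ?y k) = (\<Sum>k\<in>{1..r - 1}. ?y k) + ?y r" unfolding e
        by (subst sum.union_disjoint) (use r2 in auto)
      have "(\<Sum>k\<in>{1..r - 1}. ?y k) = ?b (r - 1)" using t1[of "r - 1"] r2 by simp
      moreover have "?y r = 2 * ?b r - ?b (r - 1)" using r2 by (simp add: eps_coords_def)
      ultimately have "(\<Sum>k\<in>{1..r}. ?y k) = 2 * ?b r" using s by simp
      moreover have "(\<Sum>k\<in>{1..r}. ?y k) \<le> (\<Sum>k\<in>eps_indices TC r. \<bar>?y k\<bar>)" by (rule sum_le_sum_abs) (auto simp: eps_indices_def)
      ultimately have "?b r \<le> 1" using A by linarith
      then show ?thesis using True r2 by (auto simp: theta_C_def)
    next
      case False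
      then have "j \<notin> {1..r}" using F by auto
      then show ?thesis using roots_vanish_outside[OF b] F False by (auto simp: theta_C_def)
    qed
  qed
qed

lemma highest_root_C: "valid_type TC r \<Longrightarrow> highest_root TC r = theta_C r"
  by (rule highest_root_eqI) (auto intro: theta_C_root roots_le_theta_C)

lemma grading_set_C: "valid_type TC r \<Longrightarrow> grading_set TC r = {1}"
proof -
  assume v: "valid_type TC r"
  then have r2: "r \<ge> 2" by (simp add: valid_type_def)
  have L: "label TC r (theta_C r) i \<noteq> 0 \<longleftrightarrow> i = 1" if i: "i \<in> {1..r}" for i
    unfolding label_C[OF i] using i r2 by (auto simp: theta_C_def)
  show ?thesis unfolding grading_set_def highest_root_C[OF v]
  proof (rule set_eqI)
    fix i show "i \<in> {i \<in> {1..r}. label TC r (theta_C r) i \<noteq> 0} \<longleftrightarrow> i \<in> {1}"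
      using L[of i] r2 by auto
  qed
qed

definition theta_D :: "nat \<Rightarrow> nat \<Rightarrow> int" where
  "theta_D r k = (if k = 1 then 1 else if 2 \<le> k \<and> k \<le> r - 2 then 2 else if k = r - 1 \<or> k = r then 1 else 0)"

definition theta_D_tail :: "nat \<Rightarrow> nat \<Rightarrow> nat \<Rightarrow> int" where
  "theta_D_tail r m k = (if m \<le> k \<and> k \<le> r - 2 then 1 else if k = r then 1 else 0)"

definition theta_D_from :: "nat \<Rightarrow> nat \<Rightarrow> nat \<Rightarrow> int" where
  "theta_D_from r m k = (if 1 \<le> k \<and> k < m then 1 else if m \<le> k \<and> k \<le> r - 2 then 2 else if k = r - 1 \<or> k = r then 1 else 0)"

lemma theta_D_root: assumes v: "valid_type TD r" shows "theta_D r \<in> roots TD r"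
proof -
  have r4: "r \<ge> 4" using v by (simp add: valid_type_def)
  have ir: "r \<in> {1..r}" and "1 \<le> r - 1" "2 \<le> r - 1" using r4 by auto
  have top: "theta_D_tail r (r - 1) \<in> roots TD r" using roots.simple[OF ir, of TD]
    by (rule back_subst[where P="\<lambda>x. x \<in> roots TD r"]) (use r4 in \<open>auto simp: theta_D_tail_def unitv_def intro!: ext\<close>)
  have w1: "theta_D_tail r 1 \<in> roots TD r"
    using \<open>1 \<le> r - 1\<close>
  proof (induction rule: inc_induct)
    case (step n)
    then have i: "n \<in> {1..r}" by auto
    have v1: "theta_D_tail r (Suc n) n = 0" "theta_D_tail r (Suc n) (Suc n) = (if Suc n \<le> r - 2 then 1 else 0)"
      "theta_D_tail r (Suc n) (n - 1) = 0" "theta_D_tail r (Suc n) r = 1"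
      using step r4 by (auto simp: theta_D_tail_def)
    have "label TD r (theta_D_tail r (Suc n)) n = - 1" unfolding label_D[OF r4 i] v1 using step r4
      by (cases "Suc n \<le> r - 2") auto
    from roots_add_simple[OF step.IH i this] show ?case
      by (rule back_subst[where P="\<lambda>x. x \<in> roots TD r"]) (use step r4 in \<open>auto simp: theta_D_tail_def unitv_def intro!: ext\<close>)
  qed (fact top)
  have i1: "r - 1 \<in> {1..r}" using r4 by auto
  have e1: "Suc (r - 1) = r" "r - 1 \<noteq> r" "r - 1 - 1 = r - 2" "r - 1 \<noteq> r - 2" using r4 by auto
  have v1: "theta_D_tail r 1 (r - 1) = 0" "theta_D_tail r 1 (r - 2) = 1" using r4 by (auto simp: theta_D_tail_def)
  have "label TD r (theta_D_tail r 1) (r - 1) = - 1" unfolding label_D[OF r4 i1] e1 v1 using r4 by auto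
  from roots_add_simple[OF w1 i1 this] have top2: "theta_D_from r (r - 1) \<in> roots TD r"
    by (rule back_subst[where P="\<lambda>x. x \<in> roots TD r"]) (use r4 in \<open>auto simp: theta_D_tail_def theta_D_from_def unitv_def intro!: ext\<close>)
  have "theta_D_from r 2 \<in> roots TD r"
    using \<open>2 \<le> r - 1\<close>
  proof (induction rule: inc_induct)
    case base
    show ?case by (fact top2)
  next
    case (step n)
    then have i: "n \<in> {1..r}" by auto
    have v1: "theta_D_from r (Suc n) n = 1" "theta_D_from r (Suc n) (Suc n) = (if Suc n \<le> r - 2 then 2 else 1)"
      "theta_D_from r (Suc n) (n - 1) = 1" "theta_D_from r (Suc n) r = 1"
      using step r4 by (auto simp: theta_D_from_def)
    have "label TD r (theta_D_from r (Suc n)) n = - 1" unfolding label_D[OF r4 i] v1 using step r4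
      by (cases "Suc n \<le> r - 2") auto
    from roots_add_simple[OF step.IH i this] show ?case
      by (rule back_subst[where P="\<lambda>x. x \<in> roots TD r"]) (use step r4 in \<open>auto simp: theta_D_from_def unitv_def intro!: ext\<close>)
  qed
  moreover have "theta_D_from r 2 = theta_D r" by (auto simp: theta_D_from_def theta_D_def intro!: ext)
  ultimately show ?thesis by simp
qed

lemma roots_le_theta_D:
  assumes v: "valid_type TD r" and b: "\<beta> \<in> roots TD r"
  shows "\<beta> j \<le> theta_D r j"
proof -
  have r4: "r \<ge> 4" using v by (simp add: valid_type_def)
  let ?b = "\<lambda>k. (of_int (\<beta> k) :: real)"
  let ?y = "eps_coords TD r ?b"
  have P: "eps_root_bounds TD r ?y" by (rule roots_eps_root_bounds[OF _ v b]) (simp add: classical_def)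
  have b0: "?b 0 = 0" using roots_vanish_outside[OF b, of 0] by simp
  have A: "(\<Sum>k\<in>eps_indices TD r. \<bar>?y k\<bar>) \<le> 2" using P by (simp add: eps_root_bounds_def)
  have y1: "\<And>k. \<bar>?y k\<bar> \<le> 1" using P by (simp add: eps_root_bounds_def)
  have ystd: "?y k = ?b k - ?b (k - 1)" if "1 \<le> k" "k \<le> r - 2" for k using that by (simp add: eps_coords_def)
  have t1: "(\<Sum>k\<in>{1..j}. ?y k) = ?b j" if "j \<le> r - 2" for j
    by (rule sum_telescope_from_1) (use that b0 ystd in auto)
  have nn: "\<not> (1 \<le> r - 1 \<and> r - 1 \<le> r - 2)" "\<not> (1 \<le> r \<and> r \<le> r - 2)" "r \<noteq> r - 1" using r4 by auto
  have yr1: "?y (r - 1) = ?b (r - 1) + ?b r - ?b (r - 2)" unfolding eps_coords_def using nn r4 by (auto; arith)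
  have yr: "?y r = ?b r - ?b (r - 1)" unfolding eps_coords_def using nn r4 by (auto; arith)
  have e: "eps_indices TD r = {1..r - 2} \<union> {r - 1, r}" using r4 by (auto simp: eps_indices_def)
  have S: "(\<Sum>k\<in>eps_indices TD r. \<bar>?y k\<bar>) = (\<Sum>k\<in>{1..r - 2}. \<bar>?y k\<bar>) + \<bar>?y (r - 1)\<bar> + \<bar>?y r\<bar>"
    unfolding e by (subst sum.union_disjoint) (use r4 in auto)
  have le: "(\<Sum>k\<in>{1..j}. ?y k) \<le> (\<Sum>k\<in>{1..r - 2}. \<bar>?y k\<bar>)" if "j \<le> r - 2" for j
    by (rule sum_le_sum_abs) (use that in auto)
  have T: "(\<Sum>k\<in>{1..r - 2}. ?y k) = ?b (r - 2)" using t1[of "r - 2"] by simp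
  have L2: "(\<Sum>k\<in>{1..r - 2}. ?y k) \<le> (\<Sum>k\<in>{1..r - 2}. \<bar>?y k\<bar>)" using le[of "r - 2"] by simp
  consider "j = 1" | "2 \<le> j \<and> j \<le> r - 2" | "j = r - 1" | "j = r" | "j \<notin> {1..r}" using r4 by fastforce
  then show ?thesis
  proof cases
    case 1
    have "?y 1 = ?b 1" using ystd[of 1] b0 r4 by simp
    then have "?b 1 \<le> 1" using y1[of 1] by linarith
    then show ?thesis using 1 by (simp add: theta_D_def)
  next
    case 2
    have "?b j \<le> 2" using t1[of j] le[of j] 2 S A by (smt (verit) abs_ge_zero)
    then show ?thesis using 2 by (auto simp: theta_D_def)
  next
    case 3
    have "2 * ?b (r - 1) \<le> 2" using T L2 S A yr1 yr by (smt (verit) abs_ge_self abs_minus_cancel)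
    then show ?thesis using 3 r4 by (auto simp: theta_D_def)
  next
    case 4
    have "2 * ?b r \<le> 2" using T L2 S A yr1 yr by (smt (verit) abs_ge_self)
    then show ?thesis using 4 r4 by (auto simp: theta_D_def)
  next
    case 5
    then show ?thesis using roots_vanish_outside[OF b 5] by (auto simp: theta_D_def)
  qed
qed

lemma highest_root_D: "valid_type TD r \<Longrightarrow> highest_root TD r = theta_D r"
  by (rule highest_root_eqI) (auto intro: theta_D_root roots_le_theta_D)

lemma grading_set_D: "valid_type TD r \<Longrightarrow> grading_set TD r = {2}"
proof -
  assume v: "valid_type TD r"
  then have r4: "r \<ge> 4" by (simp add: valid_type_def)
  have rf: "Suc (Suc 0) \<le> r - 2" "Suc (Suc 0) \<le> r - Suc 0" "r - Suc (Suc 0) = r - 2" using r4 by auto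
  have L: "label TD r (theta_D r) i \<noteq> 0 \<longleftrightarrow> i = 2" if i: "i \<in> {1..r}" for i
  proof -
    consider "i = 1" | "i = 2" | "3 \<le> i \<and> i < r - 2" | "i = r - 2" | "i = r - 1" | "i = r" using i r4 by fastforce
    then show ?thesis
    proof cases
      case 1 then show ?thesis unfolding label_D[OF r4 i] using r4 rf by (auto simp: theta_D_def; arith)
    next
      case 2 then show ?thesis unfolding label_D[OF r4 i] using r4 rf by (auto simp: theta_D_def; arith)
    next
      case 3 then show ?thesis unfolding label_D[OF r4 i] using r4 rf by (auto simp: theta_D_def; arith)
    next
      case 4
      have e: "Suc (r - 2) = r - 1" "r - 2 - 1 = r - 3" using r4 by auto
      show ?thesis unfolding label_D[OF r4 i] unfolding 4 e using r4 rf by (cases "r = 4") (auto simp: theta_D_def; arith)+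
    next
      case 5
      have e: "Suc (r - 1) = r" "r - 1 - 1 = r - 2" using r4 by auto
      show ?thesis unfolding label_D[OF r4 i] unfolding 5 e using r4 rf by (auto simp: theta_D_def; arith)
    next
      case 6
      show ?thesis unfolding label_D[OF r4 i] unfolding 6 using r4 rf by (auto simp: theta_D_def; arith)
    qed
  qed
  show ?thesis unfolding grading_set_def highest_root_D[OF v]
  proof (rule set_eqI)
    fix i show "i \<in> {i \<in> {1..r}. label TD r (theta_D r) i \<noteq> 0} \<longleftrightarrow> i \<in> {2}"
      using L[of i] r4 by auto
  qed
qed

section \<open>Duals of the fundamental representations of the classical types\<close>

definition eps_labels :: "ltype \<Rightarrow> nat \<Rightarrow> (nat \<Rightarrow> real) \<Rightarrow> nat \<Rightarrow> real" where
  "eps_labels t r y k = (if k \<in> {1..r} then eps_coroot t r y k else 0)"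

definition eps_weight_set :: "ltype \<Rightarrow> nat \<Rightarrow> ((nat \<Rightarrow> real) \<Rightarrow> bool) \<Rightarrow> (nat \<Rightarrow> int) set" where
  "eps_weight_set t r Y = {\<mu>. \<exists>y. Y y \<and> (\<forall>k. of_int (\<mu> k) = eps_labels t r y k)}"

lemma eps_coroot_simple:
  assumes "classical t" "valid_type t r" "i \<in> {1..r}" "k \<in> {1..r}"
  shows "eps_coroot t r (eps_coords t r (real_unitv i)) k = of_int (cartan t r k i)"
proof -
  have "eps_coroot t r (eps_coords t r (real_unitv i)) k = (\<Sum>j\<in>{1..r}. real_unitv i j * of_int (cartan t r k j))"
    by (rule label_eq_eps_coroot[symmetric]) (use assms in \<open>auto simp: real_unitv_def unitv_def\<close>)
  also have "\<dots> = (\<Sum>j\<in>{1..r}. if j = i then of_int (cartan t r k j) else 0)"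
    by (rule sum.cong[OF HOL.refl]) (auto simp: real_unitv_def unitv_def)
  also have "\<dots> = of_int (cartan t r k i)" using assms(3) by simp
  finally show ?thesis .
qed

lemma abs_eps_coroot_le_2:
  assumes "classical t" "\<And>j. \<bar>y j\<bar> \<le> 1"
  shows "\<bar>eps_coroot t r y k\<bar> \<le> 2"
proof -
  have a1: "\<bar>y a - y b\<bar> \<le> 2" for a b
    using assms(2)[of a] assms(2)[of b] by (auto simp: abs_le_iff)
  have a2: "\<bar>y a + y b\<bar> \<le> 2" for a b
    using assms(2)[of a] assms(2)[of b] by (auto simp: abs_le_iff)
  have a3: "\<bar>2 * y a\<bar> \<le> 2" for a
    using assms(2)[of a] by (auto simp: abs_le_iff)
  show ?thesis using assms(1) a1[of k "Suc k"] a1[of r "Suc r"] a2[of "r - 1" r] a3[of r] assms(2)[of r]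
    by (auto simp: eps_coroot_def classical_def)
qed

lemma eps_labels_eps_refl:
  assumes "classical t" "valid_type t r" and i: "i \<in> {1..r}"
    and \<mu>: "\<And>k. of_int (\<mu> k) = eps_labels t r y k"
  shows "of_int (refl_wt t r i \<mu> k) = eps_labels t r (eps_refl t r i y) k"
proof (cases "k \<in> {1..r}")
  case True
  have "of_int (refl_wt t r i \<mu> k) = eps_labels t r y k - eps_labels t r y i * of_int (cartan t r k i)"
    using True \<mu>[of k] \<mu>[of i] by (simp add: refl_wt_def)
  also have "\<dots> = eps_coroot t r y k - eps_coroot t r y i * eps_coroot t r (eps_coords t r (real_unitv i)) k"
    using True i eps_coroot_simple[OF assms(1,2) i True] by (simp add: eps_labels_def)
  also have "\<dots> = eps_coroot t r (eps_refl t r i y) k" unfolding eps_refl_def eps_coroot_diff by simp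
  finally show ?thesis using True by (simp add: eps_labels_def)
next
  case False
  then have "refl_wt t r i \<mu> k = \<mu> k" by (auto simp: refl_wt_def)
  moreover have "eps_labels t r (eps_refl t r i y) k = 0" "eps_labels t r y k = 0"
    using False unfolding eps_labels_def by auto
  ultimately show ?thesis using \<mu>[of k] by simp
qed

lemma finite_eps_weight_set:
  assumes "classical t" and bounded: "\<And>y j. Y y \<Longrightarrow> \<bar>y j\<bar> \<le> 1"
  shows "finite (eps_weight_set t r Y)"
proof (rule finite_subset)
  let ?B = "{\<mu>::nat\<Rightarrow>int. \<forall>x. (x \<in> {1..r} \<longrightarrow> \<mu> x \<in> {-2..2}) \<and> (x \<notin> {1..r} \<longrightarrow> \<mu> x = 0)}"
  show "eps_weight_set t r Y \<subseteq> ?B"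
  proof
    fix \<mu> assume "\<mu> \<in> eps_weight_set t r Y"
    then obtain y where y: "Y y" "\<And>k. of_int (\<mu> k) = eps_labels t r y k"
      unfolding eps_weight_set_def by blast
    have "\<bar>of_int (\<mu> x) :: real\<bar> \<le> 2" for x
      using y(2)[of x] abs_eps_coroot_le_2[OF assms(1) bounded[OF y(1)], where r=r and k=x]
      by (auto simp: eps_labels_def)
    then have "\<bar>\<mu> x\<bar> \<le> 2" for x by (metis of_int_abs of_int_le_iff of_int_numeral)
    moreover have "x \<notin> {1..r} \<Longrightarrow> \<mu> x = 0" for x using y(2)[of x] by (auto simp: eps_labels_def)
    ultimately show "\<mu> \<in> ?B" by (auto simp: abs_le_iff; smt (verit))
  qed
  show "finite ?B" by (rule finite_set_of_finite_funs) auto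
qed

text \<open>To compute \<open>-w\<^sub>0 \<lambda>\<close> it suffices to exhibit a Weyl-stable set \<open>Y\<close> of
  \<open>\<epsilon>\<close>-vectors representing \<open>-\<lambda>\<close> whose only dominant member represents \<open>\<nu>0\<close>.\<close>

lemma dual_hw_eps_model:
  assumes classical: "classical t" and v: "valid_type t r" and M: "inverse_cartan t r M"
    and Y_refl: "\<And>y i. Y y \<Longrightarrow> i \<in> {1..r} \<Longrightarrow> Y (eps_refl t r i y)"
    and bounded: "\<And>y j. Y y \<Longrightarrow> \<bar>y j\<bar> \<le> 1"
    and y0: "Y y0" "\<And>k. of_int (- c k) = eps_labels t r y0 k"
    and uniq: "\<And>y. Y y \<Longrightarrow> (\<forall>i\<in>{1..r}. eps_coroot t r y i \<ge> 0) \<Longrightarrow>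
      (\<forall>k. of_int (\<nu>0 k) = eps_labels t r y k)"
    and supp: "\<And>k. k \<notin> {1..r} \<Longrightarrow> c k = 0"
  shows "dual_hw t r c = \<nu>0"
proof (rule dual_hw_eqI[where S = "eps_weight_set t r Y"])
  show "(\<Sum>k\<in>{1..r}. (\<Sum>i\<in>{1..r}. M i k) * of_int (cartan t r k j)) > 0" if "j \<in> {1..r}" for j
    using inverse_cartan_column_sums[OF M that] by simp
  show "(\<lambda>k. - c k) \<in> eps_weight_set t r Y" unfolding eps_weight_set_def using y0 by auto
  show "refl_wt t r i \<mu> \<in> eps_weight_set t r Y" if m: "\<mu> \<in> eps_weight_set t r Y" and i: "i \<in> {1..r}" for \<mu> i
  proof -
    obtain y where y: "Y y" "\<And>k. of_int (\<mu> k) = eps_labels t r y k"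
      using m unfolding eps_weight_set_def by blast
    then show ?thesis unfolding eps_weight_set_def
      using Y_refl[OF y(1) i] eps_labels_eps_refl[OF classical v i] by blast
  qed
  show "finite (eps_weight_set t r Y)" by (intro finite_eps_weight_set[OF classical] bounded)
  show "\<nu> = \<nu>0" if m: "\<nu> \<in> eps_weight_set t r Y" and d: "dominant r \<nu>" for \<nu>
  proof -
    obtain y where y: "Y y" "\<And>k. of_int (\<nu> k) = eps_labels t r y k"
      using m unfolding eps_weight_set_def by blast
    have "\<forall>i\<in>{1..r}. eps_coroot t r y i \<ge> 0"
      using d y(2) by (auto simp: dominant_def eps_labels_def) (metis of_int_0_le_iff)
    then have "\<forall>k. of_int (\<nu>0 k) = eps_labels t r y k" by (rule uniq[OF y(1)])
    then show ?thesis using y(2) by (intro ext) (metis of_int_eq_iff)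
  qed
qed (fact supp)

lemma antitone_on_interval:
  assumes "\<And>i. 1 \<le> i \<Longrightarrow> i < n \<Longrightarrow> y (Suc i) \<le> (y i :: real)"
  shows "1 \<le> a \<Longrightarrow> a \<le> b \<Longrightarrow> b \<le> n \<Longrightarrow> y b \<le> y a"
proof (induction b)
  case 0 then show ?case by simp
next
  case (Suc b)
  show ?case
  proof (cases "a = Suc b")
    case True then show ?thesis by simp
  next
    case False
    then have "y b \<le> y a" using Suc by auto
    moreover have "y (Suc b) \<le> y b" using assms[of b] Suc False by auto
    ultimately show ?thesis by simp
  qed
qed

lemma antitone_01_eq_prefix:
  assumes anti: "\<And>a b. 1 \<le> a \<Longrightarrow> a \<le> b \<Longrightarrow> b \<le> n \<Longrightarrow> y b \<le> (y a :: real)"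
    and vals: "\<And>j. j \<in> {1..n} \<Longrightarrow> y j = 0 \<or> y j = 1"
    and s: "(\<Sum>j\<in>{1..n}. y j) = real k"
    and j: "j \<in> {1..n}"
  shows "y j = (if j \<le> k then 1 else 0)"
proof (cases "y j = 1")
  case True
  have "(\<Sum>l\<in>{1..j}. y l) = (\<Sum>l\<in>{1..j}. 1)"
  proof (rule sum.cong[OF HOL.refl])
    fix l assume l: "l \<in> {1..j}"
    then have "y j \<le> y l" using anti[of l j] j by auto
    then show "y l = 1" using vals[of l] l j True by auto
  qed
  then have "(\<Sum>l\<in>{1..j}. y l) = real j" by simp
  moreover have "(\<Sum>l\<in>{1..j}. y l) \<le> (\<Sum>l\<in>{1..n}. y l)"
  proof (rule sum_mono2)
    fix x assume "x \<in> {1..n} - {1..j}"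
    then show "0 \<le> y x" using vals[of x] by auto
  qed (use j in auto)
  ultimately have "j \<le> k" using s by simp
  then show ?thesis using True by simp
next
  case False
  then have y0: "y j = 0" using vals[OF j] by auto
  have e: "{1..n} = {1..j - 1} \<union> {j..n}" "{1..j - 1} \<inter> {j..n} = {}" using j by auto
  have z: "(\<Sum>l\<in>{j..n}. y l) = 0"
  proof (rule sum.neutral, rule ballI)
    fix l assume l: "l \<in> {j..n}"
    then have "y l \<le> y j" using anti[of j l] j by auto
    then show "y l = 0" using vals[of l] l j y0 by auto
  qed
  have "(\<Sum>l\<in>{1..j - 1}. y l) \<le> (\<Sum>l\<in>{1..j - 1}. 1)"
    by (rule sum_mono) (use vals j in fastforce)
  then have "(\<Sum>l\<in>{1..j - 1}. y l) \<le> real (j - 1)" by simp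
  moreover have "(\<Sum>j\<in>{1..n}. y j) = (\<Sum>l\<in>{1..j - 1}. y l) + (\<Sum>l\<in>{j..n}. y l)"
    unfolding e(1) by (rule sum.union_disjoint) (use e in auto)
  ultimately have "real k \<le> real (j - 1)" using s z by simp
  then have "k < j" using j by auto
  then show ?thesis using y0 by simp
qed

text \<open>Weyl orbits in \<open>\<epsilon>\<close>-coordinates: 0/1-vectors with \<open>n\<close> ones (weights of
  \<open>\<Lambda>\<^sup>n \<complex>\<^sup>r\<^sup>+\<^sup>1\<close>), vectors with \<open>n\<close> entries \<open>\<plusminus>1\<close> (orbit of \<open>\<epsilon>\<^sub>1 + \<dots> + \<epsilon>\<^sub>n\<close>) and
  vectors with all entries \<open>\<plusminus>1/2\<close> (spin weights).\<close>

definition wedge_vectors :: "nat \<Rightarrow> nat \<Rightarrow> (nat \<Rightarrow> real) \<Rightarrow> bool" where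
  "wedge_vectors r n y = ((\<forall>j. j \<notin> {1..Suc r} \<longrightarrow> y j = 0) \<and> (\<forall>j\<in>{1..Suc r}. y j = 0 \<or> y j = 1)
     \<and> (\<Sum>j\<in>{1..Suc r}. y j) = real n)"

lemma wedge_vectors_eps_refl:
  assumes v: "valid_type TA r" and Y: "wedge_vectors r n y" and i: "i \<in> {1..r}"
  shows "wedge_vectors r n (eps_refl TA r i y)"
proof -
  have p: "coord_perm {1..Suc r} y (eps_refl TA r i y)" using eps_refl_coord_perm[OF _ v i, of y] by (simp add: classical_def eps_indices_def)
  have a: "\<forall>j. j \<notin> {1..Suc r} \<longrightarrow> eps_refl TA r i y j = 0" using signed_coord_perm_outside[OF coord_perm_signed[OF p]] Y by (simp add: wedge_vectors_def)
  have b: "\<forall>j\<in>{1..Suc r}. eps_refl TA r i y j \<in> {0, 1}" using coord_perm_values_on[OF p, of "{0,1}"] Y by (simp add: wedge_vectors_def)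
  have c: "(\<Sum>j\<in>{1..Suc r}. eps_refl TA r i y j) = real n" using coord_perm_sum[OF p, of "\<lambda>x. x"] Y by (simp add: wedge_vectors_def)
  show ?thesis unfolding wedge_vectors_def using a b c by auto
qed

lemma wedge_vectors_abs_le_1:
  assumes "wedge_vectors r n y"
  shows "\<bar>y j\<bar> \<le> 1"
proof (cases "j \<in> {1..Suc r}")
  case True
  then have "y j = 0 \<or> y j = 1" using assms unfolding wedge_vectors_def by blast
  then show ?thesis by auto
next
  case False
  then show ?thesis using assms unfolding wedge_vectors_def by simp
qed

lemma wedge_vectors_dominant:
  assumes Y: "wedge_vectors r n y" and d: "\<forall>i\<in>{1..r}. eps_coroot TA r y i \<ge> 0"
    and j: "j \<in> {1..Suc r}"
  shows "y j = (if j \<le> n then 1 else 0)"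
proof (rule antitone_01_eq_prefix[OF _ _ _ j])
  show "y b \<le> y a" if "1 \<le> a" "a \<le> b" "b \<le> Suc r" for a b
  proof (rule antitone_on_interval[OF _ that])
    fix i assume "1 \<le> i" "i < Suc r"
    then show "y (Suc i) \<le> y i" using d[rule_format, of i] by (auto simp: eps_coroot_def split: if_splits)
  qed
qed (use Y in \<open>auto simp: wedge_vectors_def\<close>)

lemma dual_hw_A:
  assumes v: "valid_type TA r" and k: "k \<in> {1..r}"
  shows "dual_hw TA r (unitv k) = unitv (Suc r - k)"
proof (rule dual_hw_eps_model[where Y = "wedge_vectors r (Suc r - k)"])
  show "classical TA" by (simp add: classical_def)
  show "inverse_cartan TA r (inv_cartan_A r)" by (rule inverse_cartan_A)
  show "\<And>y i. wedge_vectors r (Suc r - k) y \<Longrightarrow> i \<in> {1..r} \<Longrightarrow>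
      wedge_vectors r (Suc r - k) (eps_refl TA r i y)"
    by (rule wedge_vectors_eps_refl[OF v])
  show "\<And>y j. wedge_vectors r (Suc r - k) y \<Longrightarrow> \<bar>y j\<bar> \<le> 1" by (rule wedge_vectors_abs_le_1)
  let ?y0 = "\<lambda>j. if k < j \<and> j \<le> Suc r then 1 else (0::real)"
  have "(\<Sum>j\<in>{1..Suc r}. ?y0 j) = (\<Sum>j\<in>{Suc k..Suc r}. 1)"
    by (rule sum.mono_neutral_cong_right) (use k in auto)
  then show "wedge_vectors r (Suc r - k) ?y0" unfolding wedge_vectors_def using k by auto
  show "\<And>m. of_int (- unitv k m) = eps_labels TA r ?y0 m"
    using k by (auto simp: eps_labels_def eps_coroot_def unitv_def)
  show "\<forall>m. of_int (unitv (Suc r - k) m) = eps_labels TA r y m"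
    if Y: "wedge_vectors r (Suc r - k) y" and d: "\<forall>i\<in>{1..r}. eps_coroot TA r y i \<ge> 0" for y
    using k wedge_vectors_dominant[OF Y d]
    by (auto simp: eps_labels_def eps_coroot_def unitv_def)
qed (use v k in \<open>auto simp: unitv_def\<close>)

definition sign_vectors :: "nat \<Rightarrow> nat \<Rightarrow> (nat \<Rightarrow> real) \<Rightarrow> bool" where
  "sign_vectors r n y = ((\<forall>j. j \<notin> {1..r} \<longrightarrow> y j = 0) \<and> (\<forall>j\<in>{1..r}. y j \<in> {-1, 0, 1})
     \<and> (\<Sum>j\<in>{1..r}. \<bar>y j\<bar>) = real n)"

definition half_vectors :: "nat \<Rightarrow> (nat \<Rightarrow> real) \<Rightarrow> bool" where
  "half_vectors r y = ((\<forall>j. j \<notin> {1..r} \<longrightarrow> y j = 0) \<and> (\<forall>j\<in>{1..r}. y j \<in> {-1/2, 1/2}))"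

lemma eps_indices_not_A: "t \<noteq> TA \<Longrightarrow> eps_indices t r = {1..r}" by (simp add: eps_indices_def)

lemma sign_vectors_eps_refl:
  assumes "classical t" "t \<noteq> TA" "valid_type t r" "sign_vectors r n y" "i \<in> {1..r}"
  shows "sign_vectors r n (eps_refl t r i y)"
proof -
  have p: "signed_coord_perm {1..r} y (eps_refl t r i y)" using eps_refl_signed_coord_perm[OF assms(1,3,5), of y] eps_indices_not_A[OF assms(2)] by simp
  have a: "\<forall>j. j \<notin> {1..r} \<longrightarrow> eps_refl t r i y j = 0" using signed_coord_perm_outside[OF p] assms(4) by (simp add: sign_vectors_def)
  have b: "\<forall>j\<in>{1..r}. eps_refl t r i y j \<in> {-1, 0, 1}" using signed_coord_perm_values_on[OF p, of "{-1,0,1}"] assms(4) by (simp add: sign_vectors_def)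
  have c: "(\<Sum>j\<in>{1..r}. \<bar>eps_refl t r i y j\<bar>) = real n" using signed_coord_perm_sum_abs[OF p, of "\<lambda>x. x"] assms(4) by (simp add: sign_vectors_def)
  show ?thesis unfolding sign_vectors_def using a b c by blast
qed

lemma half_vectors_eps_refl:
  assumes "classical t" "t \<noteq> TA" "valid_type t r" "half_vectors r y" "i \<in> {1..r}"
  shows "half_vectors r (eps_refl t r i y)"
proof -
  have p: "signed_coord_perm {1..r} y (eps_refl t r i y)" using eps_refl_signed_coord_perm[OF assms(1,3,5), of y] eps_indices_not_A[OF assms(2)] by simp
  have a: "\<forall>j. j \<notin> {1..r} \<longrightarrow> eps_refl t r i y j = 0" using signed_coord_perm_outside[OF p] assms(4) by (simp add: half_vectors_def)
  have b: "\<forall>j\<in>{1..r}. eps_refl t r i y j \<in> {-1/2, 1/2}" using signed_coord_perm_values_on[OF p, of "{-1/2,1/2}"] assms(4) by (simp add: half_vectors_def)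
  show ?thesis unfolding half_vectors_def using a b by blast
qed

lemma sign_vectors_abs_le_1:
  assumes "sign_vectors r n y"
  shows "\<bar>y j\<bar> \<le> 1"
proof (cases "j \<in> {1..r}")
  case True
  then have "y j \<in> {-1, 0, 1}" using assms unfolding sign_vectors_def by blast
  then show ?thesis by auto
next
  case False
  then show ?thesis using assms unfolding sign_vectors_def by simp
qed

lemma half_vectors_abs_le_1:
  assumes "half_vectors r y"
  shows "\<bar>y j\<bar> \<le> 1"
proof (cases "j \<in> {1..r}")
  case True
  then have "y j \<in> {-1/2, 1/2}" using assms unfolding half_vectors_def by blast
  then show ?thesis by auto
next
  case False
  then show ?thesis using assms unfolding half_vectors_def by simp
qed

lemma antitone_if_eps_dominant:
  assumes "\<forall>i\<in>{1..r}. eps_coroot t r y i \<ge> 0" and "1 \<le> a" "a \<le> b" "b \<le> r"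
  shows "y b \<le> y a"
proof (rule antitone_on_interval[OF _ assms(2-)])
  fix i assume "1 \<le> i" "i < r"
  then show "y (Suc i) \<le> y i" using assms(1)[rule_format, of i] by (auto simp: eps_coroot_def)
qed

lemma dominant_sign_vector:
  assumes Y: "sign_vectors r n y" and d: "\<forall>i\<in>{1..r}. eps_coroot t r y i \<ge> 0"
    and last: "y r \<ge> 0" and j: "j \<in> {1..r}"
  shows "y j = (if j \<le> n then 1 else 0)"
proof -
  have anti: "y b \<le> y a" if "1 \<le> a" "a \<le> b" "b \<le> r" for a b
    using antitone_if_eps_dominant[OF d that] .
  have nn: "y l \<ge> 0" if "l \<in> {1..r}" for l using anti[of l r] that last by auto
  have vals: "y l = 0 \<or> y l = 1" if "l \<in> {1..r}" for l
  proof -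
    have "y l \<in> {-1, 0, 1}" using Y that unfolding sign_vectors_def by blast
    then show ?thesis using nn[OF that] by auto
  qed
  have "(\<Sum>l\<in>{1..r}. y l) = (\<Sum>l\<in>{1..r}. \<bar>y l\<bar>)" by (rule sum.cong) (use nn in auto)
  then have "(\<Sum>l\<in>{1..r}. y l) = real n" using Y by (simp add: sign_vectors_def)
  from antitone_01_eq_prefix[OF anti vals this j] show ?thesis by auto
qed

lemma sign_vector_last_nonneg:
  assumes Y: "sign_vectors r 1 y" and "r \<ge> 2" and sum: "y (r - 1) + y r \<ge> 0"
  shows "y r \<ge> 0"
proof (rule ccontr)
  assume "\<not> y r \<ge> 0"
  moreover have "y r \<in> {-1, 0, 1}" "y (r - 1) \<in> {-1, 0, 1}"
    using Y \<open>r \<ge> 2\<close> unfolding sign_vectors_def by auto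
  ultimately have "y r = -1" "y (r - 1) = 1" using sum by auto
  moreover have "(\<Sum>j\<in>{r - 1, r}. \<bar>y j\<bar>) \<le> (\<Sum>j\<in>{1..r}. \<bar>y j\<bar>)"
    by (rule sum_mono2) (use \<open>r \<ge> 2\<close> in auto)
  ultimately have "2 \<le> (\<Sum>j\<in>{1..r}. \<bar>y j\<bar>)" using \<open>r \<ge> 2\<close> by simp
  then show False using Y by (simp add: sign_vectors_def)
qed

lemma eps_labels_eq_unitv:
  assumes k: "k \<in> {1..r}"
    and inner: "\<And>i. i \<in> {1..<r} \<Longrightarrow> y i - y (Suc i) = (if i = k then 1 else 0)"
    and last: "eps_coroot t r y r = (if r = k then 1 else 0)"
  shows "\<forall>m. of_int (unitv k m) = eps_labels t r y m"
proof
  fix m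
  consider "m \<notin> {1..r}" | "m \<in> {1..<r}" | "m = r" by fastforce
  then show "of_int (unitv k m) = eps_labels t r y m"
  proof cases
    case 1 then show ?thesis using k by (auto simp: unitv_def eps_labels_def)
  next
    case 2 then show ?thesis using inner[OF 2] by (auto simp: unitv_def eps_labels_def eps_coroot_def)
  next
    case 3 then show ?thesis using last k by (auto simp: unitv_def eps_labels_def)
  qed
qed

lemma dual_hw_B_vector:
  assumes v: "valid_type TB r"
  shows "dual_hw TB r (unitv 1) = unitv 1"
proof (rule dual_hw_eps_model[where Y = "sign_vectors r 1"])
  have r2: "r \<ge> 2" using v by (simp add: valid_type_def)
  show "classical TB" by (simp add: classical_def)
  show "valid_type TB r" by (rule v)
  show "inverse_cartan TB r (inv_cartan_B r)"
    by (rule inverse_cartan_B)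
  show "\<And>y i. sign_vectors r 1 y \<Longrightarrow> i \<in> {1..r} \<Longrightarrow> sign_vectors r 1 (eps_refl TB r i y)"
    by (rule sign_vectors_eps_refl[OF _ _ v]) (auto simp: classical_def)
  show "\<And>y j. sign_vectors r 1 y \<Longrightarrow> \<bar>y j\<bar> \<le> 1" by (rule sign_vectors_abs_le_1)
  let ?y0 = "\<lambda>j. if j = 1 then -1 else (0::real)"
  have "(\<Sum>j\<in>{1..r}. \<bar>?y0 j\<bar>) = (\<Sum>j\<in>{1..r}. if j = 1 then 1 else 0)"
    by (intro sum.cong[OF HOL.refl]) simp
  also have "\<dots> = 1" using r2 by simp
  finally have "(\<Sum>j\<in>{1..r}. \<bar>?y0 j\<bar>) = 1" .
  then show "sign_vectors r 1 ?y0" unfolding sign_vectors_def using r2 by auto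
  show "\<And>m. of_int (- unitv 1 m) = eps_labels TB r ?y0 m"
    using r2 by (auto simp: eps_labels_def eps_coroot_def unitv_def)
  show "\<forall>m. of_int (unitv 1 m) = eps_labels TB r y m"
    if Y: "sign_vectors r 1 y" and d: "\<forall>i\<in>{1..r}. eps_coroot TB r y i \<ge> 0" for y
  proof -
    have last: "y r \<ge> 0" using d[rule_format, of r] r2 by (simp add: eps_coroot_def)
    have yv: "y j = (if j \<le> 1 then 1 else 0)" if "j \<in> {1..r}" for j
      using dominant_sign_vector[OF Y d last that] .
    show ?thesis by (rule eps_labels_eq_unitv) (use r2 in \<open>auto simp: yv eps_coroot_def\<close>)
  qed
  show "\<And>m. m \<notin> {1..r} \<Longrightarrow> unitv 1 m = 0" using r2 by (auto simp: unitv_def)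
qed

lemma dual_hw_B_spin:
  assumes v: "valid_type TB r"
  shows "dual_hw TB r (unitv r) = unitv r"
proof (rule dual_hw_eps_model[where Y = "half_vectors r"])
  have r2: "r \<ge> 2" using v by (simp add: valid_type_def)
  show "classical TB" by (simp add: classical_def)
  show "valid_type TB r" by (rule v)
  show "inverse_cartan TB r (inv_cartan_B r)"
    by (rule inverse_cartan_B)
  show "\<And>y i. half_vectors r y \<Longrightarrow> i \<in> {1..r} \<Longrightarrow> half_vectors r (eps_refl TB r i y)"
    by (rule half_vectors_eps_refl[OF _ _ v]) (auto simp: classical_def)
  show "\<And>y j. half_vectors r y \<Longrightarrow> \<bar>y j\<bar> \<le> 1" by (rule half_vectors_abs_le_1)
  let ?y0 = "\<lambda>j. if j \<in> {1..r} then -1/2 else (0::real)"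
  show "half_vectors r ?y0" unfolding half_vectors_def by auto
  show "\<And>m. of_int (- unitv r m) = eps_labels TB r ?y0 m"
    using r2 by (auto simp: eps_labels_def eps_coroot_def unitv_def)
  show "\<forall>m. of_int (unitv r m) = eps_labels TB r y m"
    if Y: "half_vectors r y" and d: "\<forall>i\<in>{1..r}. eps_coroot TB r y i \<ge> 0" for y
  proof -
    have l0: "y r \<ge> 0" using d[rule_format, of r] r2 by (simp add: eps_coroot_def)
    have "y r \<in> {-1/2, 1/2}" using Y r2 unfolding half_vectors_def by auto
    then have lr: "y r = 1/2" using l0 by auto
    have yv: "y j = 1/2" if j: "j \<in> {1..r}" for j
    proof -
      have "y r \<le> y j" using antitone_if_eps_dominant[OF d, of j r] j by auto
      moreover have "y j \<in> {-1/2, 1/2}" using Y j unfolding half_vectors_def by auto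
      ultimately show ?thesis using lr by auto
    qed
    show ?thesis by (rule eps_labels_eq_unitv) (use r2 in \<open>auto simp: yv eps_coroot_def\<close>)
  qed
  show "\<And>m. m \<notin> {1..r} \<Longrightarrow> unitv r m = 0" using r2 by (auto simp: unitv_def)
qed

lemma dual_hw_C:
  assumes v: "valid_type TC r" and k: "k \<in> {1..r}"
  shows "dual_hw TC r (unitv k) = unitv k"
proof (rule dual_hw_eps_model[where Y = "sign_vectors r k"])
  have r2: "r \<ge> 2" using v by (simp add: valid_type_def)
  show "classical TC" by (simp add: classical_def)
  show "valid_type TC r" by (rule v)
  show "inverse_cartan TC r (inv_cartan_C r)"
    by (rule inverse_cartan_C)
  show "\<And>y i. sign_vectors r k y \<Longrightarrow> i \<in> {1..r} \<Longrightarrow> sign_vectors r k (eps_refl TC r i y)"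
    by (rule sign_vectors_eps_refl[OF _ _ v]) (auto simp: classical_def)
  show "\<And>y j. sign_vectors r k y \<Longrightarrow> \<bar>y j\<bar> \<le> 1" by (rule sign_vectors_abs_le_1)
  let ?y0 = "\<lambda>j. if 1 \<le> j \<and> j \<le> k then -1 else (0::real)"
  have "(\<Sum>j\<in>{1..r}. \<bar>?y0 j\<bar>) = (\<Sum>j\<in>{1..k}. 1)"
    by (rule sum.mono_neutral_cong_right) (use k in auto)
  then show "sign_vectors r k ?y0" unfolding sign_vectors_def using k by auto
  show "\<And>m. of_int (- unitv k m) = eps_labels TC r ?y0 m"
    using k by (auto simp: eps_labels_def eps_coroot_def unitv_def)
  show "\<forall>m. of_int (unitv k m) = eps_labels TC r y m"
    if Y: "sign_vectors r k y" and d: "\<forall>i\<in>{1..r}. eps_coroot TC r y i \<ge> 0" for y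
  proof -
    have last: "y r \<ge> 0" using d[rule_format, of r] r2 by (simp add: eps_coroot_def)
    have yv: "y j = (if j \<le> k then 1 else 0)" if "j \<in> {1..r}" for j
      using dominant_sign_vector[OF Y d last that] .
    show ?thesis by (rule eps_labels_eq_unitv) (use k in \<open>auto simp: yv eps_coroot_def\<close>)
  qed
  show "\<And>m. m \<notin> {1..r} \<Longrightarrow> unitv k m = 0" using k by (auto simp: unitv_def)
qed

lemma dual_hw_D_vector:
  assumes v: "valid_type TD r"
  shows "dual_hw TD r (unitv 1) = unitv 1"
proof (rule dual_hw_eps_model[where Y = "sign_vectors r 1"])
  have r4: "r \<ge> 4" using v by (simp add: valid_type_def)
  show "classical TD" by (simp add: classical_def)
  show "valid_type TD r" by (rule v)
  show "inverse_cartan TD r (inv_cartan_D r)"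
    by (rule inverse_cartan_D[OF r4])
  show "\<And>y i. sign_vectors r 1 y \<Longrightarrow> i \<in> {1..r} \<Longrightarrow> sign_vectors r 1 (eps_refl TD r i y)"
    by (rule sign_vectors_eps_refl[OF _ _ v]) (auto simp: classical_def)
  show "\<And>y j. sign_vectors r 1 y \<Longrightarrow> \<bar>y j\<bar> \<le> 1" by (rule sign_vectors_abs_le_1)
  let ?y0 = "\<lambda>j. if j = 1 then -1 else (0::real)"
  have "(\<Sum>j\<in>{1..r}. \<bar>?y0 j\<bar>) = (\<Sum>j\<in>{1..r}. if j = 1 then 1 else 0)"
    by (intro sum.cong[OF HOL.refl]) simp
  also have "\<dots> = 1" using r4 by simp
  finally have "(\<Sum>j\<in>{1..r}. \<bar>?y0 j\<bar>) = 1" .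
  then show "sign_vectors r 1 ?y0" unfolding sign_vectors_def using r4 by auto
  show "\<And>m. of_int (- unitv 1 m) = eps_labels TD r ?y0 m"
    using r4 by (auto simp: eps_labels_def eps_coroot_def unitv_def)
  show "\<forall>m. of_int (unitv 1 m) = eps_labels TD r y m"
    if Y: "sign_vectors r 1 y" and d: "\<forall>i\<in>{1..r}. eps_coroot TD r y i \<ge> 0" for y
  proof -
    have "y (r - 1) + y r \<ge> 0" using d[rule_format, of r] r4 by (simp add: eps_coroot_def)
    then have last: "y r \<ge> 0" using sign_vector_last_nonneg[OF Y] r4 by simp
    have yv: "y j = (if j \<le> 1 then 1 else 0)" if "j \<in> {1..r}" for j
      using dominant_sign_vector[OF Y d last that] .
    show ?thesis by (rule eps_labels_eq_unitv) (use r4 in \<open>auto simp: yv eps_coroot_def\<close>)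
  qed
  show "\<And>m. m \<notin> {1..r} \<Longrightarrow> unitv 1 m = 0" using r4 by (auto simp: unitv_def)
qed

text \<open>In type D the parity of the number of negative entries separates the orbits of
  the two half-spin weights.\<close>

definition neg_count :: "nat \<Rightarrow> (nat \<Rightarrow> real) \<Rightarrow> int" where
  "neg_count r y = (\<Sum>j\<in>{1..r}. if y j < 0 then 1 else 0)"

definition spin_vectors :: "nat \<Rightarrow> nat \<Rightarrow> (nat \<Rightarrow> real) \<Rightarrow> bool" where
  "spin_vectors r p y = (half_vectors r y \<and> even (neg_count r y + int p))"

lemma sum_split_last: "(r::nat) \<ge> 1 \<Longrightarrow> (\<Sum>j\<in>{1..r}. f j) = (\<Sum>j\<in>{1..r - 1}. f j) + (f r :: 'a::comm_monoid_add)"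
proof -
  assume r: "r \<ge> 1"
  have e: "{1..r} = insert r {1..r - 1}" using r by auto
  have "r \<notin> {1..r - 1}" using r by auto
  then show ?thesis unfolding e by (simp add: add.commute)
qed

lemma sum_split_last_two: "(r::nat) \<ge> 4 \<Longrightarrow> (\<Sum>j\<in>{1..r}. f j) = (\<Sum>j\<in>{1..r - 2}. f j) + f (r - 1) + (f r :: 'a::comm_monoid_add)"
proof -
  assume r: "r \<ge> 4"
  have "(\<Sum>j\<in>{1..r}. f j) = (\<Sum>j\<in>{1..r - 1}. f j) + f r" using sum_split_last[of r f] r by simp
  moreover have "(\<Sum>j\<in>{1..r - 1}. f j) = (\<Sum>j\<in>{1..r - 1 - 1}. f j) + f (r - 1)" using sum_split_last[of "r - 1" f] r by simp
  moreover have "r - 1 - 1 = r - 2" by simp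
  ultimately show ?thesis by simp
qed

lemma spin_vectors_eps_refl:
  assumes v: "valid_type TD r" and Y: "spin_vectors r p y" and i: "i \<in> {1..r}"
  shows "spin_vectors r p (eps_refl TD r i y)"
proof -
  have r4: "r \<ge> 4" using v by (simp add: valid_type_def)
  have ys: "half_vectors r (eps_refl TD r i y)" using half_vectors_eps_refl[OF _ _ v _ i] Y by (simp add: spin_vectors_def classical_def)
  have "even (neg_count r (eps_refl TD r i y) + int p)"
  proof (cases "i < r")
    case True
    have p: "coord_perm {1..r} y (eps_refl TD r i y)" using eps_refl_coord_perm[OF _ v i, of y] True by (simp add: classical_def eps_indices_def)
    have "neg_count r (eps_refl TD r i y) = neg_count r y" unfolding neg_count_def by (rule coord_perm_sum[OF p])
    then show ?thesis using Y by (simp add: spin_vectors_def)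
  next
    case False
    then have ir: "i = r" using i by auto
    let ?y' = "eps_refl TD r r y"
    have a: "?y' = (\<lambda>j. if j = r - 1 then - y r else if j = r then - y (r - 1) else y j)" by (rule eps_refl_last_D[OF v])
    have v1: "y (r - 1) \<in> {-1/2, 1/2}" "y r \<in> {-1/2, 1/2}" using Y r4 unfolding spin_vectors_def half_vectors_def by auto
    have s1: "neg_count r ?y' = (\<Sum>j\<in>{1..r - 2}. if ?y' j < 0 then 1 else 0) + (if ?y' (r - 1) < 0 then 1 else 0) + (if ?y' r < 0 then 1 else 0)"
      unfolding neg_count_def by (rule sum_split_last_two[OF r4])
    have s2: "neg_count r y = (\<Sum>j\<in>{1..r - 2}. if y j < 0 then 1 else 0) + (if y (r - 1) < 0 then 1 else 0) + (if y r < 0 then 1 else 0)"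
      unfolding neg_count_def by (rule sum_split_last_two[OF r4])
    have s3: "(\<Sum>j\<in>{1..r - 2}. if ?y' j < 0 then 1 else (0::int)) = (\<Sum>j\<in>{1..r - 2}. if y j < 0 then 1 else 0)"
      by (rule sum.cong[OF HOL.refl]) (use r4 a in auto)
    have "?y' (r - 1) = - y r" "?y' r = - y (r - 1)" using a r4 by auto
    then have "neg_count r ?y' = neg_count r y + 2 - 2 * ((if y (r - 1) < 0 then 1 else 0) + (if y r < 0 then 1 else 0))"
      using s1 s2 s3 v1 by auto
    then show ?thesis using Y ir by (simp add: spin_vectors_def)
  qed
  then show ?thesis using ys by (simp add: spin_vectors_def)
qed

lemma dominant_spin_vector:
  assumes r4: "r \<ge> 4" and Y: "spin_vectors r k y" and d: "\<forall>i\<in>{1..r}. eps_coroot TD r y i \<ge> 0"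
  shows "\<And>j. j \<in> {1..r - 1} \<Longrightarrow> y j = 1/2" and "y r = (if even k then 1/2 else -1/2)"
proof -
  have anti: "y b \<le> y a" if "1 \<le> a" "a \<le> b" "b \<le> r" for a b
    using antitone_if_eps_dominant[OF d that] .
  have pr_r: "y (r - 1) + y r \<ge> 0" using d[rule_format, of r] r4 by (simp add: eps_coroot_def)
  have vals: "y j \<in> {-1/2, 1/2}" if "j \<in> {1..r}" for j using Y that unfolding spin_vectors_def half_vectors_def by auto
  have rr: "y r \<le> y (r - 1)" using anti[of "r - 1" r] r4 by auto
  have yr1: "y (r - 1) = 1/2" using vals[of "r - 1"] vals[of r] pr_r rr r4 by auto
  show yv: "y j = 1/2" if j: "j \<in> {1..r - 1}" for j
  proof -
    have "y (r - 1) \<le> y j" using anti[of j "r - 1"] j by auto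
    then show ?thesis using vals[of j] j yr1 by auto
  qed
  have "neg_count r y = (\<Sum>j\<in>{1..r - 1}. if y j < 0 then 1 else 0) + (if y r < 0 then 1 else 0)"
    unfolding neg_count_def by (rule sum_split_last) (use r4 in auto)
  also have "(\<Sum>j\<in>{1..r - 1}. if y j < 0 then 1 else (0::int)) = 0"
  proof (rule sum.neutral, rule ballI)
    fix j assume "j \<in> {1..r - 1}"
    then show "(if y j < 0 then 1 else (0::int)) = 0" using yv[of j] by simp
  qed
  finally have nn: "neg_count r y = (if y r < 0 then 1 else 0)" by simp
  have ev: "even (neg_count r y + int k)" using Y by (simp add: spin_vectors_def)
  show "y r = (if even k then 1/2 else -1/2)"
  proof (cases "even k")
    case True
    then have "\<not> y r < 0" using ev nn by (auto split: if_splits)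
    then show ?thesis using vals[of r] r4 True by auto
  next
    case False
    then have "y r < 0" using ev nn by (auto split: if_splits)
    then show ?thesis using vals[of r] r4 False by auto
  qed
qed

lemma dual_hw_D_spin:
  assumes v: "valid_type TD r" and k: "k = r - 1 \<or> k = r"
  shows "dual_hw TD r (unitv k) = (if even k then unitv r else unitv (r - 1))"
proof (rule dual_hw_eps_model[where Y = "spin_vectors r k"])
  have r4: "r \<ge> 4" using v by (simp add: valid_type_def)
  show "classical TD" by (simp add: classical_def)
  show "valid_type TD r" by (rule v)
  show "inverse_cartan TD r (inv_cartan_D r)"
    by (rule inverse_cartan_D[OF r4])
  show "\<And>y i. spin_vectors r k y \<Longrightarrow> i \<in> {1..r} \<Longrightarrow> spin_vectors r k (eps_refl TD r i y)"
    by (rule spin_vectors_eps_refl[OF v])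
  show "\<And>y j. spin_vectors r k y \<Longrightarrow> \<bar>y j\<bar> \<le> 1" using half_vectors_abs_le_1 by (auto simp: spin_vectors_def)
  let ?y0 = "\<lambda>j. if 1 \<le> j \<and> j \<le> r - 1 then -1/2 else if j = r then (if k = r then -1/2 else 1/2) else (0::real)"
  have ys0: "half_vectors r ?y0" unfolding half_vectors_def using r4 by auto
  have "neg_count r ?y0 = (\<Sum>j\<in>{1..r - 1}. if ?y0 j < 0 then 1 else 0) + (if ?y0 r < 0 then 1 else 0)"
    unfolding neg_count_def by (rule sum_split_last) (use r4 in auto)
  also have "(\<Sum>j\<in>{1..r - 1}. if ?y0 j < 0 then 1 else (0::int)) = (\<Sum>j\<in>{1..r - 1}. 1)"
    by (rule sum.cong[OF HOL.refl]) auto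
  finally have "neg_count r ?y0 = int (r - 1) + (if k = r then 1 else 0)" using r4 by auto
  then have "neg_count r ?y0 = int k" using k r4 by auto
  then show "spin_vectors r k ?y0" using ys0 by (simp add: spin_vectors_def)
  show "\<And>m. of_int (- unitv k m) = eps_labels TD r ?y0 m"
    using k r4 by (auto simp: eps_labels_def eps_coroot_def unitv_def)
  show "\<forall>m. of_int ((if even k then unitv r else unitv (r - 1)) m) = eps_labels TD r y m"
    if Y: "spin_vectors r k y" and d: "\<forall>i\<in>{1..r}. eps_coroot TD r y i \<ge> 0" for y
  proof -
    note yv = dominant_spin_vector(1)[OF r4 Y d] and yr = dominant_spin_vector(2)[OF r4 Y d]
    have yr1: "y (r - 1) = 1/2" using yv[of "r - 1"] r4 by auto
    show ?thesis
    proof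
      fix m show "of_int ((if even k then unitv r else unitv (r - 1)) m) = eps_labels TD r y m"
      proof (cases "m \<in> {1..r}")
        case True
        consider "m \<le> r - 2" | "m = r - 1" | "m = r" using True by fastforce
        then show ?thesis
        proof cases
          case 1
          have "y m = 1/2" "y (Suc m) = 1/2" using yv[of m] yv[of "Suc m"] 1 True r4 by auto
          then show ?thesis using True 1 r4 by (auto simp: eps_labels_def unitv_def eps_coroot_def)
        next
          case 2 then show ?thesis using True yr1 yr r4 by (auto simp: eps_labels_def unitv_def eps_coroot_def)
        next
          case 3 then show ?thesis using True yr1 yr r4 by (auto simp: eps_labels_def unitv_def eps_coroot_def)
        qed
      next
        case False then show ?thesis using r4 by (auto simp: eps_labels_def unitv_def)
      qed
    qed
  qed
  show "\<And>m. m \<notin> {1..r} \<Longrightarrow> unitv k m = 0" using k r4 by (auto simp: unitv_def)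
qed

section \<open>The classical types\<close>

lemma inv_cartan_A_first_plus_last:
  assumes "k \<in> {1..r}"
  shows "inv_cartan_A r 1 k + inv_cartan_A r r k = 1"
proof -
  have "inv_cartan_A r 1 k + inv_cartan_A r r k = (real r + 1 - real k) / (real r + 1) + real k / (real r + 1)"
    using inv_cartan_A_le[of 1 k r] inv_cartan_A_ge[of k r r] assms by auto
  also have "\<dots> = 1" by (simp add: add_divide_distrib[symmetric])
  finally show ?thesis .
qed

lemma grading_claims_A:
  assumes v: "valid_type TA r" and dom: "dominant r c"
  shows "grading_claims TA r c"
proof (rule grading_claimsI[where m = "\<lambda>k. inv_cartan_A r 1 k + inv_cartan_A r r k", OF _ _ _ _ _ _ dom])
  have r2: "r \<ge> 2" using v by (simp add: valid_type_def)
  show "grading_set TA r = expected_I TA r" using grading_set_A[OF v] by (simp add: expected_I_def)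
  note m1 = inv_cartan_A_first_plus_last
  show "\<And>c. eval_E TA r c = (\<Sum>k\<in>{1..r}. (inv_cartan_A r 1 k + inv_cartan_A r r k) * of_int (c k))"
    unfolding eval_E_inverse_cartan[OF inverse_cartan_A] grading_set_A[OF v] using r2 by simp
  show "\<And>k. k \<in> {1..r} \<Longrightarrow> 1 \<le> inv_cartan_A r 1 k + inv_cartan_A r r k" using m1 by simp
  show "\<And>c. listed TA r c = (\<exists>k\<in>{1..r}. c = unitv k \<and> inv_cartan_A r 1 k + inv_cartan_A r r k = 1)"
    using m1 by (auto simp: listed_def)
  show "\<And>k. k \<in> {1..r} \<Longrightarrow> inv_cartan_A r 1 k + inv_cartan_A r r k = 1 \<Longrightarrow> \<exists>k'\<in>{1..r}. inv_cartan_A r 1 k' + inv_cartan_A r r k' = 1 \<and> dual_hw TA r (unitv k) = unitv k'"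
  proof -
    fix k assume k: "k \<in> {1..r}"
    then have "Suc r - k \<in> {1..r}" by auto
    then show "\<exists>k'\<in>{1..r}. inv_cartan_A r 1 k' + inv_cartan_A r r k' = 1 \<and> dual_hw TA r (unitv k) = unitv k'"
      using dual_hw_A[OF v k] m1 by blast
  qed
  show "TA = TE \<and> r = 8 \<Longrightarrow> \<forall>k\<in>{1..r}. 2 \<le> inv_cartan_A r 1 k + inv_cartan_A r r k" by simp
qed

lemma grading_claims_B:
  assumes v: "valid_type TB r" and dom: "dominant r c"
  shows "grading_claims TB r c"
proof (rule grading_claimsI[where m = "\<lambda>k. inv_cartan_B r 2 k", OF _ _ _ _ _ _ dom])
  have r2: "r \<ge> 2" using v by (simp add: valid_type_def)
  show "grading_set TB r = expected_I TB r" using grading_set_B[OF v] by (simp add: expected_I_def)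
  have m1: "inv_cartan_B r 2 k \<ge> 1 \<and> (inv_cartan_B r 2 k = 1 \<longleftrightarrow> k = 1 \<or> k = r)" if k: "k \<in> {1..r}" for k
    using k r2 by (auto simp: inv_cartan_B_def min_def)
  show "\<And>c. eval_E TB r c = (\<Sum>k\<in>{1..r}. inv_cartan_B r 2 k * of_int (c k))"
    unfolding eval_E_inverse_cartan[OF inverse_cartan_B] grading_set_B[OF v] using r2 by simp
  show "\<And>k. k \<in> {1..r} \<Longrightarrow> 1 \<le> inv_cartan_B r 2 k" using m1 by simp
  show "\<And>c. listed TB r c = (\<exists>k\<in>{1..r}. c = unitv k \<and> inv_cartan_B r 2 k = 1)"
  proof -
    fix c
    have a: "1 \<in> {1..r}" "r \<in> {1..r}" using r2 by auto
    show "listed TB r c = (\<exists>k\<in>{1..r}. c = unitv k \<and> inv_cartan_B r 2 k = 1)"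
      unfolding listed_def using m1 a by auto
  qed
  show "\<And>k. k \<in> {1..r} \<Longrightarrow> inv_cartan_B r 2 k = 1 \<Longrightarrow> \<exists>k'\<in>{1..r}. inv_cartan_B r 2 k' = 1 \<and> dual_hw TB r (unitv k) = unitv k'"
  proof -
    fix k assume k: "k \<in> {1..r}" "inv_cartan_B r 2 k = 1"
    then have "k = 1 \<or> k = r" using m1 by auto
    then show "\<exists>k'\<in>{1..r}. inv_cartan_B r 2 k' = 1 \<and> dual_hw TB r (unitv k) = unitv k'"
      using dual_hw_B_vector[OF v] dual_hw_B_spin[OF v] k by auto
  qed
  show "TB = TE \<and> r = 8 \<Longrightarrow> \<forall>k\<in>{1..r}. 2 \<le> inv_cartan_B r 2 k" by simp
qed

lemma grading_claims_C:
  assumes v: "valid_type TC r" and dom: "dominant r c"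
  shows "grading_claims TC r c"
proof (rule grading_claimsI[where m = "\<lambda>k. inv_cartan_C r 1 k", OF _ _ _ _ _ _ dom])
  have r2: "r \<ge> 2" using v by (simp add: valid_type_def)
  show "grading_set TC r = expected_I TC r" using grading_set_C[OF v] by (simp add: expected_I_def)
  have m1: "inv_cartan_C r 1 k = 1" if k: "k \<in> {1..r}" for k
    using k r2 by (auto simp: inv_cartan_C_def min_def)
  show "\<And>c. eval_E TC r c = (\<Sum>k\<in>{1..r}. inv_cartan_C r 1 k * of_int (c k))"
    unfolding eval_E_inverse_cartan[OF inverse_cartan_C] grading_set_C[OF v] using r2 by simp
  show "\<And>k. k \<in> {1..r} \<Longrightarrow> 1 \<le> inv_cartan_C r 1 k" using m1 by simp
  show "\<And>c. listed TC r c = (\<exists>k\<in>{1..r}. c = unitv k \<and> inv_cartan_C r 1 k = 1)"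
    using m1 by (auto simp: listed_def)
  show "\<And>k. k \<in> {1..r} \<Longrightarrow> inv_cartan_C r 1 k = 1 \<Longrightarrow> \<exists>k'\<in>{1..r}. inv_cartan_C r 1 k' = 1 \<and> dual_hw TC r (unitv k) = unitv k'"
    using dual_hw_C[OF v] m1 by blast
  show "TC = TE \<and> r = 8 \<Longrightarrow> \<forall>k\<in>{1..r}. 2 \<le> inv_cartan_C r 1 k" by simp
qed

lemma grading_claims_D:
  assumes v: "valid_type TD r" and dom: "dominant r c"
  shows "grading_claims TD r c"
proof (rule grading_claimsI[where m = "\<lambda>k. inv_cartan_D r 2 k", OF _ _ _ _ _ _ dom])
  have r4: "r \<ge> 4" using v by (simp add: valid_type_def)
  show "grading_set TD r = expected_I TD r" using grading_set_D[OF v] by (simp add: expected_I_def)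
  have m1: "inv_cartan_D r 2 k \<ge> 1 \<and> (inv_cartan_D r 2 k = 1 \<longleftrightarrow> k = 1 \<or> k = r - 1 \<or> k = r)" if k: "k \<in> {1..r}" for k
    using k r4 by (auto simp: inv_cartan_D_def min_def)
  show "\<And>c. eval_E TD r c = (\<Sum>k\<in>{1..r}. inv_cartan_D r 2 k * of_int (c k))"
    unfolding eval_E_inverse_cartan[OF inverse_cartan_D[OF r4]] grading_set_D[OF v] using r4 by simp
  show "\<And>k. k \<in> {1..r} \<Longrightarrow> 1 \<le> inv_cartan_D r 2 k" using m1 by simp
  show "\<And>c. listed TD r c = (\<exists>k\<in>{1..r}. c = unitv k \<and> inv_cartan_D r 2 k = 1)"
  proof -
    fix c
    have a: "1 \<in> {1..r}" "r \<in> {1..r}" "r - 1 \<in> {1..r}" using r4 by auto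
    show "listed TD r c = (\<exists>k\<in>{1..r}. c = unitv k \<and> inv_cartan_D r 2 k = 1)"
      unfolding listed_def using m1 a by auto
  qed
  show "\<And>k. k \<in> {1..r} \<Longrightarrow> inv_cartan_D r 2 k = 1 \<Longrightarrow> \<exists>k'\<in>{1..r}. inv_cartan_D r 2 k' = 1 \<and> dual_hw TD r (unitv k) = unitv k'"
  proof -
    fix k assume k: "k \<in> {1..r}" "inv_cartan_D r 2 k = 1"
    then have kk: "k = 1 \<or> k = r - 1 \<or> k = r" using m1 by auto
    have a: "1 \<in> {1..r}" "r \<in> {1..r}" "r - 1 \<in> {1..r}" using r4 by auto
    have mm: "inv_cartan_D r 2 1 = 1" "inv_cartan_D r 2 r = 1" "inv_cartan_D r 2 (r - 1) = 1" using m1 a by auto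
    show "\<exists>k'\<in>{1..r}. inv_cartan_D r 2 k' = 1 \<and> dual_hw TD r (unitv k) = unitv k'"
      using kk
    proof (elim disjE)
      assume "k = 1" then show ?thesis using dual_hw_D_vector[OF v] a mm by auto
    next
      assume "k = r - 1" then show ?thesis using dual_hw_D_spin[OF v, of k] a mm by (cases "even k") auto
    next
      assume "k = r" then show ?thesis using dual_hw_D_spin[OF v, of k] a mm by (cases "even k") auto
    qed
  qed
  show "TD = TE \<and> r = 8 \<Longrightarrow> \<forall>k\<in>{1..r}. 2 \<le> inv_cartan_D r 2 k" by simp
qed

section \<open>The exceptional types\<close>

text \<open>Root systems, inverse Cartan matrices and Weyl orbits are given as explicit lists
  (in root coordinates, resp. Dynkin labels) and checked by evaluation.  A list of roots
  closed under all simple reflections contains every root.\<close>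

context
begin

declare upt_Suc[simp del]

declare atLeastLessThanSuc_atLeastAtMost[simp]

definition vec_of_list :: "int list \<Rightarrow> nat \<Rightarrow> int" where
  "vec_of_list xs k = (if 1 \<le> k \<and> k \<le> length xs then xs ! (k - 1) else 0)"

definition label_list :: "ltype \<Rightarrow> nat \<Rightarrow> int list \<Rightarrow> nat \<Rightarrow> int" where
  "label_list t r xs i = sum_list (map (\<lambda>j. xs ! (j - 1) * cartan t r i j) [1..<r+1])"

definition refl_root_list :: "ltype \<Rightarrow> nat \<Rightarrow> nat \<Rightarrow> int list \<Rightarrow> int list" where
  "refl_root_list t r i xs = xs[i - 1 := xs ! (i - 1) - label_list t r xs i]"

definition refl_wt_list :: "ltype \<Rightarrow> nat \<Rightarrow> nat \<Rightarrow> int list \<Rightarrow> int list" where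
  "refl_wt_list t r i xs = map (\<lambda>k. xs ! (k - 1) - xs ! (i - 1) * cartan t r k i) [1..<r+1]"

definition unit_list :: "nat \<Rightarrow> nat \<Rightarrow> int list" where
  "unit_list r i = map (\<lambda>k. if k = i then 1 else 0) [1..<r+1]"

definition refl_closed :: "ltype \<Rightarrow> nat \<Rightarrow> int list list \<Rightarrow> bool" where
  "refl_closed t r R = (\<forall>xs\<in>set R. \<forall>i\<in>set [1..<r+1].
      (let l = label_list t r xs i in l = 0 \<or> xs[i - 1 := xs ! (i - 1) - l] \<in> set R))"

definition mat_entry :: "real list list \<Rightarrow> nat \<Rightarrow> nat \<Rightarrow> real" where
  "mat_entry ms i j = ms ! (i - 1) ! (j - 1)"

lemma sum_atLeastAtMost_sum_list: "sum f {1..r} = sum_list (map f [1..<r+1])"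
proof -
  have "sum f {1..r} = sum f (set [1..<r+1])" by (rule arg_cong[where f="sum f"]) auto
  also have "\<dots> = sum_list (map f [1..<r+1])" by (rule sum_set_upt_conv_sum_list_nat)
  finally show ?thesis .
qed

lemma label_vec_of_list: "length xs = r \<Longrightarrow> label t r (vec_of_list xs) i = label_list t r xs i"
  unfolding label_def label_list_def sum_atLeastAtMost_sum_list
  by (intro arg_cong[where f=sum_list] map_cong) (auto simp: vec_of_list_def)

lemma refl_root_vec_of_list: "length xs = r \<Longrightarrow> i \<in> {1..r} \<Longrightarrow>
    refl_root t r i (vec_of_list xs) = vec_of_list (refl_root_list t r i xs)"
proof
  fix k assume l: "length xs = r" and i: "i \<in> {1..r}"
  have lab: "(\<Sum>j\<in>{1..r}. vec_of_list xs j * cartan t r i j) = label_list t r xs i"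
    using label_vec_of_list[OF l, of t i] by (simp add: label_def)
  show "refl_root t r i (vec_of_list xs) k = vec_of_list (refl_root_list t r i xs) k"
    unfolding refl_root_def lab using l i
    by (auto simp: vec_of_list_def refl_root_list_def unitv_def nth_list_update)
qed

lemma refl_wt_vec_of_list: "length xs = r \<Longrightarrow> i \<in> {1..r} \<Longrightarrow>
    refl_wt t r i (vec_of_list xs) = vec_of_list (refl_wt_list t r i xs)"
proof
  fix k assume l: "length xs = r" and i: "i \<in> {1..r}"
  show "refl_wt t r i (vec_of_list xs) k = vec_of_list (refl_wt_list t r i xs) k"
    using l i by (auto simp: vec_of_list_def refl_wt_list_def refl_wt_def nth_map simp del: upt_Suc)
qed

lemma length_refl_root_list[simp]: "length (refl_root_list t r i xs) = length xs"
  by (simp add: refl_root_list_def)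

lemma length_refl_wt_list[simp]: "length (refl_wt_list t r i xs) = r"
  by (simp add: refl_wt_list_def)

lemma unitv_vec_of_list: "i \<in> {1..r} \<Longrightarrow> unitv i = vec_of_list (unit_list r i)"
  by (rule ext) (auto simp: unitv_def vec_of_list_def unit_list_def nth_map)

lemma fold_refl_root_list_roots:
  assumes "vec_of_list xs \<in> roots t r" "length xs = r" "list_all (\<lambda>i. 1 \<le> i \<and> i \<le> r) ps"
  shows "vec_of_list (fold (refl_root_list t r) ps xs) \<in> roots t r"
  using assms
proof (induction ps arbitrary: xs)
  case Nil then show ?case by simp
next
  case (Cons i ps)
  have "vec_of_list (refl_root_list t r i xs) \<in> roots t r"
    using Cons.prems refl_root_vec_of_list[of xs r i t] roots.refl[of "vec_of_list xs" t r i] by auto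
  then show ?case using Cons by simp
qed

lemma roots_in_refl_closed:
  assumes c: "refl_closed t r R" and u: "\<forall>i\<in>set [1..<r+1]. unit_list r i \<in> set R"
    and l: "\<forall>xs\<in>set R. length xs = r"
  shows "\<beta> \<in> roots t r \<Longrightarrow> \<exists>xs\<in>set R. \<beta> = vec_of_list xs"
proof (induction rule: roots.induct)
  case (simple i)
  then have "i \<in> set [1..<r+1]" by (simp del: upt_Suc)
  then show ?case using u unitv_vec_of_list[OF simple] by auto
next
  case (refl \<beta> i)
  then obtain xs where xs: "xs \<in> set R" "\<beta> = vec_of_list xs" by auto
  have e: "refl_root t r i \<beta> = vec_of_list (refl_root_list t r i xs)" using xs l refl_root_vec_of_list refl.hyps by auto
  show ?case
  proof (cases "label_list t r xs i = 0")
    case True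
    then have "refl_root_list t r i xs = xs" by (simp add: refl_root_list_def)
    then show ?thesis using e xs by auto
  next
    case False
    have "\<forall>xs\<in>set R. \<forall>i\<in>{1..r}. label_list t r xs i = 0 \<or> xs[i - 1 := xs ! (i - 1) - label_list t r xs i] \<in> set R"
      using c unfolding refl_closed_def Let_def by simp
    then have "label_list t r xs i = 0 \<or> xs[i - 1 := xs ! (i - 1) - label_list t r xs i] \<in> set R"
      using xs(1) refl.hyps(2) by blast
    then have "refl_root_list t r i xs \<in> set R" using False unfolding refl_root_list_def by blast
    then show ?thesis using e by auto
  qed
qed

lemma highest_root_certificate:
  assumes i0: "1 \<le> ist \<and> ist \<le> r" and ps: "list_all (\<lambda>i. 1 \<le> i \<and> i \<le> r) ps"
    and th: "fold (refl_root_list t r) ps (unit_list r ist) = th"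
    and c: "refl_closed t r R" and u: "\<forall>i\<in>set [1..<r+1]. unit_list r i \<in> set R"
    and l: "\<forall>xs\<in>set R. length xs = r \<and> list_all2 (\<le>) xs th"
  shows "highest_root t r = vec_of_list th"
proof (rule highest_root_eqI)
  have "vec_of_list (unit_list r ist) \<in> roots t r" using i0 unitv_vec_of_list[of ist r] roots.simple[of ist r t] by auto
  then show "vec_of_list th \<in> roots t r" using fold_refl_root_list_roots[OF _ _ ps] th by (auto simp: unit_list_def)
next
  fix \<beta> j assume "\<beta> \<in> roots t r"
  then obtain xs where xs: "xs \<in> set R" "\<beta> = vec_of_list xs" using roots_in_refl_closed[OF c u] l by blast
  then have a: "length xs = r" "list_all2 (\<le>) xs th" using l by auto
  then have lt: "length th = r" by (auto dest: list_all2_lengthD)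
  show "\<beta> j \<le> vec_of_list th j"
  proof (cases "1 \<le> j \<and> j \<le> r")
    case True
    then have "xs ! (j - 1) \<le> th ! (j - 1)" using a list_all2_nthD[OF a(2), of "j - 1"] by auto
    then show ?thesis using xs a lt True by (simp add: vec_of_list_def)
  next
    case False
    then show ?thesis using xs a lt unfolding vec_of_list_def by auto
  qed
qed

lemma grading_set_certificate:
  assumes "highest_root t r = vec_of_list th" "length th = r"
    and "list_all (\<lambda>i. 1 \<le> i \<and> i \<le> r) Il"
    and "\<forall>i\<in>set [1..<r+1]. (label_list t r th i \<noteq> 0) = (i \<in> set Il)"
  shows "grading_set t r = set Il"
  using assms unfolding grading_set_def
  by (auto simp: label_vec_of_list list_all_iff)

lemma inverse_cartan_certificate:
  assumes "\<forall>i\<in>set [1..<r+1]. \<forall>j\<in>set [1..<r+1].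
      sum_list (map (\<lambda>k. of_int (cartan t r i k) * mat_entry ms k j) [1..<r+1]) = (if i = j then 1 else 0)"
    and "\<forall>i\<in>set [1..<r+1]. \<forall>j\<in>set [1..<r+1].
      sum_list (map (\<lambda>k. mat_entry ms i k * of_int (cartan t r k j)) [1..<r+1]) = (if i = j then 1 else 0)"
  shows "inverse_cartan t r (mat_entry ms)"
  using assms unfolding inverse_cartan_def sum_atLeastAtMost_sum_list by simp

lemma dual_hw_certificate:
  assumes M: "inverse_cartan t r M"
    and k: "1 \<le> k \<and> k \<le> r"
    and o0: "map uminus (unit_list r k) \<in> set OL"
    and oc: "\<forall>xs\<in>set OL. \<forall>i\<in>set [1..<r+1]. refl_wt_list t r i xs \<in> set OL"
    and ol: "\<forall>xs\<in>set OL. length xs = r"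
    and k': "1 \<le> k' \<and> k' \<le> r"
    and od: "\<forall>xs\<in>set OL. list_all (\<lambda>x. 0 \<le> x) xs \<longrightarrow> xs = unit_list r k'"
  shows "dual_hw t r (unitv k) = unitv k'"
proof -
  have "dual_hw t r (unitv k) = vec_of_list (unit_list r k')"
  proof (rule dual_hw_eqI[where S = "vec_of_list ` set OL"])
    show "(\<Sum>k\<in>{1..r}. (\<Sum>i\<in>{1..r}. M i k) * of_int (cartan t r k j)) > 0" if "j \<in> {1..r}" for j
      using inverse_cartan_column_sums[OF M that] by simp
    have "(\<lambda>j. - unitv k j) = vec_of_list (map uminus (unit_list r k))"
      using k by (intro ext) (auto simp: unitv_def vec_of_list_def unit_list_def nth_map)
    then show "(\<lambda>j. - unitv k j) \<in> vec_of_list ` set OL" using o0 by auto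
    show "\<And>\<mu> i. \<mu> \<in> vec_of_list ` set OL \<Longrightarrow> i \<in> {1..r} \<Longrightarrow> refl_wt t r i \<mu> \<in> vec_of_list ` set OL"
      using oc ol refl_wt_vec_of_list by fastforce
    show "finite (vec_of_list ` set OL)" by simp
    show "\<nu> = vec_of_list (unit_list r k')" if mem: "\<nu> \<in> vec_of_list ` set OL" and "dominant r \<nu>" for \<nu>
    proof -
      obtain xs where xs: "xs \<in> set OL" "\<nu> = vec_of_list xs" using mem by auto
      have dom: "dominant r (vec_of_list xs)" using \<open>dominant r \<nu>\<close> xs(2) by simp
      have "0 \<le> xs ! n" if n: "n < length xs" for n
      proof -
        have "0 \<le> vec_of_list xs (Suc n)" using dom n ol xs(1) unfolding dominant_def by auto
        then show ?thesis using n by (simp add: vec_of_list_def)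
      qed
      then show ?thesis using od xs by (auto simp: list_all_length)
    qed
    show "\<And>j. j \<notin> {1..r} \<Longrightarrow> unitv k j = 0" using k by (auto simp: unitv_def)
  qed
  moreover have "unitv k' = vec_of_list (unit_list r k')"
    by (rule unitv_vec_of_list) (use k' in auto)
  ultimately show ?thesis by simp
qed

definition roots_E6 :: "int list list" where "roots_E6 = [[-1,-2,-2,-3,-2,-1], [-1,-1,-2,-3,-2,-1], [-1,-1,-2,-2,-2,-1], [-1,-1,-2,-2,-1,-1], [-1,-1,-2,-2,-1,0], [-1,-1,-1,-2,-2,-1], [-1,-1,-1,-2,-1,-1], [-1,-1,-1,-2,-1,0], [-1,-1,-1,-1,-1,-1], [-1,-1,-1,-1,-1,0], [-1,-1,-1,-1,0,0], [-1,0,-1,-1,-1,-1], [-1,0,-1,-1,-1,0], [-1,0,-1,-1,0,0], [-1,0,-1,0,0,0], [-1,0,0,0,0,0], [0,-1,-1,-2,-2,-1], [0,-1,-1,-2,-1,-1], [0,-1,-1,-2,-1,0], [0,-1,-1,-1,-1,-1], [0,-1,-1,-1,-1,0], [0,-1,-1,-1,0,0], [0,-1,0,-1,-1,-1], [0,-1,0,-1,-1,0], [0,-1,0,-1,0,0], [0,-1,0,0,0,0], [0,0,-1,-1,-1,-1], [0,0,-1,-1,-1,0], [0,0,-1,-1,0,0], [0,0,-1,0,0,0], [0,0,0,-1,-1,-1], [0,0,0,-1,-1,0], [0,0,0,-1,0,0], [0,0,0,0,-1,-1], [0,0,0,0,-1,0], [0,0,0,0,0,-1], [0,0,0,0,0,1],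 [0,0,0,0,1,0], [0,0,0,0,1,1], [0,0,0,1,0,0], [0,0,0,1,1,0], [0,0,0,1,1,1], [0,0,1,0,0,0], [0,0,1,1,0,0], [0,0,1,1,1,0], [0,0,1,1,1,1], [0,1,0,0,0,0], [0,1,0,1,0,0], [0,1,0,1,1,0], [0,1,0,1,1,1], [0,1,1,1,0,0], [0,1,1,1,1,0], [0,1,1,1,1,1], [0,1,1,2,1,0], [0,1,1,2,1,1], [0,1,1,2,2,1], [1,0,0,0,0,0], [1,0,1,0,0,0], [1,0,1,1,0,0], [1,0,1,1,1,0], [1,0,1,1,1,1], [1,1,1,1,0,0], [1,1,1,1,1,0], [1,1,1,1,1,1], [1,1,1,2,1,0], [1,1,1,2,1,1], [1,1,1,2,2,1], [1,1,2,2,1,0], [1,1,2,2,1,1], [1,1,2,2,2,1], [1,1,2,3,2,1], [1,2,2,3,2,1]]"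

definition inv_cartan_E6 :: "real list list" where "inv_cartan_E6 = [[4/3, 1, 5/3, 2, 4/3, 2/3], [1, 2, 2, 3, 2, 1], [5/3, 2, 10/3, 4, 8/3, 4/3], [2, 3, 4, 6, 4, 2], [4/3, 2, 8/3, 4, 10/3, 5/3], [2/3, 1, 4/3, 2, 5/3, 4/3]]"

lemma highest_root_E6: "highest_root TE 6 = vec_of_list [1,2,2,3,2,1]"
  by (rule highest_root_certificate[where ist=1 and ps="[3,4,2,5,4,3,6,5,4,2]" and R=roots_E6]; code_simp)

lemma grading_set_E6: "grading_set TE 6 = {2}"
proof -
  have "grading_set TE 6 = set [2]" by (rule grading_set_certificate[OF highest_root_E6]; code_simp)
  then show ?thesis by simp
qed

lemma inverse_cartan_E6: "inverse_cartan TE 6 (mat_entry inv_cartan_E6)"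
  by (rule inverse_cartan_certificate; code_simp)

definition weyl_orbit_E6_1 :: "int list list" where "weyl_orbit_E6_1 = [[-1,-1,0,1,0,0], [-1,0,0,0,0,0], [-1,0,1,-1,1,0], [-1,0,1,0,-1,1], [-1,0,1,0,0,-1], [-1,1,0,0,0,0], [0,-1,0,0,0,1], [0,-1,0,0,1,-1], [0,-1,0,1,-1,0], [0,-1,1,0,0,0], [0,0,-1,0,1,0], [0,0,-1,1,-1,1], [0,0,-1,1,0,-1], [0,0,0,0,0,1], [0,0,0,0,1,-1], [0,0,0,1,-1,0], [0,0,1,-1,0,0], [0,1,0,-1,0,1], [0,1,0,-1,1,-1], [0,1,0,0,-1,0], [0,1,1,-1,0,0], [1,-1,-1,1,0,0], [1,0,-1,0,0,0], [1,0,0,-1,1,0], [1,0,0,0,-1,1], [1,0,0,0,0,-1], [1,1,-1,0,0,0]]"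

lemma dual_hw_E6_1: "dual_hw TE 6 (unitv 1) = unitv 6"
  by (rule dual_hw_certificate[OF inverse_cartan_E6, where OL = weyl_orbit_E6_1]) (code_simp | simp)+

definition weyl_orbit_E6_6 :: "int list list" where "weyl_orbit_E6_6 = [[-1,-1,1,0,0,0], [-1,0,0,0,0,1], [-1,0,0,0,1,-1], [-1,0,0,1,-1,0], [-1,0,1,0,0,0], [-1,1,1,-1,0,0], [0,-1,-1,1,0,0], [0,-1,0,0,1,0], [0,-1,0,1,-1,1], [0,-1,0,1,0,-1], [0,0,-1,1,0,0], [0,0,0,-1,1,0], [0,0,0,0,-1,1], [0,0,0,0,0,-1], [0,0,1,-1,0,1], [0,0,1,-1,1,-1], [0,0,1,0,-1,0], [0,1,-1,0,0,0], [0,1,0,-1,1,0], [0,1,0,0,-1,1], [0,1,0,0,0,-1], [1,-1,0,0,0,0], [1,0,-1,0,0,1], [1,0,-1,0,1,-1], [1,0,-1,1,-1,0], [1,0,0,0,0,0], [1,1,0,-1,0,0]]"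

lemma dual_hw_E6_6: "dual_hw TE 6 (unitv 6) = unitv 1"
  by (rule dual_hw_certificate[OF inverse_cartan_E6, where OL = weyl_orbit_E6_6]) (code_simp | simp)+

lemma grading_claims_E6:
  assumes "dominant 6 c"
  shows "grading_claims TE 6 c"
proof -
  have "\<forall>k\<in>set [1..<7]. 1 \<le> mat_entry inv_cartan_E6 2 k \<and> (mat_entry inv_cartan_E6 2 k = 1 \<longleftrightarrow> k \<in> set [1,6])"
    by code_simp
  moreover have "k \<in> {1..6} \<longleftrightarrow> k \<in> set [1..<7]" for k by auto
  ultimately have m: "1 \<le> mat_entry inv_cartan_E6 2 k \<and> (mat_entry inv_cartan_E6 2 k = 1 \<longleftrightarrow> k \<in> set [1,6])" if "k \<in> {1..6}" for k
    using that by blast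
  show ?thesis
  proof (rule grading_claimsI[where m = "mat_entry inv_cartan_E6 2", OF _ _ _ _ _ _ assms])
    show "grading_set TE 6 = expected_I TE 6" using grading_set_E6 by (simp add: expected_I_def)
    show "eval_E TE 6 c = (\<Sum>k\<in>{1..6}. mat_entry inv_cartan_E6 2 k * of_int (c k))" for c
      using eval_E_inverse_cartan[OF inverse_cartan_E6] grading_set_E6 by simp
    show "\<And>k. k \<in> {1..6} \<Longrightarrow> 1 \<le> mat_entry inv_cartan_E6 2 k" using m by fastforce
    show "\<And>c. listed TE 6 c = (\<exists>k\<in>{1..6}. c = unitv k \<and> mat_entry inv_cartan_E6 2 k = 1)"
      using m by (auto simp: listed_def)
    show "\<And>k. k \<in> {1..6} \<Longrightarrow> mat_entry inv_cartan_E6 2 k = 1 \<Longrightarrow>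
        \<exists>k'\<in>{1..6}. mat_entry inv_cartan_E6 2 k' = 1 \<and> dual_hw TE 6 (unitv k) = unitv k'"
      using m dual_hw_E6_1 dual_hw_E6_6 by auto
    show "TE = TE \<and> (6::nat) = 8 \<Longrightarrow> \<forall>k\<in>{1..6}. 2 \<le> mat_entry inv_cartan_E6 2 k" using m by auto
  qed
qed

definition roots_E7 :: "int list list" where "roots_E7 = [[-2,-2,-3,-4,-3,-2,-1], [-1,-2,-3,-4,-3,-2,-1], [-1,-2,-2,-4,-3,-2,-1], [-1,-2,-2,-3,-3,-2,-1], [-1,-2,-2,-3,-2,-2,-1], [-1,-2,-2,-3,-2,-1,-1], [-1,-2,-2,-3,-2,-1,0], [-1,-1,-2,-3,-3,-2,-1], [-1,-1,-2,-3,-2,-2,-1], [-1,-1,-2,-3,-2,-1,-1], [-1,-1,-2,-3,-2,-1,0], [-1,-1,-2,-2,-2,-2,-1], [-1,-1,-2,-2,-2,-1,-1], [-1,-1,-2,-2,-2,-1,0], [-1,-1,-2,-2,-1,-1,-1], [-1,-1,-2,-2,-1,-1,0], [-1,-1,-2,-2,-1,0,0], [-1,-1,-1,-2,-2,-2,-1], [-1,-1,-1,-2,-2,-1,-1], [-1,-1,-1,-2,-2,-1,0], [-1,-1,-1,-2,-1,-1,-1], [-1,-1,-1,-2,-1,-1,0], [-1,-1,-1,-2,-1,0,0], [-1,-1,-1,-1,-1,-1,-1], [-1,-1,-1,-1,-1,-1,0], [-1,-1,-1,-1,-1,0,0], [-1,-1,-1,-1,0,0,0], [-1,0,-1,-1,-1,-1,-1],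 [-1,0,-1,-1,-1,-1,0], [-1,0,-1,-1,-1,0,0], [-1,0,-1,-1,0,0,0], [-1,0,-1,0,0,0,0], [-1,0,0,0,0,0,0], [0,-1,-1,-2,-2,-2,-1], [0,-1,-1,-2,-2,-1,-1], [0,-1,-1,-2,-2,-1,0], [0,-1,-1,-2,-1,-1,-1], [0,-1,-1,-2,-1,-1,0], [0,-1,-1,-2,-1,0,0], [0,-1,-1,-1,-1,-1,-1], [0,-1,-1,-1,-1,-1,0], [0,-1,-1,-1,-1,0,0], [0,-1,-1,-1,0,0,0], [0,-1,0,-1,-1,-1,-1], [0,-1,0,-1,-1,-1,0], [0,-1,0,-1,-1,0,0], [0,-1,0,-1,0,0,0], [0,-1,0,0,0,0,0], [0,0,-1,-1,-1,-1,-1], [0,0,-1,-1,-1,-1,0], [0,0,-1,-1,-1,0,0], [0,0,-1,-1,0,0,0], [0,0,-1,0,0,0,0], [0,0,0,-1,-1,-1,-1], [0,0,0,-1,-1,-1,0], [0,0,0,-1,-1,0,0], [0,0,0,-1,0,0,0], [0,0,0,0,-1,-1,-1], [0,0,0,0,-1,-1,0], [0,0,0,0,-1,0,0], [0,0,0,0,0,-1,-1], [0,0,0,0,0,-1,0], [0,0,0,0,0,0,-1], [0,0,0,0,0,0,1], [0,0,0,0,0,1,0], [0,0,0,0,0,1,1], [0,0,0,0,1,0,0], [0,0,0,0,1,1,0], [0,0,0,0,1,1,1], [0,0,0,1,0,0,0], [0,0,0,1,1,0,0], [0,0,0,1,1,1,0], [0,0,0,1,1,1,1], [0,0,1,0,0,0,0],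 [0,0,1,1,0,0,0], [0,0,1,1,1,0,0], [0,0,1,1,1,1,0], [0,0,1,1,1,1,1], [0,1,0,0,0,0,0], [0,1,0,1,0,0,0], [0,1,0,1,1,0,0], [0,1,0,1,1,1,0], [0,1,0,1,1,1,1], [0,1,1,1,0,0,0], [0,1,1,1,1,0,0], [0,1,1,1,1,1,0], [0,1,1,1,1,1,1], [0,1,1,2,1,0,0], [0,1,1,2,1,1,0], [0,1,1,2,1,1,1], [0,1,1,2,2,1,0], [0,1,1,2,2,1,1], [0,1,1,2,2,2,1], [1,0,0,0,0,0,0], [1,0,1,0,0,0,0], [1,0,1,1,0,0,0], [1,0,1,1,1,0,0], [1,0,1,1,1,1,0], [1,0,1,1,1,1,1], [1,1,1,1,0,0,0], [1,1,1,1,1,0,0], [1,1,1,1,1,1,0], [1,1,1,1,1,1,1], [1,1,1,2,1,0,0], [1,1,1,2,1,1,0], [1,1,1,2,1,1,1], [1,1,1,2,2,1,0], [1,1,1,2,2,1,1], [1,1,1,2,2,2,1], [1,1,2,2,1,0,0], [1,1,2,2,1,1,0], [1,1,2,2,1,1,1], [1,1,2,2,2,1,0], [1,1,2,2,2,1,1], [1,1,2,2,2,2,1], [1,1,2,3,2,1,0], [1,1,2,3,2,1,1], [1,1,2,3,2,2,1], [1,1,2,3,3,2,1], [1,2,2,3,2,1,0], [1,2,2,3,2,1,1], [1,2,2,3,2,2,1], [1,2,2,3,3,2,1], [1,2,2,4,3,2,1], [1,2,3,4,3,2,1], [2,2,3,4,3,2,1]]"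

definition inv_cartan_E7 :: "real list list" where "inv_cartan_E7 = [[2, 2, 3, 4, 3, 2, 1], [2, 7/2, 4, 6, 9/2, 3, 3/2], [3, 4, 6, 8, 6, 4, 2], [4, 6, 8, 12, 9, 6, 3], [3, 9/2, 6, 9, 15/2, 5, 5/2], [2, 3, 4, 6, 5, 4, 2], [1, 3/2, 2, 3, 5/2, 2, 3/2]]"

lemma highest_root_E7: "highest_root TE 7 = vec_of_list [2,2,3,4,3,2,1]"
  by (rule highest_root_certificate[where ist=1 and ps="[3,4,2,5,4,3,6,5,4,2,7,6,5,4,3,1]" and R=roots_E7]; code_simp)

lemma grading_set_E7: "grading_set TE 7 = {1}"
proof -
  have "grading_set TE 7 = set [1]" by (rule grading_set_certificate[OF highest_root_E7]; code_simp)
  then show ?thesis by simp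
qed

lemma inverse_cartan_E7: "inverse_cartan TE 7 (mat_entry inv_cartan_E7)"
  by (rule inverse_cartan_certificate; code_simp)

definition weyl_orbit_E7_7 :: "int list list" where "weyl_orbit_E7_7 = [[-1,-1,0,1,0,0,0], [-1,-1,1,0,0,0,0], [-1,0,0,0,0,0,1], [-1,0,0,0,0,1,-1], [-1,0,0,0,1,-1,0], [-1,0,0,1,-1,0,0], [-1,0,1,-1,1,0,0], [-1,0,1,0,-1,1,0], [-1,0,1,0,0,-1,1], [-1,0,1,0,0,0,-1], [-1,1,0,0,0,0,0], [-1,1,1,-1,0,0,0], [0,-1,-1,1,0,0,0], [0,-1,0,0,0,1,0], [0,-1,0,0,1,-1,1], [0,-1,0,0,1,0,-1], [0,-1,0,1,-1,0,1], [0,-1,0,1,-1,1,-1], [0,-1,0,1,0,-1,0], [0,-1,1,0,0,0,0], [0,0,-1,0,1,0,0], [0,0,-1,1,-1,1,0], [0,0,-1,1,0,-1,1], [0,0,-1,1,0,0,-1], [0,0,0,-1,1,0,0], [0,0,0,0,-1,1,0], [0,0,0,0,0,-1,1], [0,0,0,0,0,0,-1], [0,0,0,0,0,0,1], [0,0,0,0,0,1,-1], [0,0,0,0,1,-1,0], [0,0,0,1,-1,0,0], [0,0,1,-1,0,0,1], [0,0,1,-1,0,1,-1], [0,0,1,-1,1,-1,0], [0,0,1,0,-1,0,0], [0,1,-1,0,0,0,0], [0,1,0,-1,0,1,0], [0,1,0,-1,1,-1,1], [0,1,0,-1,1,0,-1], [0,1,0,0,-1,0,1], [0,1,0,0,-1,1,-1],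 [0,1,0,0,0,-1,0], [0,1,1,-1,0,0,0], [1,-1,-1,1,0,0,0], [1,-1,0,0,0,0,0], [1,0,-1,0,0,0,1], [1,0,-1,0,0,1,-1], [1,0,-1,0,1,-1,0], [1,0,-1,1,-1,0,0], [1,0,0,-1,1,0,0], [1,0,0,0,-1,1,0], [1,0,0,0,0,-1,1], [1,0,0,0,0,0,-1], [1,1,-1,0,0,0,0], [1,1,0,-1,0,0,0]]"

lemma dual_hw_E7_7: "dual_hw TE 7 (unitv 7) = unitv 7"
  by (rule dual_hw_certificate[OF inverse_cartan_E7, where OL = weyl_orbit_E7_7]) (code_simp | simp)+

lemma grading_claims_E7:
  assumes "dominant 7 c"
  shows "grading_claims TE 7 c"
proof -
  have "\<forall>k\<in>set [1..<8]. 1 \<le> mat_entry inv_cartan_E7 1 k \<and> (mat_entry inv_cartan_E7 1 k = 1 \<longleftrightarrow> k \<in> set [7])"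
    by code_simp
  moreover have "k \<in> {1..7} \<longleftrightarrow> k \<in> set [1..<8]" for k by auto
  ultimately have m: "1 \<le> mat_entry inv_cartan_E7 1 k \<and> (mat_entry inv_cartan_E7 1 k = 1 \<longleftrightarrow> k \<in> set [7])" if "k \<in> {1..7}" for k
    using that by blast
  show ?thesis
  proof (rule grading_claimsI[where m = "mat_entry inv_cartan_E7 1", OF _ _ _ _ _ _ assms])
    show "grading_set TE 7 = expected_I TE 7" using grading_set_E7 by (simp add: expected_I_def)
    show "eval_E TE 7 c = (\<Sum>k\<in>{1..7}. mat_entry inv_cartan_E7 1 k * of_int (c k))" for c
      using eval_E_inverse_cartan[OF inverse_cartan_E7] grading_set_E7 by simp
    show "\<And>k. k \<in> {1..7} \<Longrightarrow> 1 \<le> mat_entry inv_cartan_E7 1 k" using m by fastforce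
    show "\<And>c. listed TE 7 c = (\<exists>k\<in>{1..7}. c = unitv k \<and> mat_entry inv_cartan_E7 1 k = 1)"
      using m by (auto simp: listed_def)
    show "\<And>k. k \<in> {1..7} \<Longrightarrow> mat_entry inv_cartan_E7 1 k = 1 \<Longrightarrow>
        \<exists>k'\<in>{1..7}. mat_entry inv_cartan_E7 1 k' = 1 \<and> dual_hw TE 7 (unitv k) = unitv k'"
      using m dual_hw_E7_7 by auto
    show "TE = TE \<and> (7::nat) = 8 \<Longrightarrow> \<forall>k\<in>{1..7}. 2 \<le> mat_entry inv_cartan_E7 1 k" using m by auto
  qed
qed

definition roots_E8 :: "int list list" where "roots_E8 = [[-2,-3,-4,-6,-5,-4,-3,-2], [-2,-3,-4,-6,-5,-4,-3,-1], [-2,-3,-4,-6,-5,-4,-2,-1], [-2,-3,-4,-6,-5,-3,-2,-1], [-2,-3,-4,-6,-4,-3,-2,-1], [-2,-3,-4,-5,-4,-3,-2,-1], [-2,-3,-3,-5,-4,-3,-2,-1], [-2,-2,-4,-5,-4,-3,-2,-1], [-2,-2,-3,-5,-4,-3,-2,-1], [-2,-2,-3,-4,-4,-3,-2,-1], [-2,-2,-3,-4,-3,-3,-2,-1], [-2,-2,-3,-4,-3,-2,-2,-1], [-2,-2,-3,-4,-3,-2,-1,-1], [-2,-2,-3,-4,-3,-2,-1,0], [-1,-3,-3,-5,-4,-3,-2,-1], [-1,-2,-3,-5,-4,-3,-2,-1], [-1,-2,-3,-4,-4,-3,-2,-1], [-1,-2,-3,-4,-3,-3,-2,-1], [-1,-2,-3,-4,-3,-2,-2,-1],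 [-1,-2,-3,-4,-3,-2,-1,-1], [-1,-2,-3,-4,-3,-2,-1,0], [-1,-2,-2,-4,-4,-3,-2,-1], [-1,-2,-2,-4,-3,-3,-2,-1], [-1,-2,-2,-4,-3,-2,-2,-1], [-1,-2,-2,-4,-3,-2,-1,-1], [-1,-2,-2,-4,-3,-2,-1,0], [-1,-2,-2,-3,-3,-3,-2,-1], [-1,-2,-2,-3,-3,-2,-2,-1], [-1,-2,-2,-3,-3,-2,-1,-1], [-1,-2,-2,-3,-3,-2,-1,0], [-1,-2,-2,-3,-2,-2,-2,-1], [-1,-2,-2,-3,-2,-2,-1,-1], [-1,-2,-2,-3,-2,-2,-1,0], [-1,-2,-2,-3,-2,-1,-1,-1], [-1,-2,-2,-3,-2,-1,-1,0], [-1,-2,-2,-3,-2,-1,0,0], [-1,-1,-2,-3,-3,-3,-2,-1], [-1,-1,-2,-3,-3,-2,-2,-1], [-1,-1,-2,-3,-3,-2,-1,-1], [-1,-1,-2,-3,-3,-2,-1,0], [-1,-1,-2,-3,-2,-2,-2,-1], [-1,-1,-2,-3,-2,-2,-1,-1], [-1,-1,-2,-3,-2,-2,-1,0], [-1,-1,-2,-3,-2,-1,-1,-1], [-1,-1,-2,-3,-2,-1,-1,0], [-1,-1,-2,-3,-2,-1,0,0], [-1,-1,-2,-2,-2,-2,-2,-1], [-1,-1,-2,-2,-2,-2,-1,-1], [-1,-1,-2,-2,-2,-2,-1,0], [-1,-1,-2,-2,-2,-1,-1,-1], [-1,-1,-2,-2,-2,-1,-1,0], [-1,-1,-2,-2,-2,-1,0,0],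 [-1,-1,-2,-2,-1,-1,-1,-1], [-1,-1,-2,-2,-1,-1,-1,0], [-1,-1,-2,-2,-1,-1,0,0], [-1,-1,-2,-2,-1,0,0,0], [-1,-1,-1,-2,-2,-2,-2,-1], [-1,-1,-1,-2,-2,-2,-1,-1], [-1,-1,-1,-2,-2,-2,-1,0], [-1,-1,-1,-2,-2,-1,-1,-1], [-1,-1,-1,-2,-2,-1,-1,0], [-1,-1,-1,-2,-2,-1,0,0], [-1,-1,-1,-2,-1,-1,-1,-1], [-1,-1,-1,-2,-1,-1,-1,0], [-1,-1,-1,-2,-1,-1,0,0], [-1,-1,-1,-2,-1,0,0,0], [-1,-1,-1,-1,-1,-1,-1,-1], [-1,-1,-1,-1,-1,-1,-1,0], [-1,-1,-1,-1,-1,-1,0,0], [-1,-1,-1,-1,-1,0,0,0], [-1,-1,-1,-1,0,0,0,0], [-1,0,-1,-1,-1,-1,-1,-1], [-1,0,-1,-1,-1,-1,-1,0], [-1,0,-1,-1,-1,-1,0,0], [-1,0,-1,-1,-1,0,0,0], [-1,0,-1,-1,0,0,0,0], [-1,0,-1,0,0,0,0,0], [-1,0,0,0,0,0,0,0], [0,-1,-1,-2,-2,-2,-2,-1], [0,-1,-1,-2,-2,-2,-1,-1], [0,-1,-1,-2,-2,-2,-1,0], [0,-1,-1,-2,-2,-1,-1,-1], [0,-1,-1,-2,-2,-1,-1,0], [0,-1,-1,-2,-2,-1,0,0], [0,-1,-1,-2,-1,-1,-1,-1], [0,-1,-1,-2,-1,-1,-1,0], [0,-1,-1,-2,-1,-1,0,0],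 [0,-1,-1,-2,-1,0,0,0], [0,-1,-1,-1,-1,-1,-1,-1], [0,-1,-1,-1,-1,-1,-1,0], [0,-1,-1,-1,-1,-1,0,0], [0,-1,-1,-1,-1,0,0,0], [0,-1,-1,-1,0,0,0,0], [0,-1,0,-1,-1,-1,-1,-1], [0,-1,0,-1,-1,-1,-1,0], [0,-1,0,-1,-1,-1,0,0], [0,-1,0,-1,-1,0,0,0], [0,-1,0,-1,0,0,0,0], [0,-1,0,0,0,0,0,0], [0,0,-1,-1,-1,-1,-1,-1], [0,0,-1,-1,-1,-1,-1,0], [0,0,-1,-1,-1,-1,0,0], [0,0,-1,-1,-1,0,0,0], [0,0,-1,-1,0,0,0,0], [0,0,-1,0,0,0,0,0], [0,0,0,-1,-1,-1,-1,-1], [0,0,0,-1,-1,-1,-1,0], [0,0,0,-1,-1,-1,0,0], [0,0,0,-1,-1,0,0,0], [0,0,0,-1,0,0,0,0], [0,0,0,0,-1,-1,-1,-1], [0,0,0,0,-1,-1,-1,0], [0,0,0,0,-1,-1,0,0], [0,0,0,0,-1,0,0,0], [0,0,0,0,0,-1,-1,-1], [0,0,0,0,0,-1,-1,0], [0,0,0,0,0,-1,0,0], [0,0,0,0,0,0,-1,-1], [0,0,0,0,0,0,-1,0], [0,0,0,0,0,0,0,-1], [0,0,0,0,0,0,0,1], [0,0,0,0,0,0,1,0], [0,0,0,0,0,0,1,1], [0,0,0,0,0,1,0,0], [0,0,0,0,0,1,1,0], [0,0,0,0,0,1,1,1], [0,0,0,0,1,0,0,0], [0,0,0,0,1,1,0,0],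 [0,0,0,0,1,1,1,0], [0,0,0,0,1,1,1,1], [0,0,0,1,0,0,0,0], [0,0,0,1,1,0,0,0], [0,0,0,1,1,1,0,0], [0,0,0,1,1,1,1,0], [0,0,0,1,1,1,1,1], [0,0,1,0,0,0,0,0], [0,0,1,1,0,0,0,0], [0,0,1,1,1,0,0,0], [0,0,1,1,1,1,0,0], [0,0,1,1,1,1,1,0], [0,0,1,1,1,1,1,1], [0,1,0,0,0,0,0,0], [0,1,0,1,0,0,0,0], [0,1,0,1,1,0,0,0], [0,1,0,1,1,1,0,0], [0,1,0,1,1,1,1,0], [0,1,0,1,1,1,1,1], [0,1,1,1,0,0,0,0], [0,1,1,1,1,0,0,0], [0,1,1,1,1,1,0,0], [0,1,1,1,1,1,1,0], [0,1,1,1,1,1,1,1], [0,1,1,2,1,0,0,0], [0,1,1,2,1,1,0,0], [0,1,1,2,1,1,1,0], [0,1,1,2,1,1,1,1], [0,1,1,2,2,1,0,0], [0,1,1,2,2,1,1,0], [0,1,1,2,2,1,1,1], [0,1,1,2,2,2,1,0], [0,1,1,2,2,2,1,1], [0,1,1,2,2,2,2,1], [1,0,0,0,0,0,0,0], [1,0,1,0,0,0,0,0], [1,0,1,1,0,0,0,0], [1,0,1,1,1,0,0,0], [1,0,1,1,1,1,0,0], [1,0,1,1,1,1,1,0], [1,0,1,1,1,1,1,1], [1,1,1,1,0,0,0,0], [1,1,1,1,1,0,0,0], [1,1,1,1,1,1,0,0], [1,1,1,1,1,1,1,0], [1,1,1,1,1,1,1,1], [1,1,1,2,1,0,0,0],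 [1,1,1,2,1,1,0,0], [1,1,1,2,1,1,1,0], [1,1,1,2,1,1,1,1], [1,1,1,2,2,1,0,0], [1,1,1,2,2,1,1,0], [1,1,1,2,2,1,1,1], [1,1,1,2,2,2,1,0], [1,1,1,2,2,2,1,1], [1,1,1,2,2,2,2,1], [1,1,2,2,1,0,0,0], [1,1,2,2,1,1,0,0], [1,1,2,2,1,1,1,0], [1,1,2,2,1,1,1,1], [1,1,2,2,2,1,0,0], [1,1,2,2,2,1,1,0], [1,1,2,2,2,1,1,1], [1,1,2,2,2,2,1,0], [1,1,2,2,2,2,1,1], [1,1,2,2,2,2,2,1], [1,1,2,3,2,1,0,0], [1,1,2,3,2,1,1,0], [1,1,2,3,2,1,1,1], [1,1,2,3,2,2,1,0], [1,1,2,3,2,2,1,1], [1,1,2,3,2,2,2,1], [1,1,2,3,3,2,1,0], [1,1,2,3,3,2,1,1], [1,1,2,3,3,2,2,1], [1,1,2,3,3,3,2,1], [1,2,2,3,2,1,0,0], [1,2,2,3,2,1,1,0], [1,2,2,3,2,1,1,1], [1,2,2,3,2,2,1,0], [1,2,2,3,2,2,1,1], [1,2,2,3,2,2,2,1], [1,2,2,3,3,2,1,0], [1,2,2,3,3,2,1,1], [1,2,2,3,3,2,2,1], [1,2,2,3,3,3,2,1], [1,2,2,4,3,2,1,0], [1,2,2,4,3,2,1,1], [1,2,2,4,3,2,2,1], [1,2,2,4,3,3,2,1], [1,2,2,4,4,3,2,1], [1,2,3,4,3,2,1,0], [1,2,3,4,3,2,1,1], [1,2,3,4,3,2,2,1],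 [1,2,3,4,3,3,2,1], [1,2,3,4,4,3,2,1], [1,2,3,5,4,3,2,1], [1,3,3,5,4,3,2,1], [2,2,3,4,3,2,1,0], [2,2,3,4,3,2,1,1], [2,2,3,4,3,2,2,1], [2,2,3,4,3,3,2,1], [2,2,3,4,4,3,2,1], [2,2,3,5,4,3,2,1], [2,2,4,5,4,3,2,1], [2,3,3,5,4,3,2,1], [2,3,4,5,4,3,2,1], [2,3,4,6,4,3,2,1], [2,3,4,6,5,3,2,1], [2,3,4,6,5,4,2,1], [2,3,4,6,5,4,3,1], [2,3,4,6,5,4,3,2]]"

definition inv_cartan_E8 :: "real list list" where "inv_cartan_E8 = [[4, 5, 7, 10, 8, 6, 4, 2], [5, 8, 10, 15, 12, 9, 6, 3], [7, 10, 14, 20, 16, 12, 8, 4], [10, 15, 20, 30, 24, 18, 12, 6], [8, 12, 16, 24, 20, 15, 10, 5], [6, 9, 12, 18, 15, 12, 8, 4], [4, 6, 8, 12, 10, 8, 6, 3], [2, 3, 4, 6, 5, 4, 3, 2]]"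

lemma highest_root_E8: "highest_root TE 8 = vec_of_list [2,3,4,6,5,4,3,2]"
  by (rule highest_root_certificate[where ist=1 and ps="[3,4,2,5,4,3,6,5,4,2,7,6,5,4,3,1,8,7,6,5,4,2,3,4,5,6,7,8]" and R=roots_E8]; code_simp)

lemma grading_set_E8: "grading_set TE 8 = {8}"
proof -
  have "grading_set TE 8 = set [8]" by (rule grading_set_certificate[OF highest_root_E8]; code_simp)
  then show ?thesis by simp
qed

lemma inverse_cartan_E8: "inverse_cartan TE 8 (mat_entry inv_cartan_E8)"
  by (rule inverse_cartan_certificate; code_simp)

lemma grading_claims_E8:
  assumes "dominant 8 c"
  shows "grading_claims TE 8 c"
proof -
  have "\<forall>k\<in>set [1..<9]. 2 \<le> mat_entry inv_cartan_E8 8 k \<and> (mat_entry inv_cartan_E8 8 k = 1 \<longleftrightarrow> k \<in> set [])"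
    by code_simp
  moreover have "k \<in> {1..8} \<longleftrightarrow> k \<in> set [1..<9]" for k by auto
  ultimately have m: "2 \<le> mat_entry inv_cartan_E8 8 k \<and> (mat_entry inv_cartan_E8 8 k = 1 \<longleftrightarrow> k \<in> set [])" if "k \<in> {1..8}" for k
    using that by blast
  show ?thesis
  proof (rule grading_claimsI[where m = "mat_entry inv_cartan_E8 8", OF _ _ _ _ _ _ assms])
    show "grading_set TE 8 = expected_I TE 8" using grading_set_E8 by (simp add: expected_I_def)
    show "eval_E TE 8 c = (\<Sum>k\<in>{1..8}. mat_entry inv_cartan_E8 8 k * of_int (c k))" for c
      using eval_E_inverse_cartan[OF inverse_cartan_E8] grading_set_E8 by simp
    show "\<And>k. k \<in> {1..8} \<Longrightarrow> 1 \<le> mat_entry inv_cartan_E8 8 k" using m by fastforce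
    show "\<And>c. listed TE 8 c = (\<exists>k\<in>{1..8}. c = unitv k \<and> mat_entry inv_cartan_E8 8 k = 1)"
      using m by (auto simp: listed_def)
    show "\<And>k. k \<in> {1..8} \<Longrightarrow> mat_entry inv_cartan_E8 8 k = 1 \<Longrightarrow>
        \<exists>k'\<in>{1..8}. mat_entry inv_cartan_E8 8 k' = 1 \<and> dual_hw TE 8 (unitv k) = unitv k'"
      using m  by auto
    show "TE = TE \<and> (8::nat) = 8 \<Longrightarrow> \<forall>k\<in>{1..8}. 2 \<le> mat_entry inv_cartan_E8 8 k" using m by auto
  qed
qed

definition roots_F4 :: "int list list" where "roots_F4 = [[-2,-3,-4,-2], [-1,-3,-4,-2], [-1,-2,-4,-2], [-1,-2,-3,-2], [-1,-2,-3,-1], [-1,-2,-2,-2], [-1,-2,-2,-1], [-1,-2,-2,0], [-1,-1,-2,-2], [-1,-1,-2,-1], [-1,-1,-2,0], [-1,-1,-1,-1], [-1,-1,-1,0], [-1,-1,0,0], [-1,0,0,0], [0,-1,-2,-2], [0,-1,-2,-1], [0,-1,-2,0], [0,-1,-1,-1], [0,-1,-1,0], [0,-1,0,0], [0,0,-1,-1], [0,0,-1,0], [0,0,0,-1], [0,0,0,1], [0,0,1,0], [0,0,1,1], [0,1,0,0], [0,1,1,0], [0,1,1,1], [0,1,2,0], [0,1,2,1], [0,1,2,2], [1,0,0,0], [1,1,0,0], [1,1,1,0], [1,1,1,1], [1,1,2,0], [1,1,2,1], [1,1,2,2], [1,2,2,0], [1,2,2,1], [1,2,2,2], [1,2,3,1],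 [1,2,3,2], [1,2,4,2], [1,3,4,2], [2,3,4,2]]"

definition inv_cartan_F4 :: "real list list" where "inv_cartan_F4 = [[2, 3, 2, 1], [3, 6, 4, 2], [4, 8, 6, 3], [2, 4, 3, 2]]"

lemma highest_root_F4: "highest_root TF 4 = vec_of_list [2,3,4,2]"
  by (rule highest_root_certificate[where ist=1 and ps="[2,3,2,4,3,2,1]" and R=roots_F4]; code_simp)

lemma grading_set_F4: "grading_set TF 4 = {1}"
proof -
  have "grading_set TF 4 = set [1]" by (rule grading_set_certificate[OF highest_root_F4]; code_simp)
  then show ?thesis by simp
qed

lemma inverse_cartan_F4: "inverse_cartan TF 4 (mat_entry inv_cartan_F4)"
  by (rule inverse_cartan_certificate; code_simp)

definition weyl_orbit_F4_4 :: "int list list" where "weyl_orbit_F4_4 = [[-1,0,0,1], [-1,0,1,-1], [-1,0,1,0], [-1,1,-1,0], [-1,1,-1,1], [-1,1,0,-1], [0,-1,1,0], [0,-1,1,1], [0,-1,2,-1], [0,0,-1,1], [0,0,-1,2], [0,0,0,-1], [0,0,0,1], [0,0,1,-2], [0,0,1,-1], [0,1,-2,1], [0,1,-1,-1], [0,1,-1,0], [1,-1,0,1], [1,-1,1,-1], [1,-1,1,0], [1,0,-1,0], [1,0,-1,1], [1,0,0,-1]]"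

lemma dual_hw_F4_4: "dual_hw TF 4 (unitv 4) = unitv 4"
  by (rule dual_hw_certificate[OF inverse_cartan_F4, where OL = weyl_orbit_F4_4]) (code_simp | simp)+

lemma grading_claims_F4:
  assumes "dominant 4 c"
  shows "grading_claims TF 4 c"
proof -
  have "\<forall>k\<in>set [1..<5]. 1 \<le> mat_entry inv_cartan_F4 1 k \<and> (mat_entry inv_cartan_F4 1 k = 1 \<longleftrightarrow> k \<in> set [4])"
    by code_simp
  moreover have "k \<in> {1..4} \<longleftrightarrow> k \<in> set [1..<5]" for k by auto
  ultimately have m: "1 \<le> mat_entry inv_cartan_F4 1 k \<and> (mat_entry inv_cartan_F4 1 k = 1 \<longleftrightarrow> k \<in> set [4])" if "k \<in> {1..4}" for k
    using that by blast
  show ?thesis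
  proof (rule grading_claimsI[where m = "mat_entry inv_cartan_F4 1", OF _ _ _ _ _ _ assms])
    show "grading_set TF 4 = expected_I TF 4" using grading_set_F4 by (simp add: expected_I_def)
    show "eval_E TF 4 c = (\<Sum>k\<in>{1..4}. mat_entry inv_cartan_F4 1 k * of_int (c k))" for c
      using eval_E_inverse_cartan[OF inverse_cartan_F4] grading_set_F4 by simp
    show "\<And>k. k \<in> {1..4} \<Longrightarrow> 1 \<le> mat_entry inv_cartan_F4 1 k" using m by fastforce
    show "\<And>c. listed TF 4 c = (\<exists>k\<in>{1..4}. c = unitv k \<and> mat_entry inv_cartan_F4 1 k = 1)"
      using m by (auto simp: listed_def)
    show "\<And>k. k \<in> {1..4} \<Longrightarrow> mat_entry inv_cartan_F4 1 k = 1 \<Longrightarrow>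
        \<exists>k'\<in>{1..4}. mat_entry inv_cartan_F4 1 k' = 1 \<and> dual_hw TF 4 (unitv k) = unitv k'"
      using m dual_hw_F4_4 by auto
    show "TF = TE \<and> (4::nat) = 8 \<Longrightarrow> \<forall>k\<in>{1..4}. 2 \<le> mat_entry inv_cartan_F4 1 k" using m by auto
  qed
qed

definition roots_G2 :: "int list list" where "roots_G2 = [[-3,-2], [-3,-1], [-2,-1], [-1,-1], [-1,0], [0,-1], [0,1], [1,0], [1,1], [2,1], [3,1], [3,2]]"

definition inv_cartan_G2 :: "real list list" where "inv_cartan_G2 = [[2, 3], [1, 2]]"

lemma highest_root_G2: "highest_root TG 2 = vec_of_list [3,2]"
  by (rule highest_root_certificate[where ist=2 and ps="[1,2]" and R=roots_G2]; code_simp)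

lemma grading_set_G2: "grading_set TG 2 = {2}"
proof -
  have "grading_set TG 2 = set [2]" by (rule grading_set_certificate[OF highest_root_G2]; code_simp)
  then show ?thesis by simp
qed

lemma inverse_cartan_G2: "inverse_cartan TG 2 (mat_entry inv_cartan_G2)"
  by (rule inverse_cartan_certificate; code_simp)

definition weyl_orbit_G2_1 :: "int list list" where "weyl_orbit_G2_1 = [[-2,1], [-1,0], [-1,1], [1,-1], [1,0], [2,-1]]"

lemma dual_hw_G2_1: "dual_hw TG 2 (unitv 1) = unitv 1"
  by (rule dual_hw_certificate[OF inverse_cartan_G2, where OL = weyl_orbit_G2_1]) (code_simp | simp)+

lemma grading_claims_G2:
  assumes "dominant 2 c"
  shows "grading_claims TG 2 c"
proof -
  have "\<forall>k\<in>set [1..<3]. 1 \<le> mat_entry inv_cartan_G2 2 k \<and> (mat_entry inv_cartan_G2 2 k = 1 \<longleftrightarrow> k \<in> set [1])"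
    by code_simp
  moreover have "k \<in> {1..2} \<longleftrightarrow> k \<in> set [1..<3]" for k by auto
  ultimately have m: "1 \<le> mat_entry inv_cartan_G2 2 k \<and> (mat_entry inv_cartan_G2 2 k = 1 \<longleftrightarrow> k \<in> set [1])" if "k \<in> {1..2}" for k
    using that by blast
  show ?thesis
  proof (rule grading_claimsI[where m = "mat_entry inv_cartan_G2 2", OF _ _ _ _ _ _ assms])
    show "grading_set TG 2 = expected_I TG 2" using grading_set_G2 by (simp add: expected_I_def)
    show "eval_E TG 2 c = (\<Sum>k\<in>{1..2}. mat_entry inv_cartan_G2 2 k * of_int (c k))" for c
      using eval_E_inverse_cartan[OF inverse_cartan_G2] grading_set_G2 by simp
    show "\<And>k. k \<in> {1..2} \<Longrightarrow> 1 \<le> mat_entry inv_cartan_G2 2 k" using m by fastforce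
    show "\<And>c. listed TG 2 c = (\<exists>k\<in>{1..2}. c = unitv k \<and> mat_entry inv_cartan_G2 2 k = 1)"
      using m by (auto simp: listed_def)
    show "\<And>k. k \<in> {1..2} \<Longrightarrow> mat_entry inv_cartan_G2 2 k = 1 \<Longrightarrow>
        \<exists>k'\<in>{1..2}. mat_entry inv_cartan_G2 2 k' = 1 \<and> dual_hw TG 2 (unitv k) = unitv k'"
      using m dual_hw_G2_1 by auto
    show "TG = TE \<and> (2::nat) = 8 \<Longrightarrow> \<forall>k\<in>{1..2}. 2 \<le> mat_entry inv_cartan_G2 2 k" using m by auto
  qed
qed

end

theorem lemma3p12:
  fixes t :: ltype and r :: nat and c :: "nat \<Rightarrow> int"
  assumes "valid_type t r"
    and "dominant r c"
  shows "grading_set t r = expected_I t r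
    \<and> (eval_E t r c = 1 \<longleftrightarrow> listed t r c)
    \<and> (listed t r c \<longrightarrow> eval_E t r (dual_hw t r c) = 1)
    \<and> (t = TE \<and> r = 8 \<and> c \<noteq> (\<lambda>_. 0) \<longrightarrow> eval_E t r c > 1)"
proof -
  from assms(1) consider "t = TA" | "t = TB" | "t = TC" | "t = TD"
    | "t = TE" "r = 6" | "t = TE" "r = 7" | "t = TE" "r = 8" | "t = TF" "r = 4" | "t = TG" "r = 2"
    by (cases t) (auto simp: valid_type_def)
  then have "grading_claims t r c"
    using assms by cases (auto intro: grading_claims_A grading_claims_B grading_claims_C
      grading_claims_D grading_claims_E6 grading_claims_E7 grading_claims_E8 grading_claims_F4
      grading_claims_G2)
  then show ?thesis unfolding grading_claims_def .
qed

end
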